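(* $\texttt{FP} \subseteq \llbracket \mathrm{SAFE} \cap \mathrm{AP} \rrbracket$. That is, for every function $f : \mathbb{W}^k \to \mathbb{W}$ computable by a deterministic Turing machine in polynomial time, there exists a program $\mathtt{P}$ with $k$ parameters that is safe and aperiodic and satisfies $\llbracket \mathtt{P} \rrbracket = f$.
   Context: Words and values. Fix a finite alphabet $\Sigma \supseteq \{0,1\}$ and let $\mathbb{W} = \Sigma^*$. Here $\epsilon$ is the empty word, $|w|$ is the length of $w$, and $1^n$ is the word consisting of $n$ ones. A word $w$ counts as true iff $w = 1$; every other word (written $\underline{0}$) counts as false. Write $v \unlhd w$ if $v$ is a factor (subword) of $w$, i.e. $w = u v u'$ for some words $u, u'$. Operators. Fix a countable set $\mathbb{V}$ of variables and a set $\mathbb{O}$ of operators. Each $\mathsf{op} \in \mathbb{O}$ has an arity $ar(\mathsf{op})$ and a total function $\llbracket \mathsf{op} \rrbracket : \mathbb{W}^{ar(\mathsf{op})} \to \mathbb{W}$. The set $\mathbb{O}$ contains at least the following: $=, <, \le$ (comparisons in shortlex order, returning $0$ or $1$); the constant $0$; unary successor $+1$ and unary predecessor $-1$ (acting on $1^n$ and returning $\epsilon$ on words that are not of the form $1^n$); $\mathsf{not}$, $\mathsf{and}$, $\mathsf{or}$; and the usual polynomial-time word operations (e.g. head, tail, appending a character). Syntax. - Expressions: $e ::= x \mid \mathsf{op}(e_1,\dots,e_{ar(\mathsf{op})}) \mid \mathsf{declass}(e,e)$. - Statements: $s ::= \mathtt{skip} \mid x := e \mid s;s \mid \mathtt{if}(e)\{s\}\mathtt{else}\{s\}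 \mid \mathtt{while}(e)\{s\} \mid \mathtt{break}(e)$. - Programs: $\mathtt{prog}(x_1,\dots,x_k)\{s\ \mathtt{return}\ y\}$. The statement $s$ is written $\mathrm{body}(\mathtt{P})$. Semantics. - A store $\mu$ is a total map $\mathbb{V} \to \mathbb{W}$. The store $\mu_\emptyset$ maps every variable to $\epsilon$, and $\mu[x \leftarrow w]$ denotes an update. - Expressions: $x$ evaluates to $\mu(x)$; $\mathsf{op}(\bar e)$ evaluates to $\llbracket\mathsf{op}\rrbracket$ applied to the values of $\bar e$; if $e_1, e_2$ evaluate to $w_1, w_2$, then $\mathsf{declass}(e_1,e_2)$ evaluates to $1^{\min(|w_1|,|w_2|)}$. - Statements evaluate, by big-step rules, from a store to a pair $(\square,\mu')$ with flag $\square \in \{\top,\bot\}$, where $\bot$ means a break fired: - $\mathtt{skip}$ gives $(\top,\mu)$. - $x := e$ gives $(\top,\mu[x\leftarrow w])$, where $w$ is the value of $e$. - For $s_1;s_2$: if $s_1$ gives $(\bot,\mu')$, the result is $(\bot,\mu')$; if it gives $(\top,\mu')$, the result is that of $s_2$ run from $\mu'$. - $\mathtt{if}(e)\{s_1\}\mathtt{else}\{s_0\}$ runs $s_1$ if $e$ evaluates to $1$, and $s_0$ otherwise. - $\mathtt{while}(e)\{s\}$ gives $(\top,\mu)$ if $e$ evaluates to a word $\neq 1$. Otherwise it evaluates $s;\mathtt{while}(e)\{s\}$ from $\mu$ to some $(\square,\mu')$ and returns $(\top,\mu')$; thus a break exits the innermost loop. - $\mathtt{break}(e)$ gives $(\bot,\mu)$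 if $e$ evaluates to $1$, and $(\top,\mu)$ otherwise. - For a configuration $c$ (a store with an expression or a statement), $\pi_c$ is the possibly infinite evaluation (derivation) tree with root $c$. Here $\sqsubseteq$ means "is a subtree of" and $\sqsubset$ means "is a strict subtree of". - A program $\mathtt{P} = \mathtt{prog}(\bar x)\{s\ \mathtt{return}\ y\}$ computes the partial function $\llbracket \mathtt{P}\rrbracket(\bar w) = \mu'(y)$, where $(\mu_\emptyset[\bar x\leftarrow \bar w], s)$ evaluates to final store $\mu'$. For a set $S$ of programs, $\llbracket S \rrbracket = \{\llbracket \mathtt{P}\rrbracket \mid \mathtt{P} \in S\}$. Operator classes. Let $\mathsf{op}$ have arity $k$. - $\mathsf{op}$ is neutral if either $\llbracket\mathsf{op}\rrbracket$ has values in $\{0,1\}$, or there is $i \le k$ with $\llbracket\mathsf{op}\rrbracket(\bar w) \unlhd w_i$ for all $\bar w$. - $\mathsf{op}$ is positive if there is a constant $c$ with $|\llbracket\mathsf{op}\rrbracket(\bar w)| \le \max_i |w_i| + c$ for all $\bar w$. - $\mathsf{op}$ is polynomial if there is a polynomial $P$ with $|\llbracket\mathsf{op}\rrbracket(\bar w)| \le P(\max_i|w_i|)$ for all $\bar w$. - "Positive" is reserved for positive and not neutral; "polynomial" is reserved for polynomial and not positive. Typing environments. Levels are natural numbers. - A variable typing environment $\Gamma$ is a finite map $\mathbb{V} \to \mathbb{N}$. - An operator typing environment $\Delta$ maps each $\mathsf{op}$ to a map $\Delta(\mathsf{op}) : \mathbb{N}^2 \to \mathcal{P}(\mathbb{N}^{ar(\mathsf{op})+1})$.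 Tuples are written $\tau_1 \to\dots\to \tau_{k+1}$. Typing judgments. Judgments have the form $\Gamma,\Delta \vdash^{\tau_{in}}_{\tau_{out}} b : \tau$. Premises use the same $\tau_{in},\tau_{out}$ as the conclusion unless stated otherwise. The rules are: - (VAR) If $\Gamma(x)=\tau$, then $x:\tau$. - (OP) If $\tau_1\to\dots\to\tau_{k+1} \in \Delta(\mathsf{op})(\tau_{in},\tau_{out})$ and $e_i:\tau_i$ for all $i$, then $\mathsf{op}(\bar e):\tau_{k+1}$. - (DCL) If $e_1:\tau_1$, $e_2:\tau_{out}$ and $\tau_1\le\tau\le\tau_{out}$, then $\mathsf{declass}(e_1,e_2):\tau$. - (SUB) If statement $s:\tau_1$ and $\tau_1\le\tau_2$, then $s:\tau_2$. - (SKP) $\mathtt{skip}:0$. - (ASG) If $\Gamma(x)=\tau_1$, $e:\tau_2$, and ($\tau_{out}=0$ or $\tau_1\le\tau_2$), then $x:=e:\tau_1$. - (SEQ) If $s_1:\tau$ and $s_2:\tau$, then $s_1;s_2:\tau$. - (CND) If $e:\tau$, $s_1:\tau$ and $s_0:\tau$, then $\mathtt{if}(e)\{s_1\}\mathtt{else}\{s_0\}:\tau$. - (WH) If $\Gamma,\Delta\vdash^{\tau}_{\tau_{out}} e:\tau$, $\Gamma,\Delta\vdash^{\tau}_{\tau_{out}} s:\tau$ and $1\le\tau\le\tau_{out}$, then $\Gamma,\Delta\vdash^{\tau_{in}}_{\tau_{out}}\mathtt{while}(e)\{s\}:\tau$. - (WI) If $\Gamma,\Delta\vdash^{\tau}_{\tau}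 e:\tau$, $\Gamma,\Delta\vdash^{\tau}_{\tau} s:\tau$ and $1\le\tau$, then $\Gamma,\Delta\vdash^{0}_{0}\mathtt{while}(e)\{s\}:\tau$. - (BRK) If $e:\tau$ and $\tau_{in}\le\tau$, then $\mathtt{break}(e):\tau_{in}$. Safe environments and programs. - $\Delta$ is safe if every $\mathsf{op}\in dom(\Delta)$ is neutral, positive or polynomial, $\llbracket\mathsf{op}\rrbracket$ is polynomial-time computable, and for all $(\tau_{in},\tau_{out})$ and all $\tau_1\to\dots\to\tau_{k+1}\in\Delta(\mathsf{op})(\tau_{in},\tau_{out})$: - if $\mathsf{op}$ is neutral, then $\tau_{k+1}\le\min_i\tau_i$; - if $\mathsf{op}$ is positive, then $\tau_{k+1}\le\min_i\tau_i$ and ($\tau_{k+1}<\tau_{in}$ or $\tau_{k+1}=0$); - if $\mathsf{op}$ is polynomial, then $\tau_{out}=0$. - A program $\mathtt{P}$ is safe if there exist a safe $\Delta$, a $\Gamma$ and a level $\tau$ with $\Gamma,\Delta\vdash^0_0 \mathrm{body}(\mathtt{P}):\tau$. $\mathrm{SAFE}$ is the set of safe programs. Aperiodicity. - Undeclassified variables of an expression are defined by $U(x)=\{x\}$, $U(\mathsf{op}(\bar e))=\bigcup_i U(e_i)$ and $U(\mathsf{declass}(e_1,e_2))=U(e_2)$. - Stores satisfy $\mu\equiv_e\mu'$ if $\mu(x)=\mu'(x)$ for all $x\in U(e)$. - $\mathtt{P}$ is aperiodic if for no store $\mu$ are there trees $\pi_{(\mu',s')},\pi_{(\mu'',s')}\sqsubseteq\pi_{(\mu,\mathrm{body}(\mathtt{P}))}$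 with $s'=\mathtt{while}(e)\{s''\}$, $\pi_{(\mu'',s')}\sqsubset\pi_{(\mu',s')}$ and $\mu'\equiv_e\mu''$. $\mathrm{AP}$ is the set of aperiodic programs. Complexity class. $\texttt{FP}$ is the class of functions $\mathbb{W}^k\to\mathbb{W}$ computable in polynomial time. *)

theory Defs
  imports Main "HOL-Library.Sublist" "HOL-Computational_Algebra.Polynomial"
begin

text \<open>The finite alphabet Sigma is the (finite, linearly ordered) type 'a;
  it contains two distinct symbols 0 and 1. Words are lists over it.
  The linear order on symbols is used for the shortlex order.\<close>

class alphabet = finite + linorder +
  fixes sym0 :: 'a and sym1 :: 'a
  assumes sym0_neq_sym1: "sym0 \<noteq> sym1"

type_synonym 'c word = "'c list"

definition bw :: "bool \<Rightarrow> 'c::alphabet word" where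
  "bw b = (if b then [sym1] else [sym0])"

definition shortlex_less :: "'c::alphabet word \<Rightarrow> 'c word \<Rightarrow> bool" where
  "shortlex_less u v \<longleftrightarrow> length u < length v \<or>
     (length u = length v \<and> (u, v) \<in> lexord {(a, b). a < b})"

definition is_unary :: "'c::alphabet word \<Rightarrow> bool" where
  "is_unary w \<longleftrightarrow> (\<exists>n. w = replicate n sym1)"

datatype 'c operator = Operator (op_ar: nat) (op_sem: "'c list list \<Rightarrow> 'c list")

definition op_eq :: "'c::alphabet operator" where
  "op_eq = Operator 2 (\<lambda>ws. bw (ws ! 0 = ws ! 1))"
definition op_lt :: "'c::alphabet operator" where
  "op_lt = Operator 2 (\<lambda>ws. bw (shortlex_less (ws ! 0) (ws ! 1)))"
definition op_le :: "'c::alphabet operator" where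
  "op_le = Operator 2 (\<lambda>ws. bw (shortlex_less (ws ! 0) (ws ! 1) \<or> ws ! 0 = ws ! 1))"
definition op_zero :: "'c::alphabet operator" where
  "op_zero = Operator 0 (\<lambda>ws. [sym0])"
definition op_succ :: "'c::alphabet operator" where
  "op_succ = Operator 1 (\<lambda>ws. if is_unary (ws ! 0) then sym1 # ws ! 0 else [])"
definition op_pred :: "'c::alphabet operator" where
  "op_pred = Operator 1 (\<lambda>ws. if is_unary (ws ! 0) then tl (ws ! 0) else [])"
definition op_not :: "'c::alphabet operator" where
  "op_not = Operator 1 (\<lambda>ws. bw (ws ! 0 \<noteq> [sym1]))"
definition op_and :: "'c::alphabet operator" where
  "op_and = Operator 2 (\<lambda>ws. bw (ws ! 0 = [sym1] \<and> ws ! 1 = [sym1]))"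
definition op_or :: "'c::alphabet operator" where
  "op_or = Operator 2 (\<lambda>ws. bw (ws ! 0 = [sym1] \<or> ws ! 1 = [sym1]))"
definition op_head :: "'c::alphabet operator" where
  "op_head = Operator 1 (\<lambda>ws. take 1 (ws ! 0))"
definition op_tail :: "'c::alphabet operator" where
  "op_tail = Operator 1 (\<lambda>ws. tl (ws ! 0))"
definition op_cons :: "'c::alphabet \<Rightarrow> 'c operator" where
  "op_cons c = Operator 1 (\<lambda>ws. c # ws ! 0)"

definition required_ops :: "'c::alphabet operator set" where
  "required_ops = {op_eq, op_lt, op_le, op_zero, op_succ, op_pred, op_not, op_and, op_or,
                   op_head, op_tail} \<union> range op_cons"

section \<open>Polynomial-time computability (deterministic single-tape Turing machines)\<close>

datatype 'c tsym = Blank | Sep | Sym 'c | Aux nat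
datatype dir = Left | Right | Stay

text \<open>States are 0..<tm_nstates; 0 is the start state, 1 the halting state.
  Auxiliary tape symbols are Aux i with i < tm_naux.\<close>
record 'c tm =
  tm_nstates :: nat
  tm_naux :: nat
  tm_delta :: "nat \<Rightarrow> 'c tsym \<Rightarrow> nat \<times> 'c tsym \<times> dir"

definition tm_valid_sym :: "'c tm \<Rightarrow> 'c tsym \<Rightarrow> bool" where
  "tm_valid_sym M a = (case a of Aux i \<Rightarrow> i < tm_naux M | _ \<Rightarrow> True)"

definition tm_wf :: "'c tm \<Rightarrow> bool" where
  "tm_wf M \<longleftrightarrow> 2 \<le> tm_nstates M \<and>
     (\<forall>q a. q < tm_nstates M \<and> tm_valid_sym M a \<longrightarrow>
        fst (tm_delta M q a) < tm_nstates M \<and> tm_valid_sym M (fst (snd (tm_delta M q a))))"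

type_synonym 'c tconf = "nat \<times> (int \<Rightarrow> 'c tsym) \<times> int"

definition dir_off :: "dir \<Rightarrow> int" where
  "dir_off d = (case d of Left \<Rightarrow> -1 | Right \<Rightarrow> 1 | Stay \<Rightarrow> 0)"

definition tm_step :: "'c tm \<Rightarrow> 'c tconf \<Rightarrow> 'c tconf" where
  "tm_step M c = (case c of (q, tp, h) \<Rightarrow>
     if q = 1 then (q, tp, h)
     else (case tm_delta M q (tp h) of (q', a, d) \<Rightarrow> (q', tp(h := a), h + dir_off d)))"

definition tm_input :: "'c word list \<Rightarrow> 'c tsym list" where
  "tm_input ws = concat (map (\<lambda>w. map Sym w @ [Sep]) ws)"

definition tm_init :: "'c word list \<Rightarrow> 'c tconf" where
  "tm_init ws = (0, (\<lambda>i. if 0 \<le> i \<and> i < int (length (tm_input ws))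
                          then tm_input ws ! nat i else Blank), 0)"

definition is_Sym :: "'c tsym \<Rightarrow> bool" where
  "is_Sym a = (case a of Sym _ \<Rightarrow> True | _ \<Rightarrow> False)"

definition the_Sym :: "'c tsym \<Rightarrow> 'c" where
  "the_Sym a = (case a of Sym c \<Rightarrow> c | _ \<Rightarrow> undefined)"

definition tm_output :: "'c tconf \<Rightarrow> 'c word" where
  "tm_output c = (case c of (q, tp, h) \<Rightarrow>
     map (\<lambda>i. the_Sym (tp (h + int i))) [0..<(LEAST n. \<not> is_Sym (tp (h + int n)))])"

definition poly_time_computable :: "nat \<Rightarrow> ('c word list \<Rightarrow> 'c word) \<Rightarrow> bool" where
  "poly_time_computable k f \<longleftrightarrow>
     (\<exists>(M::'c tm) (p::nat poly). tm_wf M \<and>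
        (\<forall>ws. length ws = k \<longrightarrow>
           (\<exists>t. t \<le> poly p (sum_list (map length ws)) \<and>
                fst ((tm_step M ^^ t) (tm_init ws)) = 1 \<and>
                tm_output ((tm_step M ^^ t) (tm_init ws)) = f ws)))"

definition FP :: "(nat \<times> ('c word list \<Rightarrow> 'c word)) set" where
  "FP = {(k, f). poly_time_computable k f}"

definition maxlen :: "'c word list \<Rightarrow> nat" where
  "maxlen ws = foldr max (map length ws) 0"

definition neutral_op :: "'c::alphabet operator \<Rightarrow> bool" where
  "neutral_op op \<longleftrightarrow>
     (\<forall>ws. length ws = op_ar op \<longrightarrow> op_sem op ws \<in> {[sym0], [sym1]}) \<or>
     (\<exists>i < op_ar op. \<forall>ws. length ws = op_ar op \<longrightarrow> sublist (op_sem op ws) (ws ! i))"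

definition positive_op :: "'c operator \<Rightarrow> bool" where
  "positive_op op \<longleftrightarrow>
     (\<exists>c. \<forall>ws. length ws = op_ar op \<longrightarrow> length (op_sem op ws) \<le> maxlen ws + c)"

definition polynomial_op :: "'c operator \<Rightarrow> bool" where
  "polynomial_op op \<longleftrightarrow>
     (\<exists>P :: nat poly. \<forall>ws. length ws = op_ar op \<longrightarrow> length (op_sem op ws) \<le> poly P (maxlen ws))"

type_synonym var = nat

datatype 'c expr = Var var | Op "'c operator" "'c expr list" | Declass "'c expr" "'c expr"

datatype 'c stmt = Skip | Assign var "'c expr" | Seq "'c stmt" "'c stmt"
  | If "'c expr" "'c stmt" "'c stmt" | While "'c expr" "'c stmt" | Break "'c expr"

record 'c prog =
  params :: "var list"
  body :: "'c stmt"
  ret :: var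

section \<open>Semantics\<close>

type_synonym 'c store = "var \<Rightarrow> 'c word"

fun eval_e :: "'c::alphabet store \<Rightarrow> 'c expr \<Rightarrow> 'c word" where
  "eval_e \<mu> (Var x) = \<mu> x"
| "eval_e \<mu> (Op op es) = op_sem op (map (eval_e \<mu>) es)"
| "eval_e \<mu> (Declass e1 e2) =
     replicate (min (length (eval_e \<mu> e1)) (length (eval_e \<mu> e2))) sym1"

text \<open>Big-step semantics; the flag True is top, False is bot (a break fired).\<close>
inductive eval_s :: "'c::alphabet store \<Rightarrow> 'c stmt \<Rightarrow> bool \<Rightarrow> 'c store \<Rightarrow> bool" where
  ESkip: "eval_s \<mu> Skip True \<mu>"
| EAssign: "eval_s \<mu> (Assign x e) True (\<mu>(x := eval_e \<mu> e))"
| ESeqBrk: "eval_s \<mu> s1 False \<mu>' \<Longrightarrow> eval_s \<mu> (Seq s1 s2) False \<mu>'"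
| ESeq: "eval_s \<mu> s1 True \<mu>' \<Longrightarrow> eval_s \<mu>' s2 b \<mu>'' \<Longrightarrow> eval_s \<mu> (Seq s1 s2) b \<mu>''"
| EIfT: "eval_e \<mu> e = [sym1] \<Longrightarrow> eval_s \<mu> s1 b \<mu>' \<Longrightarrow> eval_s \<mu> (If e s1 s0) b \<mu>'"
| EIfF: "eval_e \<mu> e \<noteq> [sym1] \<Longrightarrow> eval_s \<mu> s0 b \<mu>' \<Longrightarrow> eval_s \<mu> (If e s1 s0) b \<mu>'"
| EWhileF: "eval_e \<mu> e \<noteq> [sym1] \<Longrightarrow> eval_s \<mu> (While e s) True \<mu>"
| EWhileT: "eval_e \<mu> e = [sym1] \<Longrightarrow> eval_s \<mu> (Seq s (While e s)) b \<mu>' \<Longrightarrow>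
             eval_s \<mu> (While e s) True \<mu>'"
| EBreakT: "eval_e \<mu> e = [sym1] \<Longrightarrow> eval_s \<mu> (Break e) False \<mu>"
| EBreakF: "eval_e \<mu> e \<noteq> [sym1] \<Longrightarrow> eval_s \<mu> (Break e) True \<mu>"

definition store_empty :: "'c::alphabet store" where
  "store_empty = (\<lambda>x. [])"

definition init_store :: "var list \<Rightarrow> 'c::alphabet word list \<Rightarrow> 'c store" where
  "init_store xs ws = foldl (\<lambda>\<mu> (x, w). \<mu>(x := w)) store_empty (zip xs ws)"

text \<open>The program P computes w on input ws (i.e. [[P]](ws) = w).\<close>
definition prog_computes :: "'c::alphabet prog \<Rightarrow> 'c word list \<Rightarrow> 'c word \<Rightarrow> bool" where
  "prog_computes P ws w \<longleftrightarrow>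
     (\<exists>b \<mu>'. eval_s (init_store (params P) ws) (body P) b \<mu>' \<and> \<mu>' (ret P) = w)"

text \<open>Child relation between statement configurations in the (possibly infinite)
  evaluation tree (expression nodes, which never contain loops, are omitted).\<close>
inductive child :: "('c::alphabet store \<times> 'c stmt) \<Rightarrow> ('c store \<times> 'c stmt) \<Rightarrow> bool" where
  CSeq1: "child (\<mu>, Seq s1 s2) (\<mu>, s1)"
| CSeq2: "eval_s \<mu> s1 True \<mu>' \<Longrightarrow> child (\<mu>, Seq s1 s2) (\<mu>', s2)"
| CIfT: "eval_e \<mu> e = [sym1] \<Longrightarrow> child (\<mu>, If e s1 s0) (\<mu>, s1)"
| CIfF: "eval_e \<mu> e \<noteq> [sym1] \<Longrightarrow> child (\<mu>, If e s1 s0) (\<mu>, s0)"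
| CWhile: "eval_e \<mu> e = [sym1] \<Longrightarrow> child (\<mu>, While e s) (\<mu>, Seq s (While e s))"

section \<open>Typing\<close>

type_synonym 'c op_env = "'c operator \<Rightarrow> (nat \<Rightarrow> nat \<Rightarrow> nat list set) option"
type_synonym var_env = "var \<Rightarrow> nat option"

inductive etype :: "var_env \<Rightarrow> 'c op_env \<Rightarrow> nat \<Rightarrow> nat \<Rightarrow> 'c expr \<Rightarrow> nat \<Rightarrow> bool" where
  TVar: "\<Gamma> x = Some \<tau> \<Longrightarrow> etype \<Gamma> \<Delta> ti to (Var x) \<tau>"
| TOp: "\<Delta> op = Some D \<Longrightarrow> ts \<in> D ti to \<Longrightarrow> length es = op_ar op \<Longrightarrow>
        length ts = Suc (length es) \<Longrightarrow>
        (\<forall>i < length es. etype \<Gamma> \<Delta> ti to (es ! i) (ts ! i)) \<Longrightarrow>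
        etype \<Gamma> \<Delta> ti to (Op op es) (last ts)"
| TDcl: "etype \<Gamma> \<Delta> ti to e1 \<tau>1 \<Longrightarrow> etype \<Gamma> \<Delta> ti to e2 to \<Longrightarrow> \<tau>1 \<le> \<tau> \<Longrightarrow> \<tau> \<le> to \<Longrightarrow>
        etype \<Gamma> \<Delta> ti to (Declass e1 e2) \<tau>"

inductive stype :: "var_env \<Rightarrow> 'c op_env \<Rightarrow> nat \<Rightarrow> nat \<Rightarrow> 'c stmt \<Rightarrow> nat \<Rightarrow> bool" where
  TSub: "stype \<Gamma> \<Delta> ti to s \<tau>1 \<Longrightarrow> \<tau>1 \<le> \<tau>2 \<Longrightarrow> stype \<Gamma> \<Delta> ti to s \<tau>2"
| TSkip: "stype \<Gamma> \<Delta> ti to Skip 0"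
| TAsg: "\<Gamma> x = Some \<tau>1 \<Longrightarrow> etype \<Gamma> \<Delta> ti to e \<tau>2 \<Longrightarrow> (to = 0 \<or> \<tau>1 \<le> \<tau>2) \<Longrightarrow>
         stype \<Gamma> \<Delta> ti to (Assign x e) \<tau>1"
| TSeq: "stype \<Gamma> \<Delta> ti to s1 \<tau> \<Longrightarrow> stype \<Gamma> \<Delta> ti to s2 \<tau> \<Longrightarrow> stype \<Gamma> \<Delta> ti to (Seq s1 s2) \<tau>"
| TCnd: "etype \<Gamma> \<Delta> ti to e \<tau> \<Longrightarrow> stype \<Gamma> \<Delta> ti to s1 \<tau> \<Longrightarrow> stype \<Gamma> \<Delta> ti to s0 \<tau> \<Longrightarrow>
         stype \<Gamma> \<Delta> ti to (If e s1 s0) \<tau>"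
| TWh: "etype \<Gamma> \<Delta> \<tau> to e \<tau> \<Longrightarrow> stype \<Gamma> \<Delta> \<tau> to s \<tau> \<Longrightarrow> 1 \<le> \<tau> \<Longrightarrow> \<tau> \<le> to \<Longrightarrow>
        stype \<Gamma> \<Delta> ti to (While e s) \<tau>"
| TWi: "etype \<Gamma> \<Delta> \<tau> \<tau> e \<tau> \<Longrightarrow> stype \<Gamma> \<Delta> \<tau> \<tau> s \<tau> \<Longrightarrow> 1 \<le> \<tau> \<Longrightarrow>
        stype \<Gamma> \<Delta> 0 0 (While e s) \<tau>"
| TBrk: "etype \<Gamma> \<Delta> ti to e \<tau> \<Longrightarrow> ti \<le> \<tau> \<Longrightarrow> stype \<Gamma> \<Delta> ti to (Break e) ti"

definition safe_env :: "'c::alphabet operator set \<Rightarrow> 'c op_env \<Rightarrow> bool" where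
  "safe_env Ops \<Delta> \<longleftrightarrow>
     (\<forall>op D. \<Delta> op = Some D \<longrightarrow>
        op \<in> Ops \<and>
        (neutral_op op \<or> positive_op op \<or> polynomial_op op) \<and>
        poly_time_computable (op_ar op) (op_sem op) \<and>
        (\<forall>ti to ts. ts \<in> D ti to \<longrightarrow>
           length ts = Suc (op_ar op) \<and>
           (neutral_op op \<longrightarrow> (\<forall>i < op_ar op. last ts \<le> ts ! i)) \<and>
           (positive_op op \<and> \<not> neutral_op op \<longrightarrow>
              (\<forall>i < op_ar op. last ts \<le> ts ! i) \<and> (last ts < ti \<or> last ts = 0)) \<and>
           (polynomial_op op \<and> \<not> positive_op op \<longrightarrow> to = 0)))"

definition safe_prog :: "'c::alphabet operator set \<Rightarrow> 'c prog \<Rightarrow> bool" where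
  "safe_prog Ops P \<longleftrightarrow>
     (\<exists>\<Delta> \<Gamma> \<tau>. safe_env Ops \<Delta> \<and> finite (dom \<Gamma>) \<and> stype \<Gamma> \<Delta> 0 0 (body P) \<tau>)"

fun undecl :: "'c expr \<Rightarrow> var set" where
  "undecl (Var x) = {x}"
| "undecl (Op op es) = (\<Union>e \<in> set es. undecl e)"
| "undecl (Declass e1 e2) = undecl e2"

definition aperiodic :: "'c::alphabet prog \<Rightarrow> bool" where
  "aperiodic P \<longleftrightarrow>
     \<not> (\<exists>\<mu> \<mu>' \<mu>'' e s.
          child\<^sup>*\<^sup>* (\<mu>, body P) (\<mu>', While e s) \<and>
          child\<^sup>+\<^sup>+ (\<mu>', While e s) (\<mu>'', While e s) \<and>
          (\<forall>x \<in> undecl e. \<mu>' x = \<mu>'' x))"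

end

theory Submission
  imports Defs
begin

text \<open>A Turing machine M is simulated by a loop-free statement MACRO_STEP, each
  execution of which performs one elementary step of the simulation: loading an
  input letter onto an encoded tape, one transition of M, or reading off an output
  letter; once everything is done it leaves the store unchanged. So it suffices to
  repeat it often enough. The repetition is done by nested counter loops, each of
  which counts down a copy of an input word, so the number of iterations is a
  polynomial in the input size that can be chosen to dominate the running time of M.
  A counter loop strictly decreases the length of its counter (or raises its flag),
  and only these two variables occur undeclassified in its guard; hence the program
  is aperiodic. It is safe since the registers of the simulation live at level 0,
  the counters at level 1, and only neutral operators are applied at level 1.\<close>

lemmas sym0_sym1_distinct[simp] = sym0_neq_sym1 sym0_neq_sym1[symmetric]

lemma bw_True[simp]: "bw True = [sym1]" and bw_False[simp]: "bw False = [sym0]"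
  by (auto simp: bw_def)

lemma bw_eq_sym1_iff[simp]: "(bw b = [sym1]) = b"
  by (auto simp: bw_def)

lemma bw_eq_sym0_iff[simp]: "(bw b = [sym0]) = (\<not> b)"
  by (auto simp: bw_def)

lemma length_bw[simp]: "length (bw b) = 1"
  by (simp add: bw_def)

fun loop_free :: "'c stmt \<Rightarrow> bool" where
  "loop_free Skip = True"
| "loop_free (Assign x e) = True"
| "loop_free (Seq s1 s2) = (loop_free s1 \<and> loop_free s2)"
| "loop_free (If e s1 s0) = (loop_free s1 \<and> loop_free s0)"
| "loop_free (While e s) = False"
| "loop_free (Break e) = False"

fun exec :: "'c::alphabet store \<Rightarrow> 'c stmt \<Rightarrow> 'c store" where
  "exec \<mu> Skip = \<mu>"
| "exec \<mu> (Assign x e) = \<mu>(x := eval_e \<mu> e)"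
| "exec \<mu> (Seq s1 s2) = exec (exec \<mu> s1) s2"
| "exec \<mu> (If e s1 s0) = (if eval_e \<mu> e = [sym1] then exec \<mu> s1 else exec \<mu> s0)"
| "exec \<mu> (While e s) = \<mu>"
| "exec \<mu> (Break e) = \<mu>"

lemma eval_s_exec: "loop_free s \<Longrightarrow> eval_s \<mu> s True (exec \<mu> s)"
  by (induction s arbitrary: \<mu>) (auto intro: eval_s.intros)

fun expr_vars :: "'c expr \<Rightarrow> var set" where
  "expr_vars (Var x) = {x}"
| "expr_vars (Op op es) = (\<Union>e \<in> set es. expr_vars e)"
| "expr_vars (Declass e1 e2) = expr_vars e1 \<union> expr_vars e2"

fun stmt_vars :: "'c stmt \<Rightarrow> var set" where
  "stmt_vars Skip = {}"
| "stmt_vars (Assign x e) = insert x (expr_vars e)"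
| "stmt_vars (Seq s1 s2) = stmt_vars s1 \<union> stmt_vars s2"
| "stmt_vars (If e s1 s0) = expr_vars e \<union> stmt_vars s1 \<union> stmt_vars s0"
| "stmt_vars (While e s) = expr_vars e \<union> stmt_vars s"
| "stmt_vars (Break e) = expr_vars e"

fun assigned :: "'c stmt \<Rightarrow> var set" where
  "assigned Skip = {}"
| "assigned (Assign x e) = {x}"
| "assigned (Seq s1 s2) = assigned s1 \<union> assigned s2"
| "assigned (If e s1 s0) = assigned s1 \<union> assigned s0"
| "assigned (While e s) = assigned s"
| "assigned (Break e) = {}"

lemma eval_e_cong: "(\<forall>x\<in>expr_vars e. \<mu>1 x = \<mu>2 x) \<Longrightarrow> eval_e \<mu>1 e = eval_e \<mu>2 e"
proof (induction e)
  case (Op op es)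
  have "map (eval_e \<mu>1) es = map (eval_e \<mu>2) es"
    by (rule map_cong) (use Op in auto)
  then show ?case by (simp only: eval_e.simps)
qed auto

definition agree_off :: "var set \<Rightarrow> 'c store \<Rightarrow> 'c store \<Rightarrow> bool" where
  "agree_off C \<mu>1 \<mu>2 \<longleftrightarrow> (\<forall>x. x \<notin> C \<longrightarrow> \<mu>1 x = \<mu>2 x)"

lemma agree_off_refl[simp]: "agree_off C \<mu> \<mu>"
  by (simp add: agree_off_def)

lemma agree_off_trans: "agree_off C a b \<Longrightarrow> agree_off C b c \<Longrightarrow> agree_off C a c"
  by (simp add: agree_off_def)

lemma agree_off_upd: "x \<in> C \<Longrightarrow> agree_off C a b \<Longrightarrow> agree_off C (a(x := w)) b"
  by (simp add: agree_off_def)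

lemma agree_off_funpow:
  fixes G :: "'c store \<Rightarrow> 'c store"
  assumes "\<And>a b. agree_off C a b \<Longrightarrow> agree_off C (G a) (G b)" and "agree_off C a b"
  shows "agree_off C ((G ^^ n) a) ((G ^^ n) b)"
proof (induction n)
  case (Suc n)
  show ?case using assms(1)[OF Suc.IH] by simp
qed (simp add: assms(2))

lemma exec_agree_off:
  "stmt_vars s \<inter> C = {} \<Longrightarrow> agree_off C \<mu>1 \<mu>2 \<Longrightarrow> agree_off C (exec \<mu>1 s) (exec \<mu>2 s)"
proof (induction s arbitrary: \<mu>1 \<mu>2)
  case (Assign x e)
  then have "eval_e \<mu>1 e = eval_e \<mu>2 e"
    by (intro eval_e_cong) (auto simp: agree_off_def)
  with Assign show ?case by (auto simp: agree_off_def)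
next
  case (If e s1 s0)
  then have "eval_e \<mu>1 e = eval_e \<mu>2 e"
    by (intro eval_e_cong) (auto simp: agree_off_def)
  with If show ?case by (simp add: Int_Un_distrib2)
qed (auto simp: Int_Un_distrib2)

lemma exec_unassigned: "x \<notin> assigned s \<Longrightarrow> exec \<mu> s x = \<mu> x"
  by (induction s arbitrary: \<mu>) auto

lemma eval_s_unassigned: "eval_s \<mu> s b \<mu>' \<Longrightarrow> x \<notin> assigned s \<Longrightarrow> \<mu>' x = \<mu> x"
  by (induction rule: eval_s.induct) auto

fun REPEAT :: "nat \<Rightarrow> 'c::alphabet stmt \<Rightarrow> 'c stmt" where
  "REPEAT 0 B = Skip"
| "REPEAT (Suc n) B = Seq B (REPEAT n B)"

lemma exec_REPEAT: "exec \<mu> (REPEAT n B) = ((\<lambda>\<mu>. exec \<mu> B) ^^ n) \<mu>"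
  by (induction n arbitrary: \<mu>) (simp_all add: funpow_Suc_right del: funpow.simps)

lemma loop_free_REPEAT: "loop_free B \<Longrightarrow> loop_free (REPEAT n B)"
  by (induction n) auto

lemma assigned_REPEAT: "assigned (REPEAT n B) \<subseteq> assigned B"
  by (induction n) auto

definition ZERO :: "'c::alphabet expr" where "ZERO = Op op_zero []"
definition TRUE :: "'c::alphabet expr" where "TRUE = Op op_eq [ZERO, ZERO]"
definition EPS :: "'c::alphabet expr" where "EPS = Op op_tail [ZERO]"
definition EQ :: "'c::alphabet expr \<Rightarrow> 'c expr \<Rightarrow> 'c expr" where "EQ a b = Op op_eq [a, b]"
definition HD :: "'c::alphabet expr \<Rightarrow> 'c expr" where "HD a = Op op_head [a]"
definition TL :: "'c::alphabet expr \<Rightarrow> 'c expr" where "TL a = Op op_tail [a]"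
definition CONS :: "'c::alphabet \<Rightarrow> 'c expr \<Rightarrow> 'c expr" where "CONS c a = Op (op_cons c) [a]"

lemma eval_ZERO[simp]: "eval_e \<mu> ZERO = [sym0]" by (simp add: ZERO_def op_zero_def)
lemma eval_TRUE[simp]: "eval_e \<mu> TRUE = [sym1]" by (simp add: TRUE_def op_eq_def)
lemma eval_EPS[simp]: "eval_e \<mu> EPS = []" by (simp add: EPS_def op_tail_def)
lemma eval_EQ[simp]:
  "eval_e \<mu> (EQ a b) = bw (eval_e \<mu> a = eval_e \<mu> b)"
  by (simp add: EQ_def op_eq_def)
lemma eval_HD[simp]: "eval_e \<mu> (HD a) = take 1 (eval_e \<mu> a)" by (simp add: HD_def op_head_def)
lemma eval_TL[simp]: "eval_e \<mu> (TL a) = tl (eval_e \<mu> a)" by (simp add: TL_def op_tail_def)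
lemma eval_CONS[simp]: "eval_e \<mu> (CONS c a) = c # eval_e \<mu> a" by (simp add: CONS_def op_cons_def)

definition PUSH :: "'c::alphabet list \<Rightarrow> 'c expr \<Rightarrow> 'c expr" where
  "PUSH u e = foldr CONS u e"

definition WORD :: "'c::alphabet list \<Rightarrow> 'c expr" where
  "WORD u = PUSH u EPS"

definition DROP :: "nat \<Rightarrow> 'c::alphabet expr \<Rightarrow> 'c expr" where
  "DROP n e = (TL ^^ n) e"

lemma eval_PUSH[simp]: "eval_e \<mu> (PUSH u e) = u @ eval_e \<mu> e"
  by (induction u) (auto simp: PUSH_def)

lemma eval_WORD[simp]: "eval_e \<mu> (WORD u) = u"
  by (simp add: WORD_def)

lemma eval_DROP[simp]: "eval_e \<mu> (DROP n e) = drop n (eval_e \<mu> e)"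
  by (induction n) (auto simp: DROP_def drop_Suc tl_drop)

lemma expr_vars_simps[simp]:
  "expr_vars (ZERO::'c::alphabet expr) = {}" "expr_vars (TRUE::'c expr) = {}"
  "expr_vars (EPS::'c expr) = {}" "expr_vars (EQ a b) = expr_vars a \<union> expr_vars b"
  "expr_vars (HD a) = expr_vars a" "expr_vars (TL a) = expr_vars a"
  "expr_vars (CONS c a) = expr_vars a"
  by (auto simp: ZERO_def TRUE_def EPS_def EQ_def HD_def TL_def CONS_def)

lemma expr_vars_PUSH[simp]: "expr_vars (PUSH u e) = expr_vars e"
  by (induction u) (auto simp: PUSH_def)

lemma expr_vars_WORD[simp]: "expr_vars (WORD u :: 'c::alphabet expr) = {}"
  by (simp add: WORD_def)

lemma expr_vars_DROP[simp]: "expr_vars (DROP n e) = expr_vars e"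
  by (induction n) (auto simp: DROP_def)

section \<open>Counter loops\<close>

text \<open>A counter loop consumes the word in its counter variable c one letter per
  iteration and stops by raising the flag d once c is empty, so it runs its body
  exactly length (\<mu> c) + 1 times. Only c and d occur undeclassified in its guard,
  and count_measure strictly decreases with every iteration, which makes such loops
  aperiodic.\<close>

definition COUNT_GUARD :: "var \<Rightarrow> var \<Rightarrow> 'c::alphabet expr" where
  "COUNT_GUARD c d = EQ (EQ (Var d) (EQ (Var c) (Var c))) ZERO"

definition COUNT_DOWN :: "var \<Rightarrow> var \<Rightarrow> 'c::alphabet stmt" where
  "COUNT_DOWN c d = If (EQ (Var c) EPS) (Assign d TRUE) (Assign c (TL (Var c)))"

definition COUNT_LOOP :: "var \<Rightarrow> var \<Rightarrow> 'c::alphabet stmt \<Rightarrow> 'c stmt" where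
  "COUNT_LOOP c d S = While (COUNT_GUARD c d) (Seq S (COUNT_DOWN c d))"

lemma eval_COUNT_GUARD[simp]: "eval_e \<mu> (COUNT_GUARD c d) = bw (\<mu> d \<noteq> [sym1])"
  by (simp add: COUNT_GUARD_def)

lemma assigned_COUNT_LOOP[simp]: "assigned (COUNT_LOOP c d S) = assigned S \<union> {c, d}"
  by (auto simp: COUNT_LOOP_def COUNT_DOWN_def)

lemma eval_s_COUNT_DOWN:
  "eval_s \<mu> (COUNT_DOWN c d) True (if \<mu> c = [] then \<mu>(d := [sym1]) else \<mu>(c := tl (\<mu> c)))"
  unfolding COUNT_DOWN_def using EAssign[of \<mu> d TRUE] EAssign[of \<mu> c "TL (Var c)"]
  by (cases "\<mu> c = []") (auto intro: EIfT EIfF)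

lemma eval_s_COUNT_LOOP:
  assumes cd: "c \<in> C" "d \<in> C" "c \<noteq> d" "c \<notin> assigned S" "d \<notin> assigned S"
    and S: "\<And>\<mu>. \<exists>\<mu>'. eval_s \<mu> S True \<mu>' \<and> agree_off C \<mu>' (G \<mu>)"
    and G: "\<And>a b. agree_off C a b \<Longrightarrow> agree_off C (G a) (G b)"
    and d: "\<mu> d \<noteq> [sym1]"
  shows "\<exists>\<mu>'. eval_s \<mu> (COUNT_LOOP c d S) True \<mu>' \<and>
    agree_off C \<mu>' ((G ^^ Suc (length (\<mu> c))) \<mu>)"
  using d
proof (induction "length (\<mu> c)" arbitrary: \<mu>)
  case n: 0
  obtain \<mu>a where a: "eval_s \<mu> S True \<mu>a" "agree_off C \<mu>a (G \<mu>)" using S by blast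
  have "\<mu>a c = []" using eval_s_unassigned[OF a(1)] cd n by auto
  then have "eval_s \<mu> (Seq S (COUNT_DOWN c d)) True (\<mu>a(d := [sym1]))"
    using ESeq[OF a(1) eval_s_COUNT_DOWN[of \<mu>a c d]] by simp
  moreover have "eval_s (\<mu>a(d := [sym1])) (COUNT_LOOP c d S) True (\<mu>a(d := [sym1]))"
    unfolding COUNT_LOOP_def by (rule EWhileF) simp
  ultimately have "eval_s \<mu> (COUNT_LOOP c d S) True (\<mu>a(d := [sym1]))"
    using n(2) unfolding COUNT_LOOP_def by (intro EWhileT[OF _ ESeq]) auto
  moreover have "agree_off C (\<mu>a(d := [sym1])) ((G ^^ Suc (length (\<mu> c))) \<mu>)"
    using a(2) n cd by (auto intro: agree_off_upd)
  ultimately show ?case by blast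
next
  case (Suc n)
  obtain \<mu>a where a: "eval_s \<mu> S True \<mu>a" "agree_off C \<mu>a (G \<mu>)" using S by blast
  have ac: "\<mu>a c = \<mu> c" "\<mu>a d = \<mu> d" using eval_s_unassigned[OF a(1)] cd by auto
  let ?\<mu>b = "\<mu>a(c := tl (\<mu>a c))"
  have body: "eval_s \<mu> (Seq S (COUNT_DOWN c d)) True ?\<mu>b"
    using ESeq[OF a(1) eval_s_COUNT_DOWN[of \<mu>a c d]] ac Suc(2) by (auto split: if_splits)
  have "length (?\<mu>b c) = n" "?\<mu>b d \<noteq> [sym1]" using Suc(2,3) ac cd by auto
  then obtain \<mu>' where m': "eval_s ?\<mu>b (COUNT_LOOP c d S) True \<mu>'" "agree_off C \<mu>' ((G ^^ Suc n) ?\<mu>b)"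
    using Suc(1) by metis
  have "eval_s \<mu> (COUNT_LOOP c d S) True \<mu>'"
    using m'(1) Suc(3) body unfolding COUNT_LOOP_def by (intro EWhileT[OF _ ESeq]) auto
  moreover have "agree_off C ((G ^^ Suc n) ?\<mu>b) ((G ^^ Suc n) (G \<mu>))"
    using a(2) cd by (intro agree_off_funpow[OF G] agree_off_upd)
  then have "agree_off C \<mu>' ((G ^^ Suc (length (\<mu> c))) \<mu>)"
    using m'(2) Suc(2) by (metis agree_off_trans funpow_Suc_right o_apply)
  ultimately show ?case by blast
qed

text \<open>The parameter src maps an index to the variable whose length drives the
  loop; the l-th loop from the inside uses the counter cv l and the flag dv l.\<close>

fun COUNT_LOOPS :: "(nat \<Rightarrow> var) \<Rightarrow> (nat \<Rightarrow> var) \<Rightarrow> (nat \<Rightarrow> var) \<Rightarrow> nat list \<Rightarrow>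
    'c::alphabet stmt \<Rightarrow> 'c stmt" where
  "COUNT_LOOPS cv dv src [] S = S"
| "COUNT_LOOPS cv dv src (i # js) S =
     Seq (Assign (cv (length js)) (Var (src i)))
       (Seq (Assign (dv (length js)) ZERO)
         (COUNT_LOOP (cv (length js)) (dv (length js)) (COUNT_LOOPS cv dv src js S)))"

definition loop_count :: "(nat \<Rightarrow> var) \<Rightarrow> nat list \<Rightarrow> 'c store \<Rightarrow> nat" where
  "loop_count src js \<mu> = (\<Prod>j\<leftarrow>js. Suc (length (\<mu> (src j))))"

lemma loop_count_Cons:
  "loop_count src (i # js) \<mu> = Suc (length (\<mu> (src i))) * loop_count src js \<mu>"
  by (simp add: loop_count_def)

lemma loop_count_cong:
  "(\<And>j. j \<in> set js \<Longrightarrow> \<mu>1 (src j) = \<mu>2 (src j)) \<Longrightarrow> loop_count src js \<mu>1 = loop_count src js \<mu>2"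
  unfolding loop_count_def by (simp cong: map_cong)

lemma funpow_loop_count:
  assumes "\<And>\<mu> j. j \<in> set js \<Longrightarrow> G \<mu> (src j) = \<mu> (src j)"
  shows "((\<lambda>\<mu>. (G ^^ loop_count src js \<mu>) \<mu>) ^^ n) \<mu> = (G ^^ (n * loop_count src js \<mu>)) \<mu>"
proof -
  have step: "loop_count src js (G \<nu>) = loop_count src js \<nu>" for \<nu>
    by (rule loop_count_cong) (simp add: assms)
  have inv: "loop_count src js ((G ^^ m) \<mu>) = loop_count src js \<mu>" for m \<mu>
    by (induction m) (simp_all add: step)
  show ?thesis
    by (induction n) (simp_all add: inv funpow_add add.commute)
qed

lemma assigned_COUNT_LOOPS:
  "assigned (COUNT_LOOPS cv dv src js S) \<subseteq> assigned S \<union> cv ` {..<length js} \<union> dv ` {..<length js}"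
  by (induction js) auto

lemma fresh_COUNT_LOOPS:
  assumes "inj cv" "inj dv" "\<And>l l'. cv l \<noteq> dv l'"
    and "assigned S \<inter> (range cv \<union> range dv) = {}"
  shows "cv (length js) \<notin> assigned (COUNT_LOOPS cv dv src js S)"
    "dv (length js) \<notin> assigned (COUNT_LOOPS cv dv src js S)"
proof -
  let ?l = "length js"
  have "cv ?l \<notin> cv ` {..<?l}" "dv ?l \<notin> dv ` {..<?l}" "cv ?l \<notin> dv ` {..<?l}" "dv ?l \<notin> cv ` {..<?l}"
    using assms(1-3) by (auto dest: injD) (metis assms(3))
  moreover have "cv ?l \<notin> assigned S" "dv ?l \<notin> assigned S" using assms(4) by blast+
  ultimately show "cv ?l \<notin> assigned (COUNT_LOOPS cv dv src js S)"
    "dv ?l \<notin> assigned (COUNT_LOOPS cv dv src js S)"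
    using assigned_COUNT_LOOPS[of cv dv src js S] by auto
qed

lemma loop_count_agree_off:
  "(\<And>j. j \<in> set js \<Longrightarrow> src j \<notin> C) \<Longrightarrow> agree_off C a b \<Longrightarrow> loop_count src js a = loop_count src js b"
  by (intro loop_count_cong) (auto simp: agree_off_def)

lemma agree_off_funpow_loop_count:
  fixes G :: "'c store \<Rightarrow> 'c store"
  assumes G: "\<And>a b. agree_off C a b \<Longrightarrow> agree_off C (G a) (G b)"
    and src: "\<And>j. j \<in> set js \<Longrightarrow> src j \<notin> C" and ab: "agree_off C a b"
  shows "agree_off C ((G ^^ loop_count src js a) a) ((G ^^ loop_count src js b) b)"
  using agree_off_funpow[OF G ab] loop_count_agree_off[OF src ab] by simp

lemma eval_s_COUNT_LOOPS:
  assumes C: "range cv \<subseteq> C" "range dv \<subseteq> C" "inj cv" "inj dv" "\<And>l l'. cv l \<noteq> dv l'"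
    and src: "\<And>j. j \<in> set js \<Longrightarrow> src j \<notin> C"
    and SC: "assigned S \<inter> C = {}"
    and S: "\<And>\<mu>. \<exists>\<mu>'. eval_s \<mu> S True \<mu>' \<and> agree_off C \<mu>' (G \<mu>)"
    and G: "\<And>a b. agree_off C a b \<Longrightarrow> agree_off C (G a) (G b)"
    and G_src: "\<And>\<mu> j. j \<in> set js \<Longrightarrow> G \<mu> (src j) = \<mu> (src j)"
  shows "\<exists>\<mu>'. eval_s \<mu> (COUNT_LOOPS cv dv src js S) True \<mu>' \<and>
           agree_off C \<mu>' ((G ^^ loop_count src js \<mu>) \<mu>)"
  using src G_src
proof (induction js arbitrary: \<mu>)
  case Nil
  then show ?case using S by (simp add: loop_count_def)
next
  case (Cons i js)
  let ?l = "length js" and ?inner = "COUNT_LOOPS cv dv src js S"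
  define H where "H = (\<lambda>\<mu>. (G ^^ loop_count src js \<mu>) \<mu>)"
  have src_js: "src j \<notin> C" if "j \<in> set js" for j using Cons.prems(1) that by simp
  have H: "agree_off C (H a) (H b)" if "agree_off C a b" for a b
    unfolding H_def by (rule agree_off_funpow_loop_count[OF G src_js that])
  have inner: "\<exists>\<mu>'. eval_s \<mu> ?inner True \<mu>' \<and> agree_off C \<mu>' (H \<mu>)" for \<mu>
    using Cons by (simp add: H_def)
  have "assigned S \<inter> (range cv \<union> range dv) = {}" using SC C(1,2) by blast
  then have fresh: "cv ?l \<notin> assigned ?inner" "dv ?l \<notin> assigned ?inner"
    by (rule fresh_COUNT_LOOPS[OF C(3-5)])+
  define \<mu>1 where "\<mu>1 = \<mu>(cv ?l := \<mu> (src i), dv ?l := [sym0])"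
  have "\<mu>1 (dv ?l) \<noteq> [sym1]" by (simp add: \<mu>1_def)
  then obtain \<mu>' where L: "eval_s \<mu>1 (COUNT_LOOP (cv ?l) (dv ?l) ?inner) True \<mu>'"
     "agree_off C \<mu>' ((H ^^ Suc (length (\<mu>1 (cv ?l)))) \<mu>1)"
    using eval_s_COUNT_LOOP[of "cv ?l" C "dv ?l" ?inner H, OF _ _ C(5) fresh inner H] C(1,2)
    by (meson range_subsetD)
  have ev: "eval_s \<mu> (COUNT_LOOPS cv dv src (i # js) S) True \<mu>'"
    using L(1) by (auto simp: \<mu>1_def ZERO_def op_zero_def intro!: eval_s.intros)
  have off1: "agree_off C \<mu>1 \<mu>" using C by (auto simp: \<mu>1_def agree_off_def)
  have G_js: "G \<mu> (src j) = \<mu> (src j)" if "j \<in> set js" for \<mu> j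
    using Cons.prems(2) that by simp
  have "(H ^^ Suc (length (\<mu>1 (cv ?l)))) \<mu>1 =
      (G ^^ (Suc (length (\<mu>1 (cv ?l))) * loop_count src js \<mu>1)) \<mu>1"
    unfolding H_def by (rule funpow_loop_count) (rule G_js)
  also have "Suc (length (\<mu>1 (cv ?l))) * loop_count src js \<mu>1 = loop_count src (i # js) \<mu>"
    using C(5) loop_count_agree_off[OF src_js off1] by (simp add: \<mu>1_def loop_count_Cons)
  finally have "(H ^^ Suc (length (\<mu>1 (cv ?l)))) \<mu>1 = (G ^^ loop_count src (i # js) \<mu>) \<mu>1" .
  with L(2) have "agree_off C \<mu>' ((G ^^ loop_count src (i # js) \<mu>) \<mu>1)" by simp
  then have "agree_off C \<mu>' ((G ^^ loop_count src (i # js) \<mu>) \<mu>)"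
    using agree_off_funpow[OF G off1] by (rule agree_off_trans)
  with ev show ?case by blast
qed

section \<open>Aperiodicity of counter loops\<close>

fun substmts :: "'c stmt \<Rightarrow> 'c stmt set" where
  "substmts (Seq a b) = insert (Seq a b) (substmts a \<union> substmts b)"
| "substmts (If e a b) = insert (If e a b) (substmts a \<union> substmts b)"
| "substmts (While e b) = insert (While e b) (substmts b)"
| "substmts s = {s}"

lemma substmts_refl[simp]: "s \<in> substmts s"
  by (cases s) auto

lemma substmts_trans: "t \<in> substmts s \<Longrightarrow> u \<in> substmts t \<Longrightarrow> u \<in> substmts s"
  by (induction s) auto

lemma size_substmts: "t \<in> substmts s \<Longrightarrow> size t \<le> size s"
  by (induction s) auto

lemma While_notin_substmts: "loop_free s \<Longrightarrow> While e b \<notin> substmts s"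
  by (induction s) auto

text \<open>All statements that can occur in the evaluation tree of s: its substatements
  and the unfoldings of its loops.\<close>

definition stmt_closure :: "'c stmt \<Rightarrow> 'c stmt set" where
  "stmt_closure s = substmts s \<union> {Seq b (While e b) | e b. While e b \<in> substmts s}"

lemma stmt_closure_refl[simp]: "s \<in> stmt_closure s"
  by (simp add: stmt_closure_def)

lemma child_stmt_closure:
  assumes "child p1 p2" "snd p1 \<in> stmt_closure s" shows "snd p2 \<in> stmt_closure s"
  using assms
proof (induction rule: child.induct)
  case (CSeq1 \<mu> s1 s2)
  then show ?case unfolding stmt_closure_def using substmts_trans[of "Seq s1 s2" s s1]
    by (auto intro: substmts_trans[of "While _ s1" s s1])
next
  case (CSeq2 \<mu> s1 \<mu>' s2)
  then show ?case unfolding stmt_closure_def using substmts_trans[of "Seq s1 s2" s s2] by auto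
next
  case (CIfT \<mu> e s1 s0)
  then show ?case unfolding stmt_closure_def using substmts_trans[of "If e s1 s0" s s1] by auto
next
  case (CIfF \<mu> e s1 s0)
  then show ?case unfolding stmt_closure_def using substmts_trans[of "If e s1 s0" s s0] by auto
next
  case (CWhile \<mu> e s')
  then show ?case unfolding stmt_closure_def by auto
qed

lemma rtranclp_child_stmt_closure:
  "child\<^sup>*\<^sup>* p1 p2 \<Longrightarrow> snd p1 \<in> stmt_closure s \<Longrightarrow> snd p2 \<in> stmt_closure s"
  by (induction rule: rtranclp_induct) (auto intro: child_stmt_closure)

lemma loop_notin_stmt_closure_body:
  "While e b \<notin> stmt_closure b" "Seq b (While e b) \<notin> stmt_closure b"
  using size_substmts[of "While e b" b] size_substmts[of "Seq b (While e b)" b]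
  by (fastforce simp: stmt_closure_def)+

definition count_measure :: "var \<Rightarrow> var \<Rightarrow> 'c::alphabet store \<Rightarrow> nat" where
  "count_measure c d \<mu> = (if \<mu> d = [sym1] then 0 else Suc (length (\<mu> c)))"

lemma count_measure_decreases:
  assumes "eval_s \<mu> (Seq S (COUNT_DOWN c d)) True \<mu>'" "\<mu> d \<noteq> [sym1]"
    "c \<notin> assigned S" "d \<notin> assigned S" "c \<noteq> d"
  shows "count_measure c d \<mu>' < count_measure c d \<mu>"
proof -
  from assms(1) obtain \<mu>a where a: "eval_s \<mu> S True \<mu>a" "eval_s \<mu>a (COUNT_DOWN c d) True \<mu>'"
    by (cases rule: eval_s.cases) auto
  have ac: "\<mu>a c = \<mu> c" "\<mu>a d = \<mu> d" using eval_s_unassigned[OF a(1)] assms by auto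
  show ?thesis
  proof (cases "\<mu> c = []")
    case True
    from a(2) have "\<mu>' = \<mu>a(d := [sym1])" unfolding COUNT_DOWN_def
      using True ac by (auto elim!: eval_s.cases)
    then show ?thesis using assms(2) by (simp add: count_measure_def)
  next
    case False
    from a(2) have "\<mu>' = \<mu>a(c := tl (\<mu>a c))" unfolding COUNT_DOWN_def
      using False ac by (auto elim!: eval_s.cases)
    then show ?thesis using assms(2,5) ac False by (simp add: count_measure_def)
  qed
qed

lemma count_loop_path:
  assumes "child\<^sup>+\<^sup>+ p1 p2" "p1 = (\<mu>1, COUNT_LOOP c d S)"
    "c \<notin> assigned S" "d \<notin> assigned S" "c \<noteq> d"
  shows "(snd p2 = COUNT_LOOP c d S \<and> count_measure c d (fst p2) < count_measure c d \<mu>1) \<or>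
         (snd p2 = Seq (Seq S (COUNT_DOWN c d)) (COUNT_LOOP c d S) \<and> fst p2 d \<noteq> [sym1] \<and>
            count_measure c d (fst p2) \<le> count_measure c d \<mu>1) \<or>
         snd p2 \<in> stmt_closure (Seq S (COUNT_DOWN c d))"
  using assms(1)
proof (induction rule: tranclp_induct)
  case (base y)
  then show ?case using assms(2) unfolding COUNT_LOOP_def
    by (cases rule: child.cases) (auto simp: count_measure_def)
next
  case (step y z)
  from step.IH show ?case
  proof (elim disjE conjE)
    assume y: "snd y = COUNT_LOOP c d S" "count_measure c d (fst y) < count_measure c d \<mu>1"
    from step.hyps(2) y show ?thesis unfolding COUNT_LOOP_def
      by (cases rule: child.cases) (auto simp: count_measure_def)
  next
    assume y: "snd y = Seq (Seq S (COUNT_DOWN c d)) (COUNT_LOOP c d S)" "fst y d \<noteq> [sym1]"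
      "count_measure c d (fst y) \<le> count_measure c d \<mu>1"
    from step.hyps(2) y show ?thesis
    proof (cases rule: child.cases)
      case (CSeq2 \<mu> s1 \<mu>' s2)
      then have "count_measure c d \<mu>' < count_measure c d \<mu>"
        using count_measure_decreases[of \<mu> S c d \<mu>'] assms(3-5) y by auto
      then show ?thesis using CSeq2 y by auto
    qed auto
  next
    assume "snd y \<in> stmt_closure (Seq S (COUNT_DOWN c d))"
    then show ?thesis using child_stmt_closure[OF step.hyps(2)] by auto
  qed
qed

definition only_count_loops :: "'c::alphabet stmt \<Rightarrow> bool" where
  "only_count_loops s \<longleftrightarrow> (\<forall>e b. While e b \<in> substmts s \<longrightarrow>
      (\<exists>c d S. c \<noteq> d \<and> c \<notin> assigned S \<and> d \<notin> assigned S \<and> While e b = COUNT_LOOP c d S))"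

lemma only_count_loops_aperiodic:
  assumes "only_count_loops (body P)" shows "aperiodic P"
  unfolding aperiodic_def
proof (intro notI, elim exE conjE)
  fix \<mu> \<mu>' \<mu>'' e s
  assume r: "child\<^sup>*\<^sup>* (\<mu>, body P) (\<mu>', While e s)"
    and t: "child\<^sup>+\<^sup>+ (\<mu>', While e s) (\<mu>'', While e s)"
    and ag: "\<forall>x\<in>undecl e. \<mu>' x = \<mu>'' x"
  have "While e s \<in> substmts (body P)"
    using rtranclp_child_stmt_closure[OF r, of "body P"] by (simp add: stmt_closure_def)
  then obtain c d S where cd: "c \<noteq> d" "c \<notin> assigned S" "d \<notin> assigned S"
    "While e s = COUNT_LOOP c d S"
    using assms unfolding only_count_loops_def by blast
  have "count_measure c d \<mu>'' < count_measure c d \<mu>'"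
    using count_loop_path[OF t _ cd(2,3,1)] cd(4)
      loop_notin_stmt_closure_body[where e="COUNT_GUARD c d" and b="Seq S (COUNT_DOWN c d)"]
    unfolding COUNT_LOOP_def by auto
  moreover have "\<mu>' c = \<mu>'' c" "\<mu>' d = \<mu>'' d"
    using ag cd(4) by (auto simp: COUNT_LOOP_def COUNT_GUARD_def EQ_def ZERO_def)
  ultimately show False by (simp add: count_measure_def split: if_splits)
qed

lemma only_count_loops_COUNT_LOOPS:
  assumes "loop_free S" "inj cv" "inj dv" "\<And>l l'. cv l \<noteq> dv l'"
    "assigned S \<inter> (range cv \<union> range dv) = {}"
  shows "only_count_loops (COUNT_LOOPS cv dv src js S)"
proof (induction js)
  case Nil
  then show ?case unfolding only_count_loops_def using While_notin_substmts[OF assms(1)] by simp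
next
  case (Cons i js)
  let ?l = "length js" and ?inner = "COUNT_LOOPS cv dv src js S"
  have fresh: "cv ?l \<notin> assigned ?inner" "dv ?l \<notin> assigned ?inner"
    by (rule fresh_COUNT_LOOPS[OF assms(2-5)])+
  show ?case unfolding only_count_loops_def
  proof (intro allI impI)
    fix e b assume "While e b \<in> substmts (COUNT_LOOPS cv dv src (i # js) S)"
    then have "While e b = COUNT_LOOP (cv ?l) (dv ?l) ?inner \<or> While e b \<in> substmts ?inner"
      by (auto simp: COUNT_LOOP_def COUNT_DOWN_def)
    then show "\<exists>c d S. c \<noteq> d \<and> c \<notin> assigned S \<and> d \<notin> assigned S \<and> While e b = COUNT_LOOP c d S"
      using Cons fresh assms(4) unfolding only_count_loops_def by blast
  qed
qed

lemma tm_step_halted[simp]: "tm_step M (Suc 0, tp, h) = (Suc 0, tp, h)"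
  by (simp add: tm_step_def)

lemma tm_step_running:
  "q \<noteq> 1 \<Longrightarrow> tm_delta M q (tp h) = (q', a, d) \<Longrightarrow> tm_step M (q, tp, h) = (q', tp(h := a), h + dir_off d)"
  by (simp add: tm_step_def)

lemma tm_step_funpow_halted[simp]: "(tm_step M ^^ n) (Suc 0, tp, h) = (Suc 0, tp, h)"
  by (induction n) auto

lemma funpow_add_chain: "(f ^^ b) x = y \<Longrightarrow> (f ^^ a) y = z \<Longrightarrow> (f ^^ (a + b)) x = z"
  by (simp add: funpow_add)

lemma tm_scan_right:
  assumes "q \<noteq> 1" "\<And>j. j < m \<Longrightarrow> tm_delta M q (tp (h + int j)) = (q, tp (h + int j), Right)"
  shows "(tm_step M ^^ m) (q, tp, h) = (q, tp, h + int m)"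
  using assms(2)
proof (induction m)
  case (Suc m)
  have "(tm_step M ^^ Suc m) (q, tp, h) = tm_step M (q, tp, h + int m)"
    using Suc by simp
  also have "\<dots> = (q, tp, h + int (Suc m))"
  proof -
    have d: "tm_delta M q (tp (h + int m)) = (q, tp (h + int m), Right)" using Suc.prems by simp
    show ?thesis using tm_step_running[where tp=tp and h="h + int m", OF assms(1) d] by (simp add: dir_off_def)
  qed
  finally show ?case .
qed simp

lemma tm_scan_left:
  assumes "q \<noteq> 1" "\<And>j. j < m \<Longrightarrow> tm_delta M q (tp (h - int j)) = (q, tp (h - int j), Left)"
  shows "(tm_step M ^^ m) (q, tp, h) = (q, tp, h - int m)"
  using assms(2)
proof (induction m)
  case (Suc m)
  have "(tm_step M ^^ Suc m) (q, tp, h) = tm_step M (q, tp, h - int m)"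
    using Suc by simp
  also have "\<dots> = (q, tp, h - int (Suc m))"
  proof -
    have d: "tm_delta M q (tp (h - int m)) = (q, tp (h - int m), Left)" using Suc.prems by simp
    show ?thesis using tm_step_running[where tp=tp and h="h - int m", OF assms(1) d] by (simp add: dir_off_def)
  qed
  finally show ?case .
qed simp

lemma tm_output_eq:
  assumes "\<And>i. i < length w \<Longrightarrow> tp (h + int i) = Sym (w ! i)" "\<not> is_Sym (tp (h + int (length w)))"
  shows "tm_output (q, tp, h) = w"
proof -
  have L: "(LEAST n. \<not> is_Sym (tp (h + int n))) = length w"
  proof (rule Least_equality)
    show "\<not> is_Sym (tp (h + int (length w)))" by fact
    fix y assume ny: "\<not> is_Sym (tp (h + int y))"
    show "length w \<le> y"
    proof (rule ccontr)
      assume "\<not> length w \<le> y"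
      then have "tp (h + int y) = Sym (w ! y)" using assms(1) by simp
      then show False using ny by (simp add: is_Sym_def)
    qed
  qed
  show ?thesis unfolding tm_output_def
  proof (simp only: prod.case L, rule nth_equalityI)
    show "length (map (\<lambda>i. the_Sym (tp (h + int i))) [0..<length w]) = length w" by simp
    fix i assume "i < length (map (\<lambda>i. the_Sym (tp (h + int i))) [0..<length w])"
    then have i: "i < length w" by simp
    then show "map (\<lambda>i. the_Sym (tp (h + int i))) [0..<length w] ! i = w ! i"
      using assms(1)[OF i] by (simp add: the_Sym_def)
  qed
qed

lemma tm_input_single: "tm_input [w] = map Sym w @ [Sep]" by (simp add: tm_input_def)
lemma tm_input_pair: "tm_input [w1, w2] = map Sym w1 @ [Sep] @ map Sym w2 @ [Sep]"
  by (simp add: tm_input_def)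
lemma tm_input_Nil: "tm_input [] = []" by (simp add: tm_input_def)

section \<open>Turing machines for the basic word operators\<close>

definition tape_of_word :: "'c list \<Rightarrow> int \<Rightarrow> 'c tsym" where
  "tape_of_word w i = (if 0 \<le> i \<and> i < int (length w) then Sym (w ! nat i)
              else if i = int (length w) then Sep else Blank)"

lemma tm_init_single: "tm_init [w] = (0, tape_of_word w, 0)"
  unfolding tm_init_def tm_input_single tape_of_word_def
  by (auto simp: nth_append fun_eq_iff not_less)

lemma tm_init_Nil: "tm_init [] = (0, \<lambda>i. Blank, 0)"
  unfolding tm_init_def tm_input_Nil by (auto simp: fun_eq_iff)

definition tm_zero :: "'c::alphabet tm" where
  "tm_zero = \<lparr>tm_nstates = 2, tm_naux = 0, tm_delta = (\<lambda>q a. (1, Sym sym0, Stay))\<rparr>"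

lemma poly_time_op_zero:
  "poly_time_computable (op_ar op_zero) (op_sem (op_zero::'c::alphabet operator))"
  unfolding poly_time_computable_def
proof (rule exI[of _ tm_zero], rule exI[of _ "[:1:]"], intro conjI allI impI)
  show "tm_wf (tm_zero :: 'c tm)" by (simp add: tm_wf_def tm_zero_def tm_valid_sym_def)
  fix ws :: "'c list list" assume "length ws = op_ar op_zero"
  then have ws: "ws = []" by (simp add: op_zero_def)
  have r: "(tm_step tm_zero ^^ 1) (tm_init ws) = (1, (\<lambda>i. Blank)(0 := Sym sym0), 0)"
    unfolding ws tm_init_Nil by (simp add: tm_step_def tm_zero_def dir_off_def)
  show "\<exists>t. t \<le> poly [:1:] (sum_list (map length ws)) \<and>
           fst ((tm_step tm_zero ^^ t) (tm_init ws)) = 1 \<and>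
           tm_output ((tm_step tm_zero ^^ t) (tm_init ws)) = op_sem op_zero ws"
    apply (rule exI[of _ 1])
    unfolding r by (auto simp: op_zero_def intro!: tm_output_eq simp: is_Sym_def)
qed

definition tm_tail :: "'c::alphabet tm" where
  "tm_tail = \<lparr>tm_nstates = 2, tm_naux = 0, tm_delta = (\<lambda>q a. (1, Blank, Right))\<rparr>"

lemma poly_time_op_tail:
  "poly_time_computable (op_ar op_tail) (op_sem (op_tail::'c::alphabet operator))"
  unfolding poly_time_computable_def
proof (rule exI[of _ tm_tail], rule exI[of _ "[:1:]"], intro conjI allI impI)
  show "tm_wf (tm_tail :: 'c tm)" by (simp add: tm_wf_def tm_tail_def tm_valid_sym_def)
  fix ws :: "'c list list" assume "length ws = op_ar op_tail"
  then obtain w where ws: "ws = [w]" by (auto simp: op_tail_def length_Suc_conv)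
  have r: "(tm_step tm_tail ^^ 1) (tm_init ws) = (1, (tape_of_word w)(0 := Blank), 1)"
    unfolding ws tm_init_single by (simp add: tm_step_def tm_tail_def dir_off_def)
  have o: "tm_output (1::nat, (tape_of_word w)(0 := Blank), 1::int) = tl w"
  proof (rule tm_output_eq)
    fix i assume "i < length (tl w)"
    then show "((tape_of_word w)(0 := Blank)) (1 + int i) = Sym (tl w ! i)"
      by (cases w) (auto simp: tape_of_word_def nat_add_distrib)
  next
    show "\<not> is_Sym (((tape_of_word w)(0 := Blank)) (1 + int (length (tl w))))"
      by (cases w) (auto simp: tape_of_word_def is_Sym_def)
  qed
  show "\<exists>t. t \<le> poly [:1:] (sum_list (map length ws)) \<and>
           fst ((tm_step tm_tail ^^ t) (tm_init ws)) = 1 \<and>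
           tm_output ((tm_step tm_tail ^^ t) (tm_init ws)) = op_sem op_tail ws"
    apply (rule exI[of _ 1])
    unfolding r o by (simp add: op_tail_def ws)
qed

definition tm_head :: "'c::alphabet tm" where
  "tm_head = \<lparr>tm_nstates = 3, tm_naux = 0, tm_delta = (\<lambda>q a.
     if q = 0 then (if is_Sym a then (2, a, Right) else (1, a, Stay)) else (1, Blank, Left))\<rparr>"

lemma poly_time_op_head:
  "poly_time_computable (op_ar op_head) (op_sem (op_head::'c::alphabet operator))"
  unfolding poly_time_computable_def
proof (rule exI[of _ tm_head], rule exI[of _ "[:2:]"], intro conjI allI impI)
  show "tm_wf (tm_head :: 'c tm)" by (simp add: tm_wf_def tm_head_def tm_valid_sym_def)
  fix ws :: "'c list list" assume "length ws = op_ar op_head"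
  then obtain w where ws: "ws = [w]" by (auto simp: op_head_def length_Suc_conv)
  show "\<exists>t. t \<le> poly [:2:] (sum_list (map length ws)) \<and>
           fst ((tm_step tm_head ^^ t) (tm_init ws)) = 1 \<and>
           tm_output ((tm_step tm_head ^^ t) (tm_init ws)) = op_sem op_head ws"
  proof (cases w)
    case Nil
    have r: "(tm_step tm_head ^^ 1) (tm_init ws) = (1, tape_of_word w, 0)"
      unfolding ws tm_init_single using Nil
      by (simp add: tm_step_def tm_head_def dir_off_def tape_of_word_def is_Sym_def fun_eq_iff)
    have o: "tm_output (1::nat, tape_of_word w, 0::int) = []"
      by (rule tm_output_eq) (auto simp: Nil tape_of_word_def is_Sym_def)
    show ?thesis apply (rule exI[of _ 1]) unfolding r o by (simp add: op_head_def ws Nil)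
  next
    case (Cons c w')
    have r: "(tm_step tm_head ^^ 2) (tm_init ws) = (1, (tape_of_word w)(1 := Blank), 0)"
      unfolding ws tm_init_single using Cons
      by (simp add: numeral_2_eq_2 tm_step_def tm_head_def dir_off_def tape_of_word_def is_Sym_def fun_eq_iff)
    have o: "tm_output (1::nat, (tape_of_word w)(1 := Blank), 0::int) = [c]"
      by (rule tm_output_eq) (auto simp: Cons tape_of_word_def is_Sym_def)
    show ?thesis apply (rule exI[of _ 2]) unfolding r o by (simp add: op_head_def ws Cons)
  qed
qed

definition tm_cons :: "'c::alphabet \<Rightarrow> 'c tm" where
  "tm_cons c = \<lparr>tm_nstates = 3, tm_naux = 0, tm_delta = (\<lambda>q a.
     if q = 0 then (2, a, Left) else (1, Sym c, Stay))\<rparr>"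

lemma poly_time_op_cons:
  "poly_time_computable (op_ar (op_cons c)) (op_sem (op_cons c::'c::alphabet operator))"
  unfolding poly_time_computable_def
proof (rule exI[of _ "tm_cons c"], rule exI[of _ "[:2:]"], intro conjI allI impI)
  show "tm_wf (tm_cons c :: 'c tm)" by (simp add: tm_wf_def tm_cons_def tm_valid_sym_def)
  fix ws :: "'c list list" assume "length ws = op_ar (op_cons c)"
  then obtain w where ws: "ws = [w]" by (auto simp: op_cons_def length_Suc_conv)
  have r: "(tm_step (tm_cons c) ^^ 2) (tm_init ws) = (1, (tape_of_word w)(-1 := Sym c), -1)"
    unfolding ws tm_init_single
    by (simp add: numeral_2_eq_2 tm_step_def tm_cons_def dir_off_def tape_of_word_def)
  have o: "tm_output (1::nat, (tape_of_word w)(-1 := Sym c), -1::int) = c # w"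
  proof (rule tm_output_eq)
    fix i assume i: "i < length (c # w)"
    show "((tape_of_word w)(-1 := Sym c)) (-1 + int i) = Sym ((c # w) ! i)"
    proof (cases i)
      case (Suc j) then show ?thesis using i by (auto simp: tape_of_word_def)
    qed simp
  next
    show "\<not> is_Sym (((tape_of_word w)(-1 := Sym c)) (-1 + int (length (c # w))))"
      by (auto simp: tape_of_word_def is_Sym_def)
  qed
  show "\<exists>t. t \<le> poly [:2:] (sum_list (map length ws)) \<and>
           fst ((tm_step (tm_cons c) ^^ t) (tm_init ws)) = 1 \<and>
           tm_output ((tm_step (tm_cons c) ^^ t) (tm_init ws)) = op_sem (op_cons c) ws"
    apply (rule exI[of _ 2])
    unfolding r o by (simp add: op_cons_def ws)
qed

section \<open>A Turing machine deciding equality of words\<close>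

text \<open>In round r the machine erases the r-th letter of the first word, carries it
  in its state (carry_state) across the separator, skips the already matched
  letters of the second word (marked Aux 0) in seek_state, marks the next letter
  if it is the same, and walks back. Once the first word is exhausted it only
  remains to check that the second one is exhausted too.\<close>

definition sym_index :: "'c::alphabet \<Rightarrow> nat" where
  "sym_index c = card {x. x < c}"

lemma sym_index_inj: "sym_index a = sym_index b \<Longrightarrow> a = b"
proof (rule ccontr)
  assume e: "sym_index a = sym_index b" and ne: "a \<noteq> b"
  have less: "card {x::'c. x < u} < card {x. x < v}" if "u < v" for u v :: "'c::alphabet"
    by (rule psubset_card_mono) (use that in auto)
  from ne consider "a < b" | "b < a" by fastforce
  then show False using e less unfolding sym_index_def by (metis less_irrefl)
qed

lemma sym_index_less: "sym_index (c::'c::alphabet) < card (UNIV :: 'c set)"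
  unfolding sym_index_def by (rule psubset_card_mono) auto

definition carry_state :: "'c::alphabet \<Rightarrow> nat" where "carry_state c = 5 + 2 * sym_index c"
definition seek_state :: "'c::alphabet \<Rightarrow> nat" where "seek_state c = 6 + 2 * sym_index c"

lemma carry_state_inj[simp]: "carry_state a = carry_state b \<longleftrightarrow> a = b"
  by (auto simp: carry_state_def dest: sym_index_inj)
lemma seek_state_inj[simp]: "seek_state a = seek_state b \<longleftrightarrow> a = b"
  by (auto simp: seek_state_def dest: sym_index_inj)
lemma carry_state_neq_seek_state[simp]:
  "carry_state a \<noteq> seek_state b" "seek_state b \<noteq> carry_state a"
  by (auto simp: carry_state_def seek_state_def) presburger+

lemma carry_state_ne[simp]:
  "carry_state c \<noteq> 0" "carry_state c \<noteq> Suc 0" "carry_state c \<noteq> 2" "carry_state c \<noteq> 3" "carry_state c \<noteq> 4"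
  "0 \<noteq> carry_state c" "Suc 0 \<noteq> carry_state c" "2 \<noteq> carry_state c" "3 \<noteq> carry_state c" "4 \<noteq> carry_state c"
  by (auto simp: carry_state_def)

lemma seek_state_ne[simp]:
  "seek_state c \<noteq> 0" "seek_state c \<noteq> Suc 0" "seek_state c \<noteq> 2" "seek_state c \<noteq> 3" "seek_state c \<noteq> 4"
  "0 \<noteq> seek_state c" "Suc 0 \<noteq> seek_state c" "2 \<noteq> seek_state c" "3 \<noteq> seek_state c" "4 \<noteq> seek_state c"
  by (auto simp: seek_state_def)

definition eq_delta :: "nat \<Rightarrow> 'c::alphabet tsym \<Rightarrow> nat \<times> 'c tsym \<times> dir" where
  "eq_delta q a =
   (if q = 0 then (case a of Sym c \<Rightarrow> (carry_state c, Blank, Right) | Sep \<Rightarrow> (2, Sep, Right) | _ \<Rightarrow> (1, a, Stay))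
    else if q = 2 then (if a = Aux 0 then (2, a, Right) else if a = Sep then (4, Sym sym1, Right)
                        else (4, Sym sym0, Right))
    else if q = 3 then (if a = Blank then (0, a, Right) else (3, a, Left))
    else if q = 4 then (1, Blank, Left)
    else if (\<exists>c::'c. q = carry_state c) then
      (let c = (THE c::'c. q = carry_state c) in if a = Sep then (seek_state c, a, Right) else (q, a, Right))
    else if (\<exists>c::'c. q = seek_state c) then
      (let c = (THE c::'c. q = seek_state c) in if a = Aux 0 then (q, a, Right)
        else if a = Sym c then (3, Aux 0, Left) else (4, Sym sym0, Right))
    else (1, a, Stay))"

lemma eq_delta_carry[simp]:
  fixes c :: "'c::alphabet" and a :: "'c tsym"
  shows "eq_delta (carry_state c) a =
    (if a = Sep then (seek_state c, a, Right) else (carry_state c, a, Right))"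
proof -
  have "(THE c'. carry_state c = carry_state c') = c" by (rule the_equality) auto
  then show ?thesis unfolding eq_delta_def by (auto simp: Let_def)
qed

lemma eq_delta_seek[simp]:
  fixes c :: "'c::alphabet" and a :: "'c tsym"
  shows "eq_delta (seek_state c) a = (if a = Aux 0 then (seek_state c, a, Right)
        else if a = Sym c then (3, Aux 0, Left) else (4, Sym sym0, Right))"
proof -
  have "(THE c'. seek_state c = seek_state c') = c" by (rule the_equality) auto
  then show ?thesis unfolding eq_delta_def by (auto simp: Let_def)
qed

lemma eq_delta_0_Sym[simp]:
  "eq_delta 0 (Sym c) = (carry_state c, Blank, Right)"
  by (simp add: eq_delta_def)
lemma eq_delta_0_Sep[simp]: "eq_delta 0 Sep = (2, Sep, Right)" by (simp add: eq_delta_def)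
lemma eq_delta_2[simp]: "eq_delta 2 a = (if a = Aux 0 then (2, a, Right) else if a = Sep then (4, Sym sym1, Right)
                        else (4, Sym sym0, Right))" by (simp add: eq_delta_def)
lemma eq_delta_3[simp]:
  "eq_delta 3 a = (if a = Blank then (0, a, Right) else (3, a, Left))"
  by (simp add: eq_delta_def)
lemma eq_delta_4[simp]: "eq_delta 4 a = (1, Blank, Left)" by (simp add: eq_delta_def)

definition tm_eq :: "'c::alphabet tm" where
  "tm_eq = \<lparr>tm_nstates = 5 + 2 * card (UNIV :: 'c set), tm_naux = 1, tm_delta = eq_delta\<rparr>"

lemma eq_delta_valid:
  fixes a :: "'c::alphabet tsym"
  assumes "tm_valid_sym (tm_eq :: 'c tm) a"
  shows "fst (eq_delta q a) < 5 + 2 * card (UNIV :: 'c set) \<and> tm_valid_sym (tm_eq :: 'c tm) (fst (snd (eq_delta q a)))"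
proof -
  have state_bounds: "carry_state (c::'c) < 5 + 2 * card (UNIV :: 'c set)"
    "seek_state (c::'c) < 5 + 2 * card (UNIV :: 'c set)" for c
    using sym_index_less[of c] by (auto simp: carry_state_def seek_state_def)
  show ?thesis
  proof (cases "\<exists>c::'c. q = carry_state c")
    case True then obtain c :: 'c where "q = carry_state c" by blast
    then show ?thesis using assms state_bounds by (auto simp: tm_valid_sym_def)
  next
    case nc: False
    show ?thesis
    proof (cases "\<exists>c::'c. q = seek_state c")
      case True then obtain c :: 'c where "q = seek_state c" by blast
      then show ?thesis using assms state_bounds by (auto simp: tm_valid_sym_def tm_eq_def)
    next
      case False
      with nc assms state_bounds show ?thesis
        by (auto simp: eq_delta_def tm_valid_sym_def tm_eq_def split: tsym.splits)
    qed
  qed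
qed

lemma tm_eq_wf: "tm_wf (tm_eq :: 'c::alphabet tm)"
  unfolding tm_wf_def
proof (intro conjI allI impI)
  show "2 \<le> tm_nstates (tm_eq :: 'c tm)" by (simp add: tm_eq_def)
  fix q a assume "q < tm_nstates (tm_eq :: 'c tm) \<and> tm_valid_sym (tm_eq :: 'c tm) a"
  then show "fst (tm_delta tm_eq q a) < tm_nstates (tm_eq :: 'c tm)"
    "tm_valid_sym (tm_eq :: 'c tm) (fst (snd (tm_delta tm_eq q a)))"
    using eq_delta_valid[of a q] by (auto simp: tm_eq_def)
qed

text \<open>The tape at the beginning of round r.\<close>

definition eq_tape :: "'c list \<Rightarrow> 'c list \<Rightarrow> nat \<Rightarrow> int \<Rightarrow> 'c tsym" where
 "eq_tape w1 w2 r i =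
   (if i < int r then Blank
   else if i < int (length w1) then Sym (w1 ! nat i)
   else if i = int (length w1) then Sep
   else if i \<le> int (length w1) + int r then Aux 0
   else if i \<le> int (length w1) + int (length w2) then Sym (w2 ! nat (i - int (length w1) - 1))
   else if i = int (length w1) + int (length w2) + 1 then Sep else Blank)"

lemma tm_init_eq_tape: "tm_init [w1, w2] = (0, eq_tape w1 w2 0, 0)"
proof -
  have "(if 0 \<le> i \<and> i < int (length (tm_input [w1, w2])) then tm_input [w1, w2] ! nat i else Blank)
        = eq_tape w1 w2 0 i" for i
  proof -
    consider "i < 0" | "0 \<le> i" "i < int (length w1)" | "i = int (length w1)"
      | "int (length w1) < i" "i \<le> int (length w1) + int (length w2)"
      | "i = int (length w1) + int (length w2) + 1" | "i > int (length w1) + int (length w2) + 1"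
      by linarith
    then show ?thesis
    proof cases
      case 2 then show ?thesis by (auto simp: eq_tape_def tm_input_pair nth_append)
    next
      case 3 then show ?thesis by (auto simp: eq_tape_def tm_input_pair nth_append)
    next
      case 4
      then have "nat i - length w1 = Suc (nat (i - int (length w1) - 1))" by linarith
      with 4 show ?thesis by (auto simp: eq_tape_def tm_input_pair nth_append nat_diff_distrib)
    next
      case 5
      then have "nat i - length w1 = Suc (length w2)" by linarith
      with 5 show ?thesis by (auto simp: eq_tape_def tm_input_pair nth_append)
    qed (auto simp: eq_tape_def tm_input_pair)
  qed
  then show ?thesis unfolding tm_init_def by (simp add: fun_eq_iff)
qed

lemma tm_eq_delta[simp]: "tm_delta tm_eq = eq_delta" by (simp add: tm_eq_def)

lemma tm_eq_carry:
  fixes w1 w2 :: "'c::alphabet list"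
  assumes r: "r < length w1"
  shows "(tm_step tm_eq ^^ (length w1 + 1)) (0, eq_tape w1 w2 r, int r) =
    (seek_state (w1 ! r), (eq_tape w1 w2 r)(int r := Blank), int (length w1) + 1 + int r)"
proof -
  let ?n1 = "length w1" and ?c = "w1 ! r"
  define T1 where "T1 = (eq_tape w1 w2 r)(int r := Blank)"
  have s1: "(tm_step tm_eq ^^ 1) (0, eq_tape w1 w2 r, int r) = (carry_state ?c, T1, int r + 1)"
    using r by (simp add: tm_step_def eq_tape_def T1_def dir_off_def)
  have s2: "(tm_step tm_eq ^^ (?n1 - r - 1)) (carry_state ?c, T1, int r + 1) =
      (carry_state ?c, T1, int r + 1 + int (?n1 - r - 1))"
    by (rule tm_scan_right) (use r in \<open>auto simp: T1_def eq_tape_def\<close>)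
  have e2: "int r + 1 + int (?n1 - r - 1) = int ?n1" using r by simp
  have s3: "(tm_step tm_eq ^^ 1) (carry_state ?c, T1, int ?n1) = (seek_state ?c, T1, int ?n1 + 1)"
    using r by (simp add: tm_step_def T1_def eq_tape_def dir_off_def fun_upd_idem_iff)
  have s4: "(tm_step tm_eq ^^ r) (seek_state ?c, T1, int ?n1 + 1) =
      (seek_state ?c, T1, int ?n1 + 1 + int r)"
    by (rule tm_scan_right) (use r in \<open>auto simp: T1_def eq_tape_def\<close>)
  have "(tm_step tm_eq ^^ (r + (1 + ((?n1 - r - 1) + 1)))) (0, eq_tape w1 w2 r, int r) =
      (seek_state ?c, T1, int ?n1 + 1 + int r)"
    by (rule funpow_add_chain[OF funpow_add_chain[OF funpow_add_chain[OF s1 s2[unfolded e2]] s3] s4])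
  moreover have "r + (1 + ((?n1 - r - 1) + 1)) = ?n1 + 1" using r by simp
  ultimately show ?thesis by (simp only: T1_def)
qed

lemma tm_eq_round:
  fixes w1 w2 :: "'c::alphabet list"
  assumes r: "r < length w1" "r < length w2" "w1 ! r = w2 ! r"
  shows "(tm_step tm_eq ^^ (2 * length w1 + 3)) (0, eq_tape w1 w2 r, int r)
       = (0, eq_tape w1 w2 (Suc r), int (Suc r))"
proof -
  let ?n1 = "length w1" and ?T1 = "(eq_tape w1 w2 r)(int r := Blank)"
  have s5: "(tm_step tm_eq ^^ 1) (seek_state (w1 ! r), ?T1, int ?n1 + 1 + int r) =
      (3, eq_tape w1 w2 (Suc r), int ?n1 + int r)"
  proof -
    have "?T1 (int ?n1 + 1 + int r) = Sym (w1 ! r)" using r by (auto simp: eq_tape_def)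
    moreover have "?T1(int ?n1 + 1 + int r := Aux 0) = eq_tape w1 w2 (Suc r)"
      using r by (auto simp: eq_tape_def fun_eq_iff)
    ultimately show ?thesis by (simp add: tm_step_def dir_off_def)
  qed
  have s6: "(tm_step tm_eq ^^ ?n1) (3, eq_tape w1 w2 (Suc r), int ?n1 + int r) =
      (3, eq_tape w1 w2 (Suc r), int r)"
    using tm_scan_left[of 3 ?n1 tm_eq "eq_tape w1 w2 (Suc r)" "int ?n1 + int r"] r
    by (auto simp: eq_tape_def)
  have s7: "(tm_step tm_eq ^^ 1) (3, eq_tape w1 w2 (Suc r), int r) = (0, eq_tape w1 w2 (Suc r), int (Suc r))"
    by (simp add: tm_step_def eq_tape_def dir_off_def fun_upd_idem_iff)
  have "(tm_step tm_eq ^^ (1 + (?n1 + (1 + (?n1 + 1))))) (0, eq_tape w1 w2 r, int r) =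
      (0, eq_tape w1 w2 (Suc r), int (Suc r))"
    by (rule funpow_add_chain[OF funpow_add_chain[OF funpow_add_chain[OF tm_eq_carry[OF r(1)] s5] s6] s7])
  moreover have "1 + (?n1 + (1 + (?n1 + 1))) = 2 * ?n1 + 3" by simp
  ultimately show ?thesis by (simp only:)
qed

lemma tm_output_single: "tp p = Sym x \<Longrightarrow> \<not> is_Sym (tp (p + 1)) \<Longrightarrow> tm_output (q, tp, p) = [x]"
  by (rule tm_output_eq) auto

lemma eq_delta_Suc_Suc_0[simp]:
  "eq_delta (Suc (Suc 0)) a =
     (if a = Aux 0 then (2, a, Right) else if a = Sep then (4, Sym sym1, Right) else (4, Sym sym0, Right))"
  using eq_delta_2[of a] by (simp add: numeral_2_eq_2)

lemma tm_eq_decide_seek: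
  assumes "T p \<noteq> Aux 0" "T p \<noteq> Sym c"
  shows "(tm_step tm_eq ^^ 2) (seek_state c, T, p) = (1, T(p := Sym sym0, p + 1 := Blank), p)"
  using assms by (simp add: numeral_2_eq_2 tm_step_def dir_off_def)

lemma tm_eq_decide_length:
  assumes "T p \<noteq> Aux 0"
  shows "(tm_step tm_eq ^^ 2) (2, T, p) =
    (1, T(p := Sym (if T p = Sep then sym1 else sym0), p + 1 := Blank), p)"
  using assms by (simp add: numeral_2_eq_2 tm_step_def dir_off_def)

lemma tm_eq_mismatch:
  fixes w1 w2 :: "'c::alphabet list"
  assumes r: "r < length w1" "\<not> (r < length w2 \<and> w1 ! r = w2 ! r)"
  shows "\<exists>T p. (tm_step tm_eq ^^ (length w1 + 3)) (0, eq_tape w1 w2 r, int r) = (1, T, p) \<and>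
      tm_output (1::nat, T, p) = bw (w1 = w2)"
proof -
  let ?n1 = "length w1" and ?T1 = "(eq_tape w1 w2 r)(int r := Blank)"
  let ?p = "int ?n1 + 1 + int r"
  have "?T1 ?p \<noteq> Aux 0" "?T1 ?p \<noteq> Sym (w1 ! r)"
    using r by (auto simp: eq_tape_def)
  then have "(tm_step tm_eq ^^ (2 + (?n1 + 1))) (0, eq_tape w1 w2 r, int r) =
      (1, ?T1(?p := Sym sym0, ?p + 1 := Blank), ?p)"
    by (rule funpow_add_chain[OF tm_eq_carry[OF r(1)] tm_eq_decide_seek])
  moreover have "2 + (?n1 + 1) = ?n1 + 3" by simp
  moreover have "tm_output (1::nat, ?T1(?p := Sym sym0, ?p + 1 := Blank), ?p) = [sym0]"
    by (rule tm_output_single) (auto simp: is_Sym_def)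
  moreover have "[sym0] = bw (w1 = w2)" using r by (auto simp: bw_def)
  ultimately show ?thesis by metis
qed

lemma tm_eq_final:
  fixes w1 w2 :: "'c::alphabet list"
  assumes prefix: "\<forall>j<length w1. j < length w2 \<and> w1 ! j = w2 ! j"
  shows "\<exists>T p. (tm_step tm_eq ^^ (length w1 + 3)) (0, eq_tape w1 w2 (length w1), int (length w1)) = (1, T, p) \<and>
      tm_output (1::nat, T, p) = bw (w1 = w2)"
proof -
  let ?n1 = "length w1"
  let ?T = "eq_tape w1 w2 ?n1"
  have s1: "(tm_step tm_eq ^^ 1) (0, ?T, int ?n1) = (2, ?T, int ?n1 + 1)"
    by (simp add: tm_step_def eq_tape_def dir_off_def fun_upd_idem_iff)
  have s2: "(tm_step tm_eq ^^ ?n1) (2, ?T, int ?n1 + 1) = (2, ?T, int ?n1 + 1 + int ?n1)"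
    by (rule tm_scan_right) (auto simp: eq_tape_def)
  let ?p = "int ?n1 + 1 + int ?n1"
  have c: "?T ?p \<noteq> Aux 0" by (auto simp: eq_tape_def)
  have ss: "(?T ?p = Sep) = (length w2 = ?n1)" by (auto simp: eq_tape_def)
  have s3: "(tm_step tm_eq ^^ 2) (2, ?T, ?p) =
      (1, ?T(?p := Sym (if length w2 = ?n1 then sym1 else sym0), ?p + 1 := Blank), ?p)"
    using tm_eq_decide_length[where T="?T" and p="?p", OF c] ss by simp
  have "(tm_step tm_eq ^^ ((2 + ?n1) + 1)) (0, ?T, int ?n1)
       = (1, ?T(?p := Sym (if length w2 = ?n1 then sym1 else sym0), ?p + 1 := Blank), ?p)"
    apply (rule funpow_add_chain[OF s1])
    apply (rule funpow_add_chain[OF s2])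
    apply (rule s3)
    done
  moreover have "(2 + ?n1) + 1 = ?n1 + 3" by simp
  moreover have "tm_output (1::nat, ?T(?p := Sym (if length w2 = ?n1 then sym1 else sym0), ?p + 1 := Blank), ?p)
     = [if length w2 = ?n1 then sym1 else sym0]"
    by (rule tm_output_single) (auto simp: is_Sym_def)
  moreover have "[if length w2 = ?n1 then sym1 else sym0] = bw (w1 = w2)"
    using prefix by (auto simp: bw_def intro: nth_equalityI)
  ultimately show ?thesis by metis
qed

lemma tm_eq_run:
  fixes w1 w2 :: "'c::alphabet list"
  shows "r \<le> length w1 \<Longrightarrow> (\<forall>j<r. j < length w2 \<and> w1 ! j = w2 ! j) \<Longrightarrow>
    \<exists>t T p. t \<le> (length w1 - r) * (2 * length w1 + 3) + length w1 + 3 \<and>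
      (tm_step tm_eq ^^ t) (0, eq_tape w1 w2 r, int r) = (1, T, p) \<and>
      tm_output (1::nat, T, p) = bw (w1 = w2)"
proof (induction "length w1 - r" arbitrary: r)
  case 0
  then have "r = length w1" by simp
  then obtain T p where "(tm_step tm_eq ^^ (length w1 + 3)) (0, eq_tape w1 w2 r, int r) = (1, T, p)"
    "tm_output (1::nat, T, p) = bw (w1 = w2)"
    using tm_eq_final[of w1 w2] 0 by auto
  then show ?case by (intro exI[of _ "length w1 + 3"]) auto
next
  case (Suc d)
  then have r: "r < length w1" by simp
  show ?case
  proof (cases "r < length w2 \<and> w1 ! r = w2 ! r")
    case True
    have d: "d = length w1 - Suc r" using Suc by simp
    have pre: "\<forall>j<Suc r. j < length w2 \<and> w1 ! j = w2 ! j" using Suc.prems True less_Suc_eq by auto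
    obtain t T p where t: "t \<le> (length w1 - Suc r) * (2 * length w1 + 3) + length w1 + 3"
      "(tm_step tm_eq ^^ t) (0, eq_tape w1 w2 (Suc r), int (Suc r)) = (1, T, p)"
      "tm_output (1::nat, T, p) = bw (w1 = w2)"
      using Suc.hyps(1)[OF d] r pre by force
    have "(tm_step tm_eq ^^ (t + (2 * length w1 + 3))) (0, eq_tape w1 w2 r, int r) = (1, T, p)"
      by (rule funpow_add_chain[OF tm_eq_round[OF r True[THEN conjunct1] True[THEN conjunct2]] t(2)])
    moreover have "t + (2 * length w1 + 3) \<le> (length w1 - r) * (2 * length w1 + 3) + length w1 + 3"
      using t(1) r by (simp add: Suc_diff_Suc[symmetric])
    ultimately show ?thesis using t(3) by blast
  next
    case False
    then obtain T p where "(tm_step tm_eq ^^ (length w1 + 3)) (0, eq_tape w1 w2 r, int r) = (1, T, p)"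
      "tm_output (1::nat, T, p) = bw (w1 = w2)"
      using tm_eq_mismatch[OF r False] by blast
    then show ?thesis by (intro exI[of _ "length w1 + 3"]) auto
  qed
qed

lemma poly_time_op_eq: "poly_time_computable (op_ar op_eq) (op_sem (op_eq::'c::alphabet operator))"
  unfolding poly_time_computable_def
proof (rule exI[of _ tm_eq], rule exI[of _ "[:3, 4, 2:]"], intro conjI allI impI)
  show "tm_wf (tm_eq :: 'c tm)" by (rule tm_eq_wf)
  fix ws :: "'c list list" assume "length ws = op_ar op_eq"
  then obtain w1 w2 where ws: "ws = [w1, w2]"
    by (auto simp: op_eq_def length_Suc_conv numeral_2_eq_2)
  obtain t T p where t: "t \<le> (length w1 - 0) * (2 * length w1 + 3) + length w1 + 3"
      "(tm_step tm_eq ^^ t) (0, eq_tape w1 w2 0, int 0) = (1, T, p)"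
      "tm_output (1::nat, T, p) = bw (w1 = w2)"
    using tm_eq_run[of 0 w1 w2] by auto
  have b: "t \<le> poly [:3, 4, 2:] (sum_list (map length ws))"
  proof -
    let ?n = "length w1 + length w2"
    have "t \<le> length w1 * (2 * length w1 + 3) + length w1 + 3" using t(1) by simp
    also have "\<dots> \<le> ?n * (2 * ?n + 3) + ?n + 3" by (intro add_mono mult_mono) auto
    also have "\<dots> = poly [:3, 4, 2:] ?n" by (simp add: algebra_simps)
    finally show ?thesis by (simp add: ws)
  qed
  show "\<exists>t. t \<le> poly [:3, 4, 2:] (sum_list (map length ws)) \<and>
           fst ((tm_step tm_eq ^^ t) (tm_init ws)) = 1 \<and>
           tm_output ((tm_step tm_eq ^^ t) (tm_init ws)) = op_sem op_eq ws"
    using t b by (intro exI[of _ t]) (simp add: ws tm_init_eq_tape op_eq_def)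
qed

section \<open>A safe operator environment\<close>

text \<open>All operators used below are positive. Those in ops_neutral may return
  their result at any level not exceeding the levels of their arguments; the
  others (head and cons) only at level 0. The simulating program keeps the
  registers of the simulated machine at level 0 and its loop counters at level 1.\<close>

definition ops_used :: "'c::alphabet operator set" where
  "ops_used = {op_zero, op_tail, op_head, op_eq} \<union> range op_cons"

definition ops_neutral :: "'c::alphabet operator set" where
  "ops_neutral = {op_eq, op_zero, op_tail}"

definition op_signatures :: "'c::alphabet operator \<Rightarrow> nat list set" where
  "op_signatures op = {ts. length ts = Suc (op_ar op) \<and>
     (\<forall>i<op_ar op. last ts \<le> ts ! i) \<and> (last ts = 0 \<or> op \<in> ops_neutral)}"

definition env_used :: "'c::alphabet op_env" where
  "env_used op = (if op \<in> ops_used then Some (\<lambda>ti to. op_signatures op) else None)"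

lemma maxlen_ge: "i < length ws \<Longrightarrow> length (ws ! i) \<le> maxlen ws"
proof (induction ws arbitrary: i)
  case (Cons w ws)
  then show ?case by (cases i) (auto simp: maxlen_def le_max_iff_disj)
qed simp

lemma ops_used_positive:
  fixes op :: "'c::alphabet operator"
  shows "op \<in> ops_used \<Longrightarrow> positive_op op"
proof -
  assume u: "op \<in> ops_used"
  have m0: "length ws = Suc 0 \<Longrightarrow> length (ws ! 0) \<le> maxlen ws" for ws :: "'c list list"
    by (rule maxlen_ge) simp
  show ?thesis
    unfolding positive_op_def
  proof (rule exI[of _ 1], intro allI impI)
    fix ws :: "'c list list" assume l: "length ws = op_ar op"
    show "length (op_sem op ws) \<le> maxlen ws + 1"
      using u l m0[of ws]
      unfolding ops_used_def op_zero_def op_tail_def op_head_def op_eq_def op_cons_def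
      by auto
  qed
qed

lemma ops_neutral_neutral: "op \<in> ops_neutral \<Longrightarrow> neutral_op op"
proof -
  assume "op \<in> ops_neutral"
  then consider "op = op_eq" | "op = op_zero" | "op = op_tail" by (auto simp: ops_neutral_def)
  then show ?thesis
  proof cases
    case 1 then show ?thesis unfolding neutral_op_def op_eq_def by (simp add: bw_def)
  next
    case 2 then show ?thesis unfolding neutral_op_def op_zero_def by simp
  next
    case 3
    have "sublist (tl w) w" for w :: "'a list" unfolding sublist_altdef' by (intro exI[of _ "tl w"]) simp
    then show ?thesis using 3 unfolding neutral_op_def op_tail_def by simp
  qed
qed

lemma ops_used_poly_time:
  "op \<in> (ops_used :: 'c::alphabet operator set) \<Longrightarrow> poly_time_computable (op_ar op) (op_sem op)"
  unfolding ops_used_def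
  using poly_time_op_zero poly_time_op_tail poly_time_op_head poly_time_op_eq poly_time_op_cons
  by auto

lemma safe_env_used:
  assumes "required_ops \<subseteq> Ops"
  shows "safe_env Ops (env_used :: 'c::alphabet op_env)"
  unfolding safe_env_def
proof (intro allI impI)
  fix op :: "'c operator" and D :: "nat \<Rightarrow> nat \<Rightarrow> nat list set"
  assume "env_used op = Some D"
  then have u: "op \<in> ops_used" and D: "D = (\<lambda>ti to. op_signatures op)"
    by (auto simp: env_used_def split: if_splits)
  have "op \<in> Ops" using u assms(1) by (auto simp: ops_used_def required_ops_def)
  moreover have "positive_op op" using ops_used_positive[OF u] .
  moreover note ops_used_poly_time[OF u]
  moreover have "op \<in> ops_neutral \<Longrightarrow> neutral_op op" by (rule ops_neutral_neutral)
  ultimately show "op \<in> Ops \<and> (neutral_op op \<or> positive_op op \<or> polynomial_op op) \<and>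
     poly_time_computable (op_ar op) (op_sem op) \<and>
     (\<forall>ti to ts. ts \<in> D ti to \<longrightarrow> length ts = Suc (op_ar op) \<and>
        (neutral_op op \<longrightarrow> (\<forall>i<op_ar op. last ts \<le> ts ! i)) \<and>
        (positive_op op \<and> \<not> neutral_op op \<longrightarrow>
           (\<forall>i<op_ar op. last ts \<le> ts ! i) \<and> (last ts < ti \<or> last ts = 0)) \<and>
        (polynomial_op op \<and> \<not> positive_op op \<longrightarrow> to = 0))"
    unfolding D op_signatures_def by auto
qed

fun plain_expr :: "var_env \<Rightarrow> 'c::alphabet expr \<Rightarrow> bool" where
  "plain_expr \<Gamma> (Var x) = (x \<in> dom \<Gamma>)"
| "plain_expr \<Gamma> (Op op es) = (op \<in> ops_used \<and> length es = op_ar op \<and> (\<forall>e\<in>set es. plain_expr \<Gamma> e))"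
| "plain_expr \<Gamma> (Declass a b) = False"

fun var_level :: "var_env \<Rightarrow> 'c expr \<Rightarrow> nat" where
  "var_level \<Gamma> (Var x) = the (\<Gamma> x)"
| "var_level \<Gamma> _ = 0"

lemma plain_expr_etype: "plain_expr \<Gamma> e \<Longrightarrow> etype \<Gamma> env_used ti to e (var_level \<Gamma> e)"
proof (induction e)
  case (Var x)
  then show ?case by (auto intro: etype.intros)
next
  case (Op op es)
  let ?ts = "map (var_level \<Gamma>) es @ [0]"
  have "etype \<Gamma> env_used ti to (Op op es) (last ?ts)"
    apply (rule TOp[where D="\<lambda>ti to. op_signatures op"])
    using Op.prems apply (simp add: env_used_def)
    using Op by (auto simp: op_signatures_def nth_append)
  then show ?case by simp
qed simp

lemma nth_Cons_replicate[simp]: "i \<le> n \<Longrightarrow> (\<tau> # replicate n \<tau>) ! i = \<tau>"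
  by (cases i) auto

lemma etype_neutral_Op:
  assumes "op \<in> ops_neutral" "length es = op_ar op" "\<forall>i<length es. etype \<Gamma> env_used ti to (es ! i) \<tau>"
  shows "etype \<Gamma> env_used ti to (Op op es) \<tau>"
proof -
  have "etype \<Gamma> env_used ti to (Op op es) (last (replicate (Suc (length es)) \<tau>))"
    apply (rule TOp[where D="\<lambda>ti to. op_signatures op"])
    using assms by (auto simp: env_used_def op_signatures_def ops_neutral_def ops_used_def)
  then show ?thesis by (cases "es = []") (auto simp: last_replicate)
qed

lemma etype_counter_exprs:
  assumes "\<Gamma> c = Some 1" "\<Gamma> d = Some 1"
  shows "etype \<Gamma> env_used ti to (ZERO::'c::alphabet expr) 1"
    "etype \<Gamma> env_used ti to (TRUE::'c::alphabet expr) 1"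
    "etype \<Gamma> env_used ti to (EPS::'c::alphabet expr) 1"
    "etype \<Gamma> env_used ti to (TL (Var c)::'c::alphabet expr) 1"
    "etype \<Gamma> env_used ti to (COUNT_GUARD c d::'c::alphabet expr) 1"
    "etype \<Gamma> env_used ti to (EQ (Var c) EPS::'c::alphabet expr) 1"
proof -
  have z: "etype \<Gamma> env_used ti to (ZERO::'c::alphabet expr) 1"
    unfolding ZERO_def by (rule etype_neutral_Op) (auto simp: ops_neutral_def op_zero_def)
  show "etype \<Gamma> env_used ti to (ZERO::'c::alphabet expr) 1" by (fact z)
  show "etype \<Gamma> env_used ti to (TRUE::'c::alphabet expr) 1"
    unfolding TRUE_def using z
    by (intro etype_neutral_Op) (auto simp: ops_neutral_def op_eq_def less_Suc_eq)
  have e: "etype \<Gamma> env_used ti to (EPS::'c::alphabet expr) 1"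
    unfolding EPS_def using z by (intro etype_neutral_Op) (auto simp: ops_neutral_def op_tail_def)
  show "etype \<Gamma> env_used ti to (EPS::'c::alphabet expr) 1" by (fact e)
  have vc: "etype \<Gamma> env_used ti to (Var c :: 'c expr) 1" "etype \<Gamma> env_used ti to (Var d :: 'c expr) 1"
    using assms by (auto intro: TVar)
  show "etype \<Gamma> env_used ti to (TL (Var c)::'c::alphabet expr) 1"
    unfolding TL_def using vc by (intro etype_neutral_Op) (auto simp: ops_neutral_def op_tail_def)
  show "etype \<Gamma> env_used ti to (EQ (Var c) EPS::'c::alphabet expr) 1"
    unfolding EQ_def using vc e
    by (intro etype_neutral_Op) (auto simp: ops_neutral_def op_eq_def less_Suc_eq)
  have cc: "etype \<Gamma> env_used ti to (EQ (Var c) (Var c)::'c::alphabet expr) 1"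
    unfolding EQ_def using vc
    by (intro etype_neutral_Op) (auto simp: ops_neutral_def op_eq_def less_Suc_eq)
  have dcc: "etype \<Gamma> env_used ti to (EQ (Var d) (EQ (Var c) (Var c))::'c::alphabet expr) 1"
    unfolding EQ_def using vc cc
    by (intro etype_neutral_Op) (auto simp: ops_neutral_def op_eq_def less_Suc_eq EQ_def)
  show "etype \<Gamma> env_used ti to (COUNT_GUARD c d::'c::alphabet expr) 1"
    unfolding COUNT_GUARD_def EQ_def using dcc z
    by (intro etype_neutral_Op) (auto simp: ops_neutral_def op_eq_def less_Suc_eq EQ_def)
qed

fun is_op :: "'c expr \<Rightarrow> bool" where
  "is_op (Op op es) = True"
| "is_op _ = False"

fun plain_stmt :: "var_env \<Rightarrow> 'c::alphabet stmt \<Rightarrow> bool" where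
  "plain_stmt \<Gamma> Skip = True"
| "plain_stmt \<Gamma> (Assign x e) = (\<Gamma> x = Some 0 \<and> plain_expr \<Gamma> e)"
| "plain_stmt \<Gamma> (Seq a b) = (plain_stmt \<Gamma> a \<and> plain_stmt \<Gamma> b)"
| "plain_stmt \<Gamma> (If e a b) = (plain_expr \<Gamma> e \<and> is_op e \<and> plain_stmt \<Gamma> a \<and> plain_stmt \<Gamma> b)"
| "plain_stmt \<Gamma> (While e b) = False"
| "plain_stmt \<Gamma> (Break e) = False"

lemma plain_stmt_stype_0: "plain_stmt \<Gamma> s \<Longrightarrow> stype \<Gamma> env_used ti to s 0"
proof (induction s)
  case Skip then show ?case by (auto intro: stype.intros)
next
  case (Assign x e) then show ?case by (auto intro!: TAsg plain_expr_etype)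
next
  case (Seq a b) then show ?case by (auto intro: stype.intros)
next
  case (If e a b)
  then have "etype \<Gamma> env_used ti to e 0" using plain_expr_etype[of \<Gamma> e ti to] by (cases e) auto
  with If show ?case by (auto intro: TCnd)
qed auto

lemma plain_stmt_stype: "plain_stmt \<Gamma> s \<Longrightarrow> stype \<Gamma> env_used ti to s 1"
  using plain_stmt_stype_0 TSub by fastforce

lemma stype_REPEAT: "stype \<Gamma> \<Delta> ti to B 1 \<Longrightarrow> stype \<Gamma> \<Delta> ti to (REPEAT n B) 1"
proof (induction n)
  case 0
  have "stype \<Gamma> \<Delta> ti to (Skip :: 'a stmt) 0" by (rule TSkip)
  then show ?case by (auto intro: TSub)
next
  case (Suc n) then show ?case by (auto intro: TSeq)
qed

lemma stype_COUNT_LOOP: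
  assumes "\<Gamma> c = Some 1" "\<Gamma> d = Some 1" "stype \<Gamma> env_used 1 1 S 1" "t \<le> 1"
  shows "stype \<Gamma> env_used t t (COUNT_LOOP c d (S::'c::alphabet stmt)) 1"
proof -
  note E = etype_counter_exprs[OF assms(1,2), where 'c='c]
  have upd: "stype \<Gamma> env_used 1 1 (COUNT_DOWN c d :: 'c stmt) 1"
    unfolding COUNT_DOWN_def using assms E by (auto intro!: TCnd TAsg)
  have b: "stype \<Gamma> env_used 1 1 (Seq S (COUNT_DOWN c d)) 1" using upd assms by (auto intro: TSeq)
  show ?thesis
  proof (cases "t = 0")
    case True
    then show ?thesis unfolding COUNT_LOOP_def using b E by (auto intro: TWi)
  next
    case False
    then have "t = 1" using assms by auto
    then show ?thesis unfolding COUNT_LOOP_def using b E by (auto intro: TWh)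
  qed
qed

lemma stype_COUNT_LOOPS:
  assumes "\<And>l. l < length js \<Longrightarrow> \<Gamma> (cv l) = Some 1 \<and> \<Gamma> (dv l) = Some 1"
    "\<And>j. j \<in> set js \<Longrightarrow> \<Gamma> (src j) = Some 1"
    "\<And>t. t \<le> 1 \<Longrightarrow> stype \<Gamma> env_used t t S 1" "t \<le> 1"
  shows "stype \<Gamma> env_used t t (COUNT_LOOPS cv dv src js (S::'c::alphabet stmt)) 1"
  using assms(1,2,4)
proof (induction js arbitrary: t)
  case Nil then show ?case using assms(3) by simp
next
  case (Cons i js)
  let ?l = "length js"
  have g: "\<Gamma> (cv ?l) = Some 1" "\<Gamma> (dv ?l) = Some 1" "\<Gamma> (src i) = Some 1" using Cons.prems by auto
  have inner: "stype \<Gamma> env_used 1 1 (COUNT_LOOPS cv dv src js S) 1" using Cons by auto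
  have a1: "stype \<Gamma> env_used t t (Assign (cv ?l) (Var (src i)) :: 'c stmt) 1"
    using g by (auto intro!: TAsg TVar)
  have a2: "stype \<Gamma> env_used t t (Assign (dv ?l) ZERO :: 'c stmt) 1"
    using g etype_counter_exprs(1)[OF g(1,2)] by (auto intro!: TAsg)
  have lp: "stype \<Gamma> env_used t t (COUNT_LOOP (cv ?l) (dv ?l) (COUNT_LOOPS cv dv src js S)) 1"
    using stype_COUNT_LOOP[OF g(1,2) inner Cons.prems(3)] .
  show ?case using a1 a2 lp by (auto intro: TSeq)
qed

fun IF_PREFIX :: "'c::alphabet list \<Rightarrow> var \<Rightarrow> nat \<Rightarrow> 'c stmt \<Rightarrow> 'c stmt \<Rightarrow> 'c stmt" where
  "IF_PREFIX [] v i act els = act"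
| "IF_PREFIX (x # u) v i act els = If (EQ (HD (DROP i (Var v))) (WORD [x])) (IF_PREFIX u v (Suc i) act els) els"

lemma take_Suc_0_drop_eq_iff: "take (Suc 0) (drop i w) = [x] \<longleftrightarrow> (i < length w \<and> w ! i = x)"
proof (cases "i < length w")
  case True
  then have "drop i w = w ! i # drop (Suc i) w" by (rule Cons_nth_drop_Suc[symmetric])
  then show ?thesis using True by simp
next
  case False then show ?thesis by simp
qed

lemma prefix_drop_Cons:
  "prefix (x # u) (drop i w) \<longleftrightarrow> i < length w \<and> w ! i = x \<and> prefix u (drop (Suc i) w)"
proof (cases "i < length w")
  case True
  then have "drop i w = w ! i # drop (Suc i) w" by (rule Cons_nth_drop_Suc[symmetric])
  then show ?thesis using True by auto
next
  case False then show ?thesis by simp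
qed

lemma exec_IF_PREFIX:
  "exec \<mu> (IF_PREFIX u v i act els) = (if prefix u (drop i (\<mu> v)) then exec \<mu> act else exec \<mu> els)"
proof (induction u arbitrary: i)
  case (Cons x u)
  have "exec \<mu> (IF_PREFIX (x # u) v i act els) =
     (if take (Suc 0) (drop i (\<mu> v)) = [x] then exec \<mu> (IF_PREFIX u v (Suc i) act els) else exec \<mu> els)"
    by simp
  also have "\<dots> = (if prefix (x # u) (drop i (\<mu> v)) then exec \<mu> act else exec \<mu> els)"
    unfolding Cons.IH take_Suc_0_drop_eq_iff prefix_drop_Cons by simp
  finally show ?case .
qed simp

fun CASES_PREFIX :: "('c::alphabet list \<times> var \<times> 'c stmt) list \<Rightarrow> 'c stmt \<Rightarrow> 'c stmt" where
  "CASES_PREFIX [] d = d"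
| "CASES_PREFIX ((u, v, a) # rest) d = IF_PREFIX u v 0 a (CASES_PREFIX rest d)"

lemma exec_CASES_PREFIX_Cons: "exec \<mu> (CASES_PREFIX ((u, v, a) # rest) d) =
   (if prefix u (\<mu> v) then exec \<mu> a else exec \<mu> (CASES_PREFIX rest d))"
  by (simp add: exec_IF_PREFIX)

declare CASES_PREFIX.simps(2)[simp del]

lemma exec_CASES_PREFIX_map_none:
  "(\<And>x. x \<in> set xs \<Longrightarrow> \<not> prefix (f x) (\<mu> v)) \<Longrightarrow>
   exec \<mu> (CASES_PREFIX (map (\<lambda>x. (f x, v, g x)) xs) d) = exec \<mu> d"
proof (induction xs)
  case (Cons a xs) then show ?case by (simp add: exec_CASES_PREFIX_Cons)
qed simp

lemma exec_CASES_PREFIX_map_hit: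
  assumes "y \<in> set xs" "prefix (f y) (\<mu> v)" "\<And>x. x \<in> set xs \<Longrightarrow> prefix (f x) (\<mu> v) \<Longrightarrow> x = y"
  shows "exec \<mu> (CASES_PREFIX (map (\<lambda>x. (f x, v, g x)) xs) d) = exec \<mu> (g y)"
  using assms
proof (induction xs)
  case (Cons a xs)
  show ?case
  proof (cases "prefix (f a) (\<mu> v)")
    case True
    then have "a = y" using Cons.prems(3)[of a] by simp
    then show ?thesis using True by (simp add: exec_CASES_PREFIX_Cons)
  next
    case False
    then have y: "y \<in> set xs" using Cons.prems(1,2) by auto
    have "exec \<mu> (CASES_PREFIX (map (\<lambda>x. (f x, v, g x)) xs) d) = exec \<mu> (g y)"
      using Cons.IH[OF y Cons.prems(2)] Cons.prems(3) by simp
    then show ?thesis using False by (simp add: exec_CASES_PREFIX_Cons)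
  qed
qed simp

lemma loop_free_IF_PREFIX: "loop_free act \<Longrightarrow> loop_free els \<Longrightarrow> loop_free (IF_PREFIX u v i act els)"
  by (induction u arbitrary: i) auto
lemma loop_free_CASES_PREFIX:
  "(\<forall>(u,v,a)\<in>set xs. loop_free a) \<Longrightarrow> loop_free d \<Longrightarrow> loop_free (CASES_PREFIX xs d)"
  by (induction xs d rule: CASES_PREFIX.induct) (auto intro: loop_free_IF_PREFIX simp: CASES_PREFIX.simps)

lemma stmt_vars_IF_PREFIX:
  "stmt_vars (IF_PREFIX u v i act els) \<subseteq> insert v (stmt_vars act \<union> stmt_vars els)"
  by (induction u arbitrary: i) (auto simp: EQ_def HD_def)
lemma stmt_vars_CASES_PREFIX:
  "stmt_vars (CASES_PREFIX xs d) \<subseteq> (\<Union>(u,v,a)\<in>set xs. insert v (stmt_vars a)) \<union> stmt_vars d"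
  by (induction xs d rule: CASES_PREFIX.induct) (use stmt_vars_IF_PREFIX in \<open>fastforce simp: CASES_PREFIX.simps\<close>)+

lemma assigned_IF_PREFIX: "assigned (IF_PREFIX u v i act els) \<subseteq> assigned act \<union> assigned els"
  by (induction u arbitrary: i) auto
lemma assigned_CASES_PREFIX:
  "assigned (CASES_PREFIX xs d) \<subseteq> (\<Union>(u,v,a)\<in>set xs. assigned a) \<union> assigned d"
  by (induction xs d rule: CASES_PREFIX.induct) (use assigned_IF_PREFIX in \<open>fastforce simp: CASES_PREFIX.simps\<close>)+

lemma plain_expr_simps[simp]:
  "plain_expr \<Gamma> (ZERO :: 'c::alphabet expr)" "plain_expr \<Gamma> (EPS :: 'c::alphabet expr)"
  "plain_expr \<Gamma> (TRUE :: 'c::alphabet expr)"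
  "plain_expr \<Gamma> (EQ a b) = (plain_expr \<Gamma> a \<and> plain_expr \<Gamma> b)" "plain_expr \<Gamma> (HD a) = plain_expr \<Gamma> a"
  "plain_expr \<Gamma> (TL a) = plain_expr \<Gamma> a" "plain_expr \<Gamma> (CONS c a) = plain_expr \<Gamma> a"
  by (auto simp: ZERO_def EPS_def TRUE_def EQ_def HD_def TL_def CONS_def ops_used_def
     op_zero_def op_tail_def op_eq_def op_head_def op_cons_def)

lemma plain_expr_PUSH[simp]: "plain_expr \<Gamma> (PUSH u e) = plain_expr \<Gamma> e"
  by (induction u) (auto simp: PUSH_def)
lemma plain_expr_WORD[simp]: "plain_expr \<Gamma> (WORD u :: 'c::alphabet expr)" by (simp add: WORD_def)
lemma plain_expr_DROP[simp]: "plain_expr \<Gamma> (DROP n e) = plain_expr \<Gamma> e"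
  by (induction n) (auto simp: DROP_def)

lemma is_op_EQ[simp]: "is_op (EQ a b)" by (simp add: EQ_def)

lemma plain_stmt_IF_PREFIX:
  "plain_stmt \<Gamma> act \<Longrightarrow> plain_stmt \<Gamma> els \<Longrightarrow> v \<in> dom \<Gamma> \<Longrightarrow> plain_stmt \<Gamma> (IF_PREFIX u v i act els)"
  by (induction u arbitrary: i) auto
lemma plain_stmt_CASES_PREFIX:
  "(\<forall>(u,v,a)\<in>set xs. plain_stmt \<Gamma> a \<and> v \<in> dom \<Gamma>) \<Longrightarrow> plain_stmt \<Gamma> d \<Longrightarrow> plain_stmt \<Gamma> (CASES_PREFIX xs d)"
  by (induction xs d rule: CASES_PREFIX.induct) (auto intro: plain_stmt_IF_PREFIX simp: CASES_PREFIX.simps)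

section \<open>Tape symbol encoding\<close>

fun aux_code :: "'c tsym \<Rightarrow> nat" where
  "aux_code Blank = 0" | "aux_code Sep = 1" | "aux_code (Aux i) = Suc (Suc i)" | "aux_code (Sym c) = 0"

definition enc_sym :: "'c::alphabet tsym \<Rightarrow> 'c list" where
  "enc_sym a = (case a of Sym c \<Rightarrow> [sym0, c] | _ \<Rightarrow> replicate (Suc (aux_code a)) sym1 @ [sym0])"

lemma enc_sym_Sym[simp]: "enc_sym (Sym c) = [sym0, c]" by (simp add: enc_sym_def)

definition enc_tape :: "'c::alphabet tsym list \<Rightarrow> 'c list" where
  "enc_tape xs = concat (map enc_sym xs)"

lemma enc_tape_simps[simp]: "enc_tape [] = []" "enc_tape (a # xs) = enc_sym a @ enc_tape xs"
  "enc_tape (xs @ ys) = enc_tape xs @ enc_tape ys"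
  by (auto simp: enc_tape_def)

lemma enc_sym_ne[simp]: "enc_sym a \<noteq> []" by (cases a) (auto simp: enc_sym_def)

lemma prefix_replicate_snoc_eq:
  "prefix (replicate m x @ [y]) (replicate n x @ y # r) \<Longrightarrow> x \<noteq> y \<Longrightarrow> m = n"
proof (induction m arbitrary: n)
  case 0 then show ?case by (cases n) auto
next
  case (Suc m) then show ?case by (cases n) auto
qed

lemma aux_code_inj: "\<not> is_Sym a \<Longrightarrow> \<not> is_Sym b \<Longrightarrow> aux_code a = aux_code b \<Longrightarrow> a = b"
  by (cases a; cases b) (auto simp: is_Sym_def)

lemma enc_sym_nonSym: "\<not> is_Sym a \<Longrightarrow> enc_sym a = sym1 # replicate (aux_code a) sym1 @ [sym0]"
  by (cases a) (auto simp: enc_sym_def is_Sym_def)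

lemma enc_sym_prefix_free:
  assumes p: "prefix (enc_sym a) (enc_sym b @ r)" shows "a = b"
proof (cases "is_Sym a")
  case True
  then obtain c where a: "a = Sym c" by (cases a) (auto simp: is_Sym_def)
  show ?thesis
  proof (cases "is_Sym b")
    case True
    then obtain c' where "b = Sym c'" by (cases b) (auto simp: is_Sym_def)
    then show ?thesis using p a by (simp add: enc_sym_def)
  next
    case False
    then show ?thesis using p a by (simp add: enc_sym_nonSym)
  qed
next
  case na: False
  show ?thesis
  proof (cases "is_Sym b")
    case True
    then obtain c' where "b = Sym c'" by (cases b) (auto simp: is_Sym_def)
    then show ?thesis using p na by (simp add: enc_sym_nonSym)
  next
    case False
    have "prefix (replicate (aux_code a) sym1 @ [sym0]) (replicate (aux_code b) sym1 @ sym0 # r)"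
      using p na False by (simp add: enc_sym_nonSym)
    then have "aux_code a = aux_code b" by (rule prefix_replicate_snoc_eq) simp
    then show ?thesis using na False aux_code_inj by blast
  qed
qed

lemma enc_sym_prefix_enc_tape_iff: "prefix (enc_sym a) (enc_tape (b # r)) \<longleftrightarrow> a = b"
proof
  assume "prefix (enc_sym a) (enc_tape (b # r))"
  then show "a = b" using enc_sym_prefix_free[of a b "enc_tape r"] by (simp only: enc_tape_simps)
qed simp

lemma enc_tape_Nil_iff[simp]: "enc_tape xs = [] \<longleftrightarrow> xs = []"
  by (cases xs) auto

lemma not_prefix_Sym_enc_sym: "\<not> is_Sym b \<Longrightarrow> \<not> prefix [sym0, c] (enc_sym b @ r)"
  by (simp add: enc_sym_nonSym)

section \<open>The macro step of the simulation\<close>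

text \<open>Register layout: 0 holds the phase and 1 the state of the simulated machine,
  both in unary; 2 holds the encoded tape to the left of the head, nearest cell
  first, and 3 the encoded tape from the head on; 4 holds the rest of the input
  word being loaded and 5 its index in unary; 6 flags a pending separator; 7 and 8
  receive the output, first reversed and then in order. The inputs are in the
  registers input_var i. One execution of MACRO_STEP performs one elementary step
  of the current phase: 0 writes the inputs onto the left tape (in reverse), 1 moves
  them to the right tape, 2 simulates one transition, 3 reads the output word off
  the tape and 4 reverses it. Phase 5 is final: there MACRO_STEP does nothing.\<close>

definition letters :: "'c::alphabet list" where "letters = sorted_list_of_set UNIV"

lemma set_letters[simp]: "set (letters :: 'c::alphabet list) = UNIV"
  by (simp add: letters_def)

definition tape_syms :: "'c::alphabet tm \<Rightarrow> 'c tsym list" where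
  "tape_syms M = [Blank, Sep] @ map Sym letters @ map Aux [0..<tm_naux M]"

lemma set_tape_syms: "a \<in> set (tape_syms M) \<longleftrightarrow> tm_valid_sym M a"
  by (cases a) (auto simp: tape_syms_def tm_valid_sym_def)

definition input_var :: "nat \<Rightarrow> var" where "input_var i = 10 + i"

definition SET_PHASE :: "nat \<Rightarrow> 'c::alphabet stmt" where
  "SET_PHASE p = Assign 0 (WORD (replicate p sym1))"

definition REG_IS :: "var \<Rightarrow> nat \<Rightarrow> 'c::alphabet expr" where
  "REG_IS v p = EQ (Var v) (WORD (replicate p sym1))"

definition PAD_BLANK :: "var \<Rightarrow> 'c::alphabet stmt" where
  "PAD_BLANK v = If (EQ (Var v) EPS) (Assign v (WORD (enc_sym Blank))) Skip"

definition POP_LEFT :: "'c::alphabet tm \<Rightarrow> 'c stmt" where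
  "POP_LEFT M = CASES_PREFIX (map (\<lambda>b. (enc_sym b, 2, Seq (Assign 2 (DROP (length (enc_sym b)) (Var 2)))
                                         (Assign 3 (PUSH (enc_sym b) (Var 3))))) (tape_syms M)) Skip"

definition MOVE :: "'c::alphabet tm \<Rightarrow> 'c tsym \<Rightarrow> dir \<Rightarrow> 'c stmt" where
  "MOVE M a d = (case d of
      Right \<Rightarrow> Assign 2 (PUSH (enc_sym a) (Var 2))
    | Stay \<Rightarrow> Assign 3 (PUSH (enc_sym a) (Var 3))
    | Left \<Rightarrow> Seq (Assign 3 (PUSH (enc_sym a) (Var 3))) (Seq (PAD_BLANK 2) (POP_LEFT M)))"

definition ACT :: "'c::alphabet tm \<Rightarrow> nat \<Rightarrow> 'c tsym \<Rightarrow> 'c stmt" where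
  "ACT M q a = (case tm_delta M q a of (q', a', d) \<Rightarrow>
      Seq (Assign 1 (WORD (replicate q' sym1)))
        (Seq (Assign 3 (DROP (length (enc_sym a)) (Var 3))) (MOVE M a' d)))"

definition DISPATCH_SYM :: "'c::alphabet tm \<Rightarrow> nat \<Rightarrow> 'c stmt" where
  "DISPATCH_SYM M q = CASES_PREFIX (map (\<lambda>a. (enc_sym a, 3, ACT M q a)) (tape_syms M)) Skip"

definition DISPATCH_STATE :: "'c::alphabet tm \<Rightarrow> 'c stmt" where
  "DISPATCH_STATE M = foldr (\<lambda>q rest. If (REG_IS 1 q) (DISPATCH_SYM M q) rest) [0..<tm_nstates M] Skip"

definition SIM_STEP :: "'c::alphabet tm \<Rightarrow> 'c stmt" where
  "SIM_STEP M = If (REG_IS 1 1) (SET_PHASE 3) (Seq (PAD_BLANK 3) (DISPATCH_STATE M))"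

definition REWIND :: "'c::alphabet tm \<Rightarrow> 'c stmt" where
  "REWIND M = If (EQ (Var 2) EPS) (SET_PHASE 2) (POP_LEFT M)"

definition EXTRACT :: "'c::alphabet stmt" where
  "EXTRACT = CASES_PREFIX
     (map (\<lambda>c. ([sym0, c], 3, Seq (Assign 3 (DROP 2 (Var 3))) (Assign 7 (PUSH [c] (Var 7))))) letters)
           (SET_PHASE 4)"

definition REVERSE_OUT :: "'c::alphabet stmt" where
  "REVERSE_OUT = CASES_PREFIX
     (map (\<lambda>c. ([c], 7, Seq (Assign 7 (TL (Var 7))) (Assign 8 (PUSH [c] (Var 8))))) letters)
           (SET_PHASE 5)"

definition SELECT :: "nat \<Rightarrow> 'c::alphabet stmt" where
  "SELECT k = foldr (\<lambda>i rest. If (REG_IS 5 i) (Seq (Assign 4 (Var (input_var i))) (Assign 6 TRUE)) rest)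
      [0..<k] (SET_PHASE 1)"

definition NEXT_INPUT :: "nat \<Rightarrow> 'c::alphabet stmt" where
  "NEXT_INPUT k = If (EQ (Var 6) TRUE)
     (Seq (Assign 2 (PUSH (enc_sym Sep) (Var 2))) (Seq (Assign 6 ZERO) (Assign 5 (CONS sym1 (Var 5)))))
     (SELECT k)"

definition LOAD :: "nat \<Rightarrow> 'c::alphabet stmt" where
  "LOAD k = If (EQ (Var 4) EPS) (NEXT_INPUT k)
     (CASES_PREFIX (map (\<lambda>c. ([c], 4,
        Seq (Assign 2 (PUSH (enc_sym (Sym c)) (Var 2))) (Assign 4 (TL (Var 4))))) letters) Skip)"

definition MACRO_STEP :: "'c::alphabet tm \<Rightarrow> nat \<Rightarrow> 'c stmt" where
  "MACRO_STEP M k = If (REG_IS 0 0) (LOAD k) (If (REG_IS 0 1) (REWIND M) (If (REG_IS 0 2) (SIM_STEP M)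
      (If (REG_IS 0 3) EXTRACT (If (REG_IS 0 4) REVERSE_OUT Skip))))"

lemma expr_vars_REG_IS[simp]:
  "expr_vars (REG_IS v p :: 'c::alphabet expr) = {v}"
  by (simp add: REG_IS_def)
lemma plain_expr_REG_IS[simp]:
  "plain_expr \<Gamma> (REG_IS v p :: 'c::alphabet expr) = (v \<in> dom \<Gamma>)"
  by (simp add: REG_IS_def)
lemma is_op_REG_IS[simp]: "is_op (REG_IS v p)" by (simp add: REG_IS_def)

definition register_stmt :: "var_env \<Rightarrow> nat \<Rightarrow> 'c::alphabet stmt \<Rightarrow> bool" where
  "register_stmt \<Gamma> k s \<longleftrightarrow> loop_free s \<and> stmt_vars s \<subseteq> {..<10 + k} \<and> assigned s \<subseteq> {..<10} \<and> plain_stmt \<Gamma> s"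

lemma register_stmt_simps:
  "register_stmt \<Gamma> k Skip"
  "register_stmt \<Gamma> k (Seq a b) \<longleftrightarrow> register_stmt \<Gamma> k a \<and> register_stmt \<Gamma> k b"
  by (auto simp: register_stmt_def)

lemma register_stmt_If:
  "register_stmt \<Gamma> k a \<Longrightarrow> register_stmt \<Gamma> k b \<Longrightarrow> plain_expr \<Gamma> e \<Longrightarrow> is_op e \<Longrightarrow>
   expr_vars e \<subseteq> {..<10 + k}
   \<Longrightarrow> register_stmt \<Gamma> k (If e a b)"
  by (auto simp: register_stmt_def)

lemma register_stmt_Assign: "x < 10 \<Longrightarrow> \<Gamma> x = Some 0 \<Longrightarrow> plain_expr \<Gamma> e \<Longrightarrow> expr_vars e \<subseteq> {..<10 + k}
   \<Longrightarrow> register_stmt \<Gamma> k (Assign x e)"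
  by (auto simp: register_stmt_def)

lemma register_stmt_CASES_PREFIX:
  "(\<forall>(u,v,a)\<in>set xs. register_stmt \<Gamma> k a \<and> v \<in> dom \<Gamma> \<and> v < 10 + k) \<Longrightarrow>
   register_stmt \<Gamma> k d \<Longrightarrow>
   register_stmt \<Gamma> k (CASES_PREFIX xs d)"
  unfolding register_stmt_def
  apply (intro conjI)
  apply (rule loop_free_CASES_PREFIX; fastforce)
  using stmt_vars_CASES_PREFIX[of xs d] apply fastforce
  using assigned_CASES_PREFIX[of xs d] apply fastforce
  apply (rule plain_stmt_CASES_PREFIX; fastforce)
  done

lemma register_stmt_foldr: "(\<forall>x\<in>set xs. register_stmt \<Gamma> k (f x)) \<Longrightarrow> register_stmt \<Gamma> k d \<Longrightarrow>
   (\<forall>x\<in>set xs. plain_expr \<Gamma> (g x) \<and> is_op (g x) \<and> expr_vars (g x) \<subseteq> {..<10 + k}) \<Longrightarrow>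
   register_stmt \<Gamma> k (foldr (\<lambda>x rest. If (g x) (f x) rest) xs d)"
  by (induction xs) (auto intro: register_stmt_If)

definition level_env :: "nat \<Rightarrow> var_env" where
  "level_env m x = (if x < 10 then Some 0 else if x < m then Some 1 else None)"

lemma level_env_less_10[simp]: "x < 10 \<Longrightarrow> level_env m x = Some 0"
  by (simp add: level_env_def)

lemma register_stmt_MACRO_STEP:
  fixes M :: "'c::alphabet tm"
  assumes "10 + k \<le> m"
  shows "register_stmt (level_env m) k (MACRO_STEP M k)"
proof -
  let ?G = "level_env m"
  have d: "x < m \<Longrightarrow> x \<in> dom ?G" for x by (auto simp: level_env_def)
  have GA: "x < 10 \<Longrightarrow> plain_expr ?G e \<Longrightarrow> expr_vars e \<subseteq> {..<10 + k} \<Longrightarrow> register_stmt ?G k (Assign x e)" for x e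
    by (rule register_stmt_Assign) (auto simp: level_env_def)
  have pop: "register_stmt ?G k (POP_LEFT M)"
    unfolding POP_LEFT_def using assms d
    by (intro register_stmt_CASES_PREFIX) (auto intro!: GA simp: register_stmt_simps)
  have pad: "v < 10 \<Longrightarrow> register_stmt ?G k (PAD_BLANK v)" for v
    unfolding PAD_BLANK_def using assms d
    by (auto intro!: register_stmt_If GA simp: register_stmt_simps)
  have move: "register_stmt ?G k (MOVE M a dd)" for a dd
    unfolding MOVE_def using assms d pop pad[of 2]
    by (cases dd) (auto intro!: GA simp: register_stmt_simps)
  have act: "register_stmt ?G k (ACT M q a)" for q a
    unfolding ACT_def using assms d move
    by (auto intro!: GA simp: register_stmt_simps split: prod.splits)
  have sim: "register_stmt ?G k (SIM_STEP M)"
    unfolding SIM_STEP_def DISPATCH_STATE_def DISPATCH_SYM_def SET_PHASE_def using assms d act pad[of 3]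
    by (auto intro!: register_stmt_If GA register_stmt_foldr register_stmt_CASES_PREFIX simp: register_stmt_simps)
  have rewind: "register_stmt ?G k (REWIND M)"
    unfolding REWIND_def SET_PHASE_def using assms d pop by (auto intro!: register_stmt_If GA)
  have extraction: "register_stmt ?G k (EXTRACT :: 'c stmt)"
    unfolding EXTRACT_def SET_PHASE_def using assms d
    by (auto intro!: register_stmt_CASES_PREFIX GA simp: register_stmt_simps)
  have reverse: "register_stmt ?G k (REVERSE_OUT :: 'c stmt)"
    unfolding REVERSE_OUT_def SET_PHASE_def using assms d
    by (auto intro!: register_stmt_CASES_PREFIX GA simp: register_stmt_simps)
  have sel: "register_stmt ?G k (SELECT k :: 'c stmt)"
    unfolding SELECT_def SET_PHASE_def using assms d
    by (intro register_stmt_foldr) (auto intro!: GA simp: register_stmt_simps input_var_def)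
  have load: "register_stmt ?G k (LOAD k :: 'c stmt)"
    unfolding LOAD_def NEXT_INPUT_def using assms d sel
    by (auto intro!: register_stmt_If register_stmt_CASES_PREFIX GA simp: register_stmt_simps)
  show ?thesis unfolding MACRO_STEP_def using assms d load rewind sim extraction reverse
    by (auto intro!: register_stmt_If simp: register_stmt_simps)
qed

definition macro_step :: "'c::alphabet tm \<Rightarrow> nat \<Rightarrow> 'c store \<Rightarrow> 'c store" where
  "macro_step M k \<mu> = exec \<mu> (MACRO_STEP M k)"

lemma eval_REG_IS[simp]: "eval_e \<mu> (REG_IS v p) = bw (\<mu> v = replicate p sym1)"
  by (simp add: REG_IS_def)

lemma exec_SET_PHASE[simp]: "exec \<mu> (SET_PHASE p) = \<mu>(0 := replicate p sym1)"
  by (simp add: SET_PHASE_def)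

lemma replicate_eq_singleton_iff[simp]: "replicate p x = [x] \<longleftrightarrow> p = 1"
  by (cases p) auto

lemma macro_step_phase:
  assumes "\<mu> 0 = replicate p sym1"
  shows "macro_step M k \<mu> = (if p = 0 then exec \<mu> (LOAD k) else if p = 1 then exec \<mu> (REWIND M)
     else if p = 2 then exec \<mu> (SIM_STEP M) else if p = 3 then exec \<mu> EXTRACT
     else if p = 4 then exec \<mu> REVERSE_OUT else \<mu>)"
  using assms by (simp add: macro_step_def MACRO_STEP_def)

lemma loop_free_MACRO_STEP: "loop_free (MACRO_STEP M k)"
  and stmt_vars_MACRO_STEP: "stmt_vars (MACRO_STEP M k) \<subseteq> {..<10 + k}"
  and assigned_MACRO_STEP: "assigned (MACRO_STEP M k) \<subseteq> {..<10}"
  using register_stmt_MACRO_STEP[of k "10 + k" M] by (auto simp: register_stmt_def)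

lemma eval_s_REPEAT_MACRO_STEP:
  "eval_s \<mu> (REPEAT R (MACRO_STEP M k)) True ((macro_step M k ^^ R) \<mu>)"
proof -
  have "eval_s \<mu> (REPEAT R (MACRO_STEP M k)) True (exec \<mu> (REPEAT R (MACRO_STEP M k)))"
    by (intro eval_s_exec loop_free_REPEAT loop_free_MACRO_STEP)
  then show ?thesis by (simp add: exec_REPEAT macro_step_def[abs_def])
qed

lemma macro_step_agree_off:
  "agree_off {x. 10 + k \<le> x} a b \<Longrightarrow> agree_off {x. 10 + k \<le> x} (macro_step M k a) (macro_step M k b)"
  unfolding macro_step_def using stmt_vars_MACRO_STEP[of M k] by (intro exec_agree_off) auto

lemma funpow_macro_step_input_var: "(macro_step M k ^^ n) \<mu> (input_var j) = \<mu> (input_var j)"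
proof -
  have "macro_step M k \<nu> (input_var j) = \<nu> (input_var j)" for \<nu>
    unfolding macro_step_def using assigned_MACRO_STEP[of M k]
    by (intro exec_unassigned) (auto simp: input_var_def)
  then show ?thesis by (induction n) simp_all
qed

lemma assigned_REPEAT_MACRO_STEP: "assigned (REPEAT R (MACRO_STEP M k)) \<subseteq> {..<10}"
  using assigned_REPEAT assigned_MACRO_STEP by blast

lemma exec_foldr_If_hit:
  assumes "y \<in> set xs" "eval_e \<mu> (g y) = [sym1]" "\<And>x. x \<in> set xs \<Longrightarrow> eval_e \<mu> (g x) = [sym1] \<Longrightarrow> x = y"
  shows "exec \<mu> (foldr (\<lambda>x rest. If (g x) (f x) rest) xs d) = exec \<mu> (f y)"
  using assms
proof (induction xs)
  case (Cons a xs)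
  show ?case
  proof (cases "eval_e \<mu> (g a) = [sym1]")
    case True
    then have "a = y" using Cons.prems(3)[of a] by simp
    then show ?thesis using True by simp
  next
    case False
    then have y: "y \<in> set xs" using Cons.prems(1,2) by auto
    have "exec \<mu> (foldr (\<lambda>x rest. If (g x) (f x) rest) xs d) = exec \<mu> (f y)"
      using Cons.IH[OF y Cons.prems(2)] Cons.prems(3) by simp
    then show ?thesis using False by simp
  qed
qed simp

lemma exec_foldr_If_none:
  "(\<And>x. x \<in> set xs \<Longrightarrow> eval_e \<mu> (g x) \<noteq> [sym1]) \<Longrightarrow>
   exec \<mu> (foldr (\<lambda>x rest. If (g x) (f x) rest) xs d) = exec \<mu> d"
proof (induction xs)
  case (Cons a xs) then show ?case by simp
qed simp

lemma macro_step_load: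
  assumes "\<mu> 0 = []" shows "macro_step M k \<mu> = exec \<mu> (LOAD k)"
  using macro_step_phase[of \<mu> 0 M k] assms by simp

lemma load_step_letter:
  assumes "\<mu> 0 = []" "\<mu> 4 = c # x"
  shows "macro_step M k \<mu> = \<mu>(2 := enc_sym (Sym c) @ \<mu> 2, 4 := x)"
proof -
  have "exec \<mu> (CASES_PREFIX (map (\<lambda>c. ([c], 4,
        Seq (Assign 2 (PUSH (enc_sym (Sym c)) (Var 2))) (Assign 4 (TL (Var 4))))) letters) Skip) =
      exec \<mu> (Seq (Assign 2 (PUSH (enc_sym (Sym c)) (Var 2))) (Assign 4 (TL (Var 4))))"
    by (rule exec_CASES_PREFIX_map_hit[where y=c]) (use assms in auto)
  then show ?thesis using assms by (simp add: macro_step_load LOAD_def)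
qed

lemma load_word:
  assumes "\<mu> 0 = []"
  shows "(macro_step M k ^^ length (\<mu> 4)) \<mu> = \<mu>(2 := enc_tape (rev (map Sym (\<mu> 4))) @ \<mu> 2, 4 := [])"
  using assms
proof (induction "\<mu> 4" arbitrary: \<mu>)
  case Nil
  then show ?case by (simp add: fun_eq_iff)
next
  case (Cons c x)
  let ?\<mu>' = "\<mu>(2 := enc_sym (Sym c) @ \<mu> 2, 4 := x)"
  have s: "macro_step M k \<mu> = ?\<mu>'" using load_step_letter[of \<mu> c x M k] Cons.prems Cons.hyps(2) by simp
  have "(macro_step M k ^^ length (\<mu> 4)) \<mu> = (macro_step M k ^^ length x) (macro_step M k \<mu>)"
    using Cons.hyps(2)[symmetric] by (simp add: funpow_Suc_right del: funpow.simps)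
  also have "\<dots> = (macro_step M k ^^ length (?\<mu>' 4)) ?\<mu>'" by (simp add: s)
  also have "\<dots> = ?\<mu>'(2 := enc_tape (rev (map Sym (?\<mu>' 4))) @ ?\<mu>' 2, 4 := [])"
    by (rule Cons.hyps(1)) (use Cons.prems in auto)
  also have "\<dots> = \<mu>(2 := enc_tape (rev (map Sym (\<mu> 4))) @ \<mu> 2, 4 := [])"
    using Cons.hyps(2)[symmetric] by (simp add: fun_eq_iff)
  finally show ?case .
qed

lemma load_step_sep:
  assumes "\<mu> 0 = []" "\<mu> 4 = []" "\<mu> 6 = [sym1]"
  shows "macro_step M k \<mu> = \<mu>(2 := enc_sym Sep @ \<mu> 2, 6 := [sym0], 5 := sym1 # \<mu> 5)"
  using assms by (simp add: macro_step_load LOAD_def NEXT_INPUT_def)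

lemma load_step_select:
  assumes "\<mu> 0 = []" "\<mu> 4 = []" "\<mu> 6 \<noteq> [sym1]" "\<mu> 5 = replicate i sym1" "i < k"
  shows "macro_step M k \<mu> = \<mu>(4 := \<mu> (input_var i), 6 := [sym1])"
proof -
  have "exec \<mu> (SELECT k) = exec \<mu> (Seq (Assign 4 (Var (input_var i))) (Assign 6 TRUE))"
    unfolding SELECT_def by (rule exec_foldr_If_hit[where y=i]) (use assms in auto)
  then show ?thesis using assms by (simp add: macro_step_load LOAD_def NEXT_INPUT_def)
qed

lemma load_step_done:
  assumes "\<mu> 0 = []" "\<mu> 4 = []" "\<mu> 6 \<noteq> [sym1]" "\<mu> 5 = replicate k sym1"
  shows "macro_step M k \<mu> = \<mu>(0 := replicate 1 sym1)"
proof -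
  have "exec \<mu> (SELECT k) = exec \<mu> (SET_PHASE 1)"
    unfolding SELECT_def by (rule exec_foldr_If_none) (use assms in auto)
  then show ?thesis using assms by (simp add: macro_step_load LOAD_def NEXT_INPUT_def)
qed

definition load_inv :: "'c::alphabet word list \<Rightarrow> 'c store \<Rightarrow> nat \<Rightarrow> 'c store \<Rightarrow> bool" where
  "load_inv ws \<mu>0 i \<mu> \<longleftrightarrow> \<mu> 0 = [] \<and> \<mu> 2 = enc_tape (rev (tm_input (take i ws))) \<and> \<mu> 4 = [] \<and>
     \<mu> 5 = replicate i sym1 \<and> \<mu> 6 \<noteq> [sym1] \<and> (\<forall>x. x \<notin> {0, 2, 4, 5, 6} \<longrightarrow> \<mu> x = \<mu>0 x)"

lemma tm_input_take_Suc: "i < length ws \<Longrightarrow>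
   tm_input (take (Suc i) ws) = tm_input (take i ws) @ map Sym (ws ! i) @ [Sep]"
  by (simp add: tm_input_def take_Suc_conv_app_nth)

lemma input_var_notin: "input_var i \<notin> {0, 2, 4, 5, 6}" by (simp add: input_var_def)

lemma load_inv_step:
  assumes A: "load_inv ws \<mu>0 i \<mu>" and i: "i < length ws" "length ws = k" and inputs: "\<mu>0 (input_var i) = ws ! i"
  shows "load_inv ws \<mu>0 (Suc i) ((macro_step M k ^^ (length (ws ! i) + 2)) \<mu>)"
proof -
  let ?w = "ws ! i"
  have m: "\<mu> 0 = []" "\<mu> 4 = []" "\<mu> 6 \<noteq> [sym1]" "\<mu> 5 = replicate i sym1"
    "\<mu> 2 = enc_tape (rev (tm_input (take i ws)))" "\<mu> (input_var i) = ?w"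
    using A inputs input_var_notin[of i] unfolding load_inv_def by auto
  define \<mu>1 where "\<mu>1 = \<mu>(4 := \<mu> (input_var i), 6 := [sym1])"
  have s1: "macro_step M k \<mu> = \<mu>1" unfolding \<mu>1_def using load_step_select[OF m(1-4)] i by simp
  define \<mu>2 where "\<mu>2 = \<mu>1(2 := enc_tape (rev (map Sym (\<mu>1 4))) @ \<mu>1 2, 4 := [])"
  have s2: "(macro_step M k ^^ length ?w) \<mu>1 = \<mu>2"
    unfolding \<mu>2_def using load_word[of \<mu>1 M k] m by (simp add: \<mu>1_def)
  define \<mu>3 where "\<mu>3 = \<mu>2(2 := enc_sym Sep @ \<mu>2 2, 6 := [sym0], 5 := sym1 # \<mu>2 5)"
  have s3: "macro_step M k \<mu>2 = \<mu>3"
    unfolding \<mu>3_def by (rule load_step_sep) (use m in \<open>auto simp: \<mu>2_def \<mu>1_def\<close>)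
  have e1: "(macro_step M k ^^ Suc (length ?w)) \<mu> = (macro_step M k ^^ length ?w) (macro_step M k \<mu>)"
    by (simp only: funpow_Suc_right o_apply)
  have "(macro_step M k ^^ (length ?w + 2)) \<mu> = macro_step M k ((macro_step M k ^^ Suc (length ?w)) \<mu>)"
    by simp
  then have e: "(macro_step M k ^^ (length ?w + 2)) \<mu> = \<mu>3" using e1 s1 s2 s3 by simp
  have "\<mu>3 2 = enc_tape (rev (tm_input (take (Suc i) ws)))"
    using m i by (simp add: \<mu>3_def \<mu>2_def \<mu>1_def tm_input_take_Suc)
  moreover have "\<mu>3 5 = replicate (Suc i) sym1" using m by (simp add: \<mu>3_def \<mu>2_def \<mu>1_def)
  moreover have "\<forall>x. x \<notin> {0, 2, 4, 5, 6} \<longrightarrow> \<mu>3 x = \<mu>0 x"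
    using A unfolding load_inv_def by (simp add: \<mu>3_def \<mu>2_def \<mu>1_def)
  ultimately show ?thesis unfolding e load_inv_def using m by (simp add: \<mu>3_def \<mu>2_def \<mu>1_def)
qed

lemma load_inv_run:
  assumes A: "load_inv ws \<mu>0 0 \<mu>" and k: "length ws = k" and inputs: "\<And>j. j < k \<Longrightarrow> \<mu>0 (input_var j) = ws ! j"
  shows "i \<le> k \<Longrightarrow> load_inv ws \<mu>0 i ((macro_step M k ^^ (\<Sum>j<i. length (ws ! j) + 2)) \<mu>)"
proof (induction i)
  case 0 then show ?case using A by simp
next
  case (Suc i)
  have "load_inv ws \<mu>0 (Suc i)
      ((macro_step M k ^^ (length (ws ! i) + 2)) ((macro_step M k ^^ (\<Sum>j<i. length (ws ! j) + 2)) \<mu>))"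
    by (rule load_inv_step) (use Suc k inputs in auto)
  then show ?case by (simp add: funpow_add add.commute)
qed

lemma load_run:
  assumes A: "load_inv ws \<mu>0 0 \<mu>" and k: "length ws = k" and inputs: "\<And>j. j < k \<Longrightarrow> \<mu>0 (input_var j) = ws ! j"
  shows "\<exists>\<mu>'. (macro_step M k ^^ ((\<Sum>j<k. length (ws ! j) + 2) + 1)) \<mu> = \<mu>' \<and>
     \<mu>' 0 = replicate 1 sym1 \<and> \<mu>' 2 = enc_tape (rev (tm_input ws)) \<and>
     (\<forall>x. x \<notin> {0, 2, 4, 5, 6} \<longrightarrow> \<mu>' x = \<mu>0 x)"
proof -
  let ?\<mu> = "(macro_step M k ^^ (\<Sum>j<k. length (ws ! j) + 2)) \<mu>"
  have a: "load_inv ws \<mu>0 k ?\<mu>" using load_inv_run[OF A k inputs, of k] by simp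
  then have st: "macro_step M k ?\<mu> = ?\<mu>(0 := replicate 1 sym1)"
    by (intro load_step_done) (auto simp: load_inv_def)
  have "(macro_step M k ^^ ((\<Sum>j<k. length (ws ! j) + 2) + 1)) \<mu> = ?\<mu>(0 := replicate 1 sym1)"
    using st by simp
  moreover have "(?\<mu>(0 := replicate 1 sym1)) 2 = enc_tape (rev (tm_input ws))"
    using a k by (simp add: load_inv_def)
  moreover have "\<forall>x. x \<notin> {0, 2, 4, 5, 6} \<longrightarrow> (?\<mu>(0 := replicate 1 sym1)) x = \<mu>0 x"
    using a by (simp add: load_inv_def)
  ultimately show ?thesis by auto
qed

lemma exec_POP_LEFT:
  assumes "\<mu> 2 = enc_tape (b # ls)" "b \<in> set (tape_syms M)"
  shows "exec \<mu> (POP_LEFT M) = \<mu>(2 := enc_tape ls, 3 := enc_sym b @ \<mu> 3)"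
proof -
  have "exec \<mu> (POP_LEFT M) = exec \<mu> (Seq (Assign 2 (DROP (length (enc_sym b)) (Var 2)))
                                         (Assign 3 (PUSH (enc_sym b) (Var 3))))"
    unfolding POP_LEFT_def
    by (rule exec_CASES_PREFIX_map_hit[where y=b])
      (use assms in \<open>auto simp: enc_sym_prefix_enc_tape_iff dest: enc_sym_prefix_free\<close>)
  then show ?thesis using assms by simp
qed

lemma rewind_step_Cons:
  assumes "\<mu> 0 = replicate 1 sym1" "\<mu> 2 = enc_tape (b # ls)" "b \<in> set (tape_syms M)"
  shows "macro_step M k \<mu> = \<mu>(2 := enc_tape ls, 3 := enc_sym b @ \<mu> 3)"
  using assms exec_POP_LEFT[of \<mu> b ls M] macro_step_phase[of \<mu> 1 M k] by (simp add: REWIND_def)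

lemma rewind_step_Nil:
  assumes "\<mu> 0 = replicate 1 sym1" "\<mu> 2 = []"
  shows "macro_step M k \<mu> = \<mu>(0 := replicate 2 sym1)"
  using assms macro_step_phase[of \<mu> 1 M k] by (simp add: REWIND_def)

lemma rewind_run:
  assumes "\<mu> 0 = replicate 1 sym1" "\<mu> 2 = enc_tape ls" "set ls \<subseteq> set (tape_syms M)"
  shows "(macro_step M k ^^ (length ls + 1)) \<mu> = \<mu>(0 := replicate 2 sym1, 2 := [], 3 := enc_tape (rev ls) @ \<mu> 3)"
  using assms
proof (induction ls arbitrary: \<mu>)
  case Nil
  then show ?case using rewind_step_Nil[of \<mu> M k] by (simp add: fun_eq_iff)
next
  case (Cons b ls)
  let ?\<mu>' = "\<mu>(2 := enc_tape ls, 3 := enc_sym b @ \<mu> 3)"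
  have s: "macro_step M k \<mu> = ?\<mu>'" using rewind_step_Cons[of \<mu> b ls M k] Cons.prems by simp
  have "(macro_step M k ^^ (length (b # ls) + 1)) \<mu> = (macro_step M k ^^ (length ls + 1)) (macro_step M k \<mu>)"
    by (simp add: funpow_Suc_right del: funpow.simps)
  also have "\<dots> = (macro_step M k ^^ (length ls + 1)) ?\<mu>'" by (simp only: s)
  also have "\<dots> = ?\<mu>'(0 := replicate 2 sym1, 2 := [], 3 := enc_tape (rev ls) @ ?\<mu>' 3)"
    by (rule Cons.IH) (use Cons.prems in auto)
  also have "\<dots> = \<mu>(0 := replicate 2 sym1, 2 := [], 3 := enc_tape (rev (b # ls)) @ \<mu> 3)"
    by (simp add: fun_eq_iff)
  finally show ?case .
qed

definition nth_or_blank :: "'c tsym list \<Rightarrow> nat \<Rightarrow> 'c tsym" where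
  "nth_or_blank xs i = (if i < length xs then xs ! i else Blank)"

definition nonempty :: "'c tsym list \<Rightarrow> 'c tsym list" where
  "nonempty xs = (if xs = [] then [Blank] else xs)"

lemma nonempty_neq_Nil[simp]: "nonempty xs \<noteq> []" by (simp add: nonempty_def)
lemma nth_or_blank_nonempty[simp]: "nth_or_blank (nonempty xs) i = nth_or_blank xs i"
  by (cases i) (auto simp: nonempty_def nth_or_blank_def)
lemma nth_or_blank_Cons_0[simp]: "nth_or_blank (a # xs) 0 = a" by (simp add: nth_or_blank_def)
lemma nth_or_blank_Cons_Suc[simp]:
  "nth_or_blank (a # xs) (Suc i) = nth_or_blank xs i"
  by (simp add: nth_or_blank_def)
lemma length_nonempty: "length (nonempty xs) \<le> Suc (length xs)" by (simp add: nonempty_def)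
lemma set_nonempty: "set xs \<subseteq> set (tape_syms M) \<Longrightarrow> set (nonempty xs) \<subseteq> set (tape_syms M)"
  by (auto simp: nonempty_def tape_syms_def)

lemma exec_PAD_BLANK: "\<mu> v = enc_tape xs \<Longrightarrow> exec \<mu> (PAD_BLANK v) = \<mu>(v := enc_tape (nonempty xs))"
  by (cases xs) (auto simp: PAD_BLANK_def nonempty_def fun_upd_idem)

lemma exec_DISPATCH_STATE:
  assumes "\<mu> 1 = replicate q sym1" "q < tm_nstates M"
  shows "exec \<mu> (DISPATCH_STATE M) = exec \<mu> (DISPATCH_SYM M q)"
  unfolding DISPATCH_STATE_def by (rule exec_foldr_If_hit[where y=q]) (use assms in auto)

lemma exec_DISPATCH_SYM:
  assumes "\<mu> 3 = enc_tape (a # rs)" "a \<in> set (tape_syms M)"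
  shows "exec \<mu> (DISPATCH_SYM M q) = exec \<mu> (ACT M q a)"
  unfolding DISPATCH_SYM_def
  by (rule exec_CASES_PREFIX_map_hit[where y=a])
    (use assms in \<open>auto simp: enc_sym_prefix_enc_tape_iff dest: enc_sym_prefix_free\<close>)

lemma macro_step_sim:
  assumes m: "\<mu> 0 = replicate 2 sym1" "\<mu> 1 = replicate q sym1" "q \<noteq> 1" "q < tm_nstates M"
    "\<mu> 2 = enc_tape ls" "\<mu> 3 = enc_tape rs" "nonempty rs = a # rs1" "a \<in> set (tape_syms M)"
    "tm_delta M q a = (q', a', d)" "set ls \<subseteq> set (tape_syms M)"
  shows "macro_step M k \<mu> = (case d of
      Right \<Rightarrow> \<mu>(1 := replicate q' sym1, 3 := enc_tape rs1, 2 := enc_tape (a' # ls))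
    | Stay \<Rightarrow> \<mu>(1 := replicate q' sym1, 3 := enc_tape (a' # rs1))
    | Left \<Rightarrow> (case nonempty ls of b # ls1 \<Rightarrow> \<mu>(1 := replicate q' sym1, 2 := enc_tape ls1, 3 := enc_tape (b # a' # rs1))))"
proof -
  have s0: "macro_step M k \<mu> = exec \<mu> (SIM_STEP M)" using macro_step_phase[of \<mu> 2 M k] m(1) by simp
  let ?\<mu>a = "\<mu>(3 := enc_tape (nonempty rs))"
  have s1: "exec \<mu> (SIM_STEP M) = exec ?\<mu>a (DISPATCH_STATE M)"
    using m(2,3) exec_PAD_BLANK[of \<mu> 3 rs, OF m(6)] by (simp add: SIM_STEP_def)
  have s2: "exec ?\<mu>a (DISPATCH_STATE M) = exec ?\<mu>a (ACT M q a)"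
    using exec_DISPATCH_STATE[of ?\<mu>a q M] exec_DISPATCH_SYM[of ?\<mu>a a rs1 M q] m by simp
  let ?\<mu>b = "\<mu>(3 := enc_tape rs1, 1 := replicate q' sym1)"
  have s3: "exec ?\<mu>a (ACT M q a) = exec ?\<mu>b (MOVE M a' d)"
    using m by (simp add: ACT_def fun_upd_twist)
  show ?thesis
  proof (cases d)
    case Left
    obtain b ls1 where bl: "nonempty ls = b # ls1" by (cases "nonempty ls") auto
    have vb: "b \<in> set (tape_syms M)" using set_nonempty[OF m(10)] bl by auto
    let ?\<mu>c = "?\<mu>b(3 := enc_tape (a' # rs1))"
    have "exec ?\<mu>b (MOVE M a' d) = exec (?\<mu>c(2 := enc_tape (nonempty ls))) (POP_LEFT M)"
      using Left m exec_PAD_BLANK[of ?\<mu>c 2 ls] by (simp add: MOVE_def)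
    also have "\<dots> = ?\<mu>c(2 := enc_tape ls1, 3 := enc_sym b @ enc_tape (a' # rs1))"
      using exec_POP_LEFT[of "?\<mu>c(2 := enc_tape (nonempty ls))" b ls1 M] bl vb by simp
    finally show ?thesis using s0 s1 s2 s3 Left bl by (simp add: fun_eq_iff)
  next
    case Right
    then show ?thesis using s0 s1 s2 s3 m by (simp add: MOVE_def fun_eq_iff)
  next
    case Stay
    then show ?thesis using s0 s1 s2 s3 m by (simp add: MOVE_def fun_eq_iff)
  qed
qed

definition tape_split :: "(int \<Rightarrow> 'c tsym) \<Rightarrow> int \<Rightarrow> 'c tsym list \<Rightarrow> 'c tsym list \<Rightarrow> bool" where
  "tape_split tp h ls rs \<longleftrightarrow>
     (\<forall>i. tp (h + int i) = nth_or_blank rs i) \<and> (\<forall>i. tp (h - 1 - int i) = nth_or_blank ls i)"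

lemma tape_split_nonempty:
  "tape_split tp h (nonempty ls) rs = tape_split tp h ls rs"
  "tape_split tp h ls (nonempty rs) = tape_split tp h ls rs"
  by (simp_all add: tape_split_def)

lemma all_nat_iff_0_Suc: "(\<forall>i::nat. P i) \<longleftrightarrow> P 0 \<and> (\<forall>i. P (Suc i))"
  by (metis not0_implies_Suc)

lemma tape_split_move: "tape_split tp (h + 1) (a # ls) rs \<longleftrightarrow> tape_split tp h ls (a # rs)"
proof -
  have "(\<forall>i. tp (h + int i) = nth_or_blank (a # rs) i) \<longleftrightarrow>
      tp h = a \<and> (\<forall>i. tp (h + 1 + int i) = nth_or_blank rs i)"
    by (subst all_nat_iff_0_Suc) (simp add: algebra_simps)
  moreover have "(\<forall>i. tp (h + 1 - 1 - int i) = nth_or_blank (a # ls) i) \<longleftrightarrow>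
      tp h = a \<and> (\<forall>i. tp (h - 1 - int i) = nth_or_blank ls i)"
    by (subst all_nat_iff_0_Suc) (simp add: algebra_simps)
  ultimately show ?thesis unfolding tape_split_def by blast
qed

lemma tape_split_head: "tape_split tp h ls (a # rs) \<Longrightarrow> tp h = a"
  unfolding tape_split_def by (metis add.right_neutral nth_or_blank_Cons_0 of_nat_0)

lemma tape_split_write: "tape_split tp h ls (a # rs) \<Longrightarrow> tape_split (tp(h := a')) h ls (a' # rs)"
  unfolding tape_split_def by (subst (asm) all_nat_iff_0_Suc, subst all_nat_iff_0_Suc) auto

definition sim_rel :: "'c::alphabet tm \<Rightarrow> 'c tconf \<Rightarrow> 'c store \<Rightarrow> nat \<Rightarrow> bool" where
  "sim_rel M c \<mu> n \<longleftrightarrow> (case c of (q, tp, h) \<Rightarrow>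
     \<mu> 0 = replicate 2 sym1 \<and> \<mu> 1 = replicate q sym1 \<and> q < tm_nstates M \<and>
     (\<exists>ls rs. \<mu> 2 = enc_tape ls \<and> \<mu> 3 = enc_tape rs \<and>
        set ls \<subseteq> set (tape_syms M) \<and> set rs \<subseteq> set (tape_syms M) \<and>
        tape_split tp h ls rs \<and> length ls + length rs \<le> n))"

lemma sim_rel_intro:
  "\<mu> 0 = replicate 2 sym1 \<Longrightarrow> \<mu> 1 = replicate q sym1 \<Longrightarrow> q < tm_nstates M \<Longrightarrow>
   \<mu> 2 = enc_tape ls \<Longrightarrow> \<mu> 3 = enc_tape rs \<Longrightarrow>
   set ls \<subseteq> set (tape_syms M) \<Longrightarrow> set rs \<subseteq> set (tape_syms M) \<Longrightarrow>
   tape_split tp h ls rs \<Longrightarrow> length ls + length rs \<le> n \<Longrightarrow> sim_rel M (q, tp, h) \<mu> n"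
  unfolding sim_rel_def by blast

lemma sim_rel_step:
  assumes wf: "tm_wf M" and sr: "sim_rel M (q, tp, h) \<mu> n" and q1: "q \<noteq> 1"
  shows "sim_rel M (tm_step M (q, tp, h)) (macro_step M k \<mu>) (n + 2) \<and>
         (\<forall>x. x \<notin> {0, 1, 2, 3} \<longrightarrow> macro_step M k \<mu> x = \<mu> x)"
proof -
  obtain ls rs where m: "\<mu> 0 = replicate 2 sym1" "\<mu> 1 = replicate q sym1" "q < tm_nstates M"
    "\<mu> 2 = enc_tape ls" "\<mu> 3 = enc_tape rs" "set ls \<subseteq> set (tape_syms M)" "set rs \<subseteq> set (tape_syms M)"
    "tape_split tp h ls rs" "length ls + length rs \<le> n"
    using sr unfolding sim_rel_def by auto
  obtain a rs1 where ar: "nonempty rs = a # rs1" by (cases "nonempty rs") auto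
  have split: "tape_split tp h ls (a # rs1)" using m(8) ar tape_split_nonempty(2) by metis
  have a: "a \<in> set (tape_syms M)" "set rs1 \<subseteq> set (tape_syms M)" "length rs1 \<le> length rs"
    using set_nonempty[OF m(7)] length_nonempty[of rs] ar by auto
  obtain q' a' d where dl: "tm_delta M q a = (q', a', d)" by (cases "tm_delta M q a") auto
  have wq: "q' < tm_nstates M" "a' \<in> set (tape_syms M)"
    using wf m(3) a(1) dl unfolding tm_wf_def set_tape_syms by force+
  have ts: "tm_step M (q, tp, h) = (q', tp(h := a'), h + dir_off d)"
    using q1 tape_split_head[OF split] dl by (simp add: tm_step_def)
  have written: "tape_split (tp(h := a')) h ls (a' # rs1)" by (rule tape_split_write[OF split])
  have ex: "macro_step M k \<mu> = (case d of
      Right \<Rightarrow> \<mu>(1 := replicate q' sym1, 3 := enc_tape rs1, 2 := enc_tape (a' # ls))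
    | Stay \<Rightarrow> \<mu>(1 := replicate q' sym1, 3 := enc_tape (a' # rs1))
    | Left \<Rightarrow> (case nonempty ls of b # ls1 \<Rightarrow>
        \<mu>(1 := replicate q' sym1, 2 := enc_tape ls1, 3 := enc_tape (b # a' # rs1))))"
    by (rule macro_step_sim[OF m(1,2) q1 m(3,4,5) ar a(1) dl m(6)])
  have "sim_rel M (q', tp(h := a'), h + dir_off d) (macro_step M k \<mu>) (n + 2)"
  proof (cases d)
    case Right
    have "tape_split (tp(h := a')) (h + 1) (a' # ls) rs1" using written tape_split_move by blast
    then show ?thesis
      using Right ex m wq a
      by (intro sim_rel_intro[where ls="a' # ls" and rs=rs1]) (auto simp: dir_off_def)
  next
    case Stay
    then show ?thesis
      using ex m wq a written
      by (intro sim_rel_intro[where ls=ls and rs="a' # rs1"]) (auto simp: dir_off_def)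
  next
    case Left
    obtain b ls1 where bl: "nonempty ls = b # ls1" by (cases "nonempty ls") auto
    have "tape_split (tp(h := a')) (h - 1 + 1) (b # ls1) (a' # rs1)"
      using written bl tape_split_nonempty(1) by (metis diff_add_cancel)
    then have "tape_split (tp(h := a')) (h - 1) ls1 (b # a' # rs1)" by (rule tape_split_move[THEN iffD1])
    moreover have "b \<in> set (tape_syms M)" "set ls1 \<subseteq> set (tape_syms M)" "length ls1 \<le> length ls"
      using set_nonempty[OF m(6)] length_nonempty[of ls] bl by auto
    ultimately show ?thesis
      using Left ex m wq a bl
      by (intro sim_rel_intro[where ls=ls1 and rs="b # a' # rs1"]) (auto simp: dir_off_def)
  qed
  moreover have "\<forall>x. x \<notin> {0, 1, 2, 3} \<longrightarrow> macro_step M k \<mu> x = \<mu> x"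
    using ex by (cases d) (auto split: list.split)
  ultimately show ?thesis using ts by simp
qed

lemma sim_rel_halt:
  assumes "sim_rel M (1, tp, h) \<mu> n"
  shows "macro_step M k \<mu> = \<mu>(0 := replicate 3 sym1)"
  using assms macro_step_phase[of \<mu> 2 M k] unfolding sim_rel_def by (simp add: SIM_STEP_def)

abbreviation tm_run :: "'c::alphabet tm \<Rightarrow> 'c word list \<Rightarrow> nat \<Rightarrow> 'c tconf" where
  "tm_run M ws j \<equiv> (tm_step M ^^ j) (tm_init ws)"

lemma sim_rel_run:
  assumes wf: "tm_wf M" and sr0: "sim_rel M (tm_run M ws 0) \<mu> n"
  shows "j \<le> t0 \<Longrightarrow> (\<forall>i<t0. fst (tm_run M ws i) \<noteq> 1) \<Longrightarrow>
    sim_rel M (tm_run M ws j) ((macro_step M k ^^ j) \<mu>) (n + 2 * j) \<and>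
    (\<forall>x. x \<notin> {0, 1, 2, 3} \<longrightarrow> (macro_step M k ^^ j) \<mu> x = \<mu> x)"
proof (induction j)
  case 0 then show ?case using sr0 by simp
next
  case (Suc j)
  obtain q tp h where c: "tm_run M ws j = (q, tp, h)" by (cases "tm_run M ws j") auto
  have q1: "q \<noteq> 1" using Suc.prems c by (metis Suc_le_lessD fst_conv)
  have ih: "sim_rel M (q, tp, h) ((macro_step M k ^^ j) \<mu>) (n + 2 * j)"
    "\<forall>x. x \<notin> {0, 1, 2, 3} \<longrightarrow> (macro_step M k ^^ j) \<mu> x = \<mu> x"
    using Suc c by auto
  note st = sim_rel_step[OF wf ih(1) q1, of k]
  have "tm_run M ws (Suc j) = tm_step M (q, tp, h)" using c by simp
  moreover have "(macro_step M k ^^ Suc j) \<mu> = macro_step M k ((macro_step M k ^^ j) \<mu>)" by simp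
  ultimately show ?case using st ih(2) by (simp add: add.assoc)
qed

lemma prefix_Sym_enc_tape: "prefix [sym0, c] (enc_tape rs) \<longleftrightarrow> (\<exists>rs'. rs = Sym c # rs')"
proof (cases rs)
  case (Cons b rs')
  show ?thesis
  proof (cases "is_Sym b")
    case True
    then obtain c' where "b = Sym c'" by (cases b) (auto simp: is_Sym_def)
    then show ?thesis using Cons by auto
  next
    case False
    then have "b \<noteq> Sym c" by (auto simp: is_Sym_def)
    then show ?thesis using Cons not_prefix_Sym_enc_sym[OF False, of c "enc_tape rs'"] by simp
  qed
qed simp

lemma extract_step_Cons:
  assumes "\<mu> 0 = replicate 3 sym1" "\<mu> 3 = enc_tape (Sym c # rs)"
  shows "macro_step M k \<mu> = \<mu>(3 := enc_tape rs, 7 := c # \<mu> 7)"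
proof -
  have "exec \<mu> EXTRACT = exec \<mu> (Seq (Assign 3 (DROP 2 (Var 3))) (Assign 7 (PUSH [c] (Var 7))))"
    unfolding EXTRACT_def
    by (rule exec_CASES_PREFIX_map_hit[where y=c]) (use assms in \<open>auto simp: prefix_Sym_enc_tape\<close>)
  then show ?thesis using assms by (simp add: macro_step_phase)
qed

lemma extract_step_end:
  assumes "\<mu> 0 = replicate 3 sym1" "\<mu> 3 = enc_tape rs" "\<not> (\<exists>c rs'. rs = Sym c # rs')"
  shows "macro_step M k \<mu> = \<mu>(0 := replicate 4 sym1)"
proof -
  have "exec \<mu> EXTRACT = exec \<mu> (SET_PHASE 4)"
    unfolding EXTRACT_def
    by (rule exec_CASES_PREFIX_map_none) (use assms in \<open>auto simp: prefix_Sym_enc_tape\<close>)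
  then show ?thesis using assms by (simp add: macro_step_phase)
qed

lemma extract_run:
  assumes "\<mu> 0 = replicate 3 sym1" "\<mu> 3 = enc_tape rs"
  shows "(macro_step M k ^^ (length (takeWhile is_Sym rs) + 1)) \<mu> =
    \<mu>(0 := replicate 4 sym1, 3 := enc_tape (dropWhile is_Sym rs),
      7 := rev (map the_Sym (takeWhile is_Sym rs)) @ \<mu> 7)"
  using assms
proof (induction rs arbitrary: \<mu>)
  case Nil
  then show ?case using extract_step_end[of \<mu> "[]"] by (simp add: fun_eq_iff)
next
  case (Cons b rs)
  show ?case
  proof (cases "is_Sym b")
    case False
    have "macro_step M k \<mu> = \<mu>(0 := replicate 4 sym1)"
      by (rule extract_step_end[of \<mu> "b # rs"]) (use Cons.prems False in \<open>auto simp: is_Sym_def\<close>)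
    then show ?thesis using Cons.prems False by (simp add: fun_eq_iff)
  next
    case True
    then obtain c where b: "b = Sym c" by (cases b) (auto simp: is_Sym_def)
    let ?\<mu>' = "\<mu>(3 := enc_tape rs, 7 := c # \<mu> 7)"
    have s: "macro_step M k \<mu> = ?\<mu>'" using extract_step_Cons[of \<mu> c rs] Cons.prems b by simp
    have ih: "(macro_step M k ^^ (length (takeWhile is_Sym rs) + 1)) ?\<mu>' =
       ?\<mu>'(0 := replicate 4 sym1, 3 := enc_tape (dropWhile is_Sym rs),
      7 := rev (map the_Sym (takeWhile is_Sym rs)) @ ?\<mu>' 7)"
      by (rule Cons.IH) (use Cons.prems in auto)
    have "(macro_step M k ^^ (length (takeWhile is_Sym (b # rs)) + 1)) \<mu> =
        (macro_step M k ^^ (length (takeWhile is_Sym rs) + 1)) (macro_step M k \<mu>)"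
      using True by (simp add: funpow_Suc_right del: funpow.simps)
    also have "\<dots> = (macro_step M k ^^ (length (takeWhile is_Sym rs) + 1)) ?\<mu>'" by (simp only: s)
    also have "\<dots> = ?\<mu>'(0 := replicate 4 sym1, 3 := enc_tape (dropWhile is_Sym rs),
      7 := rev (map the_Sym (takeWhile is_Sym rs)) @ ?\<mu>' 7)" by (rule ih)
    also have "\<dots> = \<mu>(0 := replicate 4 sym1, 3 := enc_tape (dropWhile is_Sym (b # rs)),
      7 := rev (map the_Sym (takeWhile is_Sym (b # rs))) @ \<mu> 7)"
      using b True by (simp add: fun_eq_iff the_Sym_def)
    finally show ?thesis .
  qed
qed

lemma reverse_out_step_Cons:
  assumes "\<mu> 0 = replicate 4 sym1" "\<mu> 7 = c # T"
  shows "macro_step M k \<mu> = \<mu>(7 := T, 8 := c # \<mu> 8)"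
proof -
  have "exec \<mu> REVERSE_OUT = exec \<mu> (Seq (Assign 7 (TL (Var 7))) (Assign 8 (PUSH [c] (Var 8))))"
    unfolding REVERSE_OUT_def
    by (rule exec_CASES_PREFIX_map_hit[where y=c]) (use assms in auto)
  then show ?thesis using assms by (simp add: macro_step_phase)
qed

lemma reverse_out_step_Nil:
  assumes "\<mu> 0 = replicate 4 sym1" "\<mu> 7 = []"
  shows "macro_step M k \<mu> = \<mu>(0 := replicate 5 sym1)"
proof -
  have "exec \<mu> REVERSE_OUT = exec \<mu> (SET_PHASE 5)"
    unfolding REVERSE_OUT_def by (rule exec_CASES_PREFIX_map_none) (use assms in auto)
  then show ?thesis using assms by (simp add: macro_step_phase)
qed

lemma reverse_out_run:
  assumes "\<mu> 0 = replicate 4 sym1"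
  shows "(macro_step M k ^^ (length (\<mu> 7) + 1)) \<mu> = \<mu>(0 := replicate 5 sym1, 7 := [], 8 := rev (\<mu> 7) @ \<mu> 8)"
  using assms
proof (induction "\<mu> 7" arbitrary: \<mu>)
  case Nil
  then show ?case using reverse_out_step_Nil[of \<mu>] by (simp add: fun_upd_idem)
next
  case (Cons c T)
  let ?\<mu>' = "\<mu>(7 := T, 8 := c # \<mu> 8)"
  have s: "macro_step M k \<mu> = ?\<mu>'" using reverse_out_step_Cons[of \<mu> c T M k] Cons.prems Cons.hyps(2) by simp
  have ih: "(macro_step M k ^^ (length (?\<mu>' 7) + 1)) ?\<mu>' =
      ?\<mu>'(0 := replicate 5 sym1, 7 := [], 8 := rev (?\<mu>' 7) @ ?\<mu>' 8)"
    by (rule Cons.hyps(1)) (use Cons.prems in auto)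
  have "(macro_step M k ^^ (length (\<mu> 7) + 1)) \<mu> = (macro_step M k ^^ (length T + 1)) (macro_step M k \<mu>)"
    using Cons.hyps(2)[symmetric] by (simp add: funpow_Suc_right del: funpow.simps)
  also have "\<dots> = ?\<mu>'(0 := replicate 5 sym1, 7 := [], 8 := rev T @ c # \<mu> 8)"
    using ih s by simp
  also have "\<dots> = \<mu>(0 := replicate 5 sym1, 7 := [], 8 := rev (\<mu> 7) @ \<mu> 8)"
    using Cons.hyps(2)[symmetric] by (simp add: fun_eq_iff)
  finally show ?case .
qed

lemma tm_input_valid: "set (tm_input ws) \<subseteq> set (tape_syms M)"
  by (auto simp: tm_input_def tape_syms_def)

lemma length_tm_input: "length (tm_input ws) = sum_list (map length ws) + length ws"
  by (induction ws) (auto simp: tm_input_def)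

lemma sum_length_plus_two:
  "(\<Sum>j<length ws. length (ws ! j) + 2) = sum_list (map length ws) + 2 * length ws"
proof -
  have "(\<Sum>j<length ws. length (ws ! j) + 2) = (\<Sum>j<length ws. length (ws ! j)) + 2 * length ws"
    by (subst sum.distrib) simp
  also have "(\<Sum>j<length ws. length (ws ! j)) = sum_list (map length ws)"
    by (simp add: sum_list_sum_nth atLeast0LessThan)
  finally show ?thesis .
qed

lemma sim_rel_init:
  assumes wf: "tm_wf M"
    and m: "\<mu> 0 = replicate 2 sym1" "\<mu> 1 = []" "\<mu> 2 = []" "\<mu> 3 = enc_tape (tm_input ws)"
  shows "sim_rel M (tm_init ws) \<mu> (length (tm_input ws))"
  unfolding sim_rel_def tm_init_def
proof (simp only: prod.case, intro conjI exI)
  show "\<mu> 0 = replicate 2 sym1" "\<mu> 1 = replicate 0 sym1" "\<mu> 2 = enc_tape []"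
    "\<mu> 3 = enc_tape (tm_input ws)"
    using m by auto
  show "0 < tm_nstates M" using wf by (simp add: tm_wf_def)
  show "set [] \<subseteq> set (tape_syms M)" "set (tm_input ws) \<subseteq> set (tape_syms M)"
    using tm_input_valid by auto
qed (simp_all add: tape_split_def nth_or_blank_def)

lemma tm_output_tape_split:
  assumes "tape_split tp h ls rs"
  shows "tm_output (q, tp, h) = map the_Sym (takeWhile is_Sym rs)"
proof -
  have right: "\<forall>i. tp (h + int i) = nth_or_blank rs i" using assms unfolding tape_split_def by blast
  show ?thesis
  proof (rule tm_output_eq)
    let ?tw = "takeWhile is_Sym rs"
    fix i assume i: "i < length (map the_Sym ?tw)"
    then have "i < length ?tw" by simp
    then have "rs ! i = ?tw ! i" "is_Sym (?tw ! i)" "i < length rs"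
      using nth_mem[of i ?tw] set_takeWhileD[of "?tw ! i" is_Sym rs] length_takeWhile_le[of is_Sym rs]
      by (auto simp: takeWhile_nth)
    then show "tp (h + int i) = Sym (map the_Sym ?tw ! i)"
      using right \<open>i < length ?tw\<close>
      by (auto simp: nth_or_blank_def the_Sym_def is_Sym_def split: tsym.splits)
  next
    let ?tw = "takeWhile is_Sym rs"
    show "\<not> is_Sym (tp (h + int (length (map the_Sym ?tw))))"
    proof (cases "length ?tw < length rs")
      case True
      then have "\<not> is_Sym (rs ! length ?tw)" by (rule nth_length_takeWhile)
      then show ?thesis using right True by (simp add: nth_or_blank_def)
    next
      case False
      then show ?thesis
        using right length_takeWhile_le[of is_Sym rs] by (simp add: nth_or_blank_def is_Sym_def)
    qed
  qed
qed

lemma macro_step_prepare: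
  fixes M :: "'c::alphabet tm"
  assumes wf: "tm_wf M" and k: "length ws = k"
    and init: "\<And>x. x < 10 \<Longrightarrow> \<mu>0 x = []" and inputs: "\<And>j. j < k \<Longrightarrow> \<mu>0 (input_var j) = ws ! j"
  shows "\<exists>\<mu>. (macro_step M k ^^ (2 * sum_list (map length ws) + 3 * k + 2)) \<mu>0 = \<mu> \<and>
     sim_rel M (tm_init ws) \<mu> (sum_list (map length ws) + k) \<and> \<mu> 7 = [] \<and> \<mu> 8 = []"
proof -
  let ?n = "sum_list (map length ws)"
  have "load_inv ws \<mu>0 0 \<mu>0" using init by (simp add: load_inv_def tm_input_def)
  then obtain \<mu>A where A: "(macro_step M k ^^ (?n + 2 * k + 1)) \<mu>0 = \<mu>A"
    "\<mu>A 0 = replicate 1 sym1" "\<mu>A 2 = enc_tape (rev (tm_input ws))"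
    "\<forall>x. x \<notin> {0, 2, 4, 5, 6} \<longrightarrow> \<mu>A x = \<mu>0 x"
    using load_run[OF _ k inputs, of \<mu>0 M] sum_length_plus_two[of ws] k by auto
  define \<mu>B where "\<mu>B = \<mu>A(0 := replicate 2 sym1, 2 := [], 3 := enc_tape (tm_input ws))"
  have "(macro_step M k ^^ (?n + k + 1)) \<mu>A = \<mu>B"
    using rewind_run[of \<mu>A "rev (tm_input ws)" M k] A(2-4) init tm_input_valid[of ws M]
    by (simp add: \<mu>B_def length_tm_input k)
  then have "(macro_step M k ^^ ((?n + k + 1) + (?n + 2 * k + 1))) \<mu>0 = \<mu>B"
    by (rule funpow_add_chain[OF A(1)])
  moreover have "sim_rel M (tm_init ws) \<mu>B (?n + k)"
    using sim_rel_init[OF wf, of \<mu>B ws] A(4) init by (simp add: \<mu>B_def length_tm_input k)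
  moreover have "\<mu>B 7 = []" "\<mu>B 8 = []" using A(4) init by (simp_all add: \<mu>B_def)
  ultimately show ?thesis by (auto simp: algebra_simps)
qed

lemma macro_step_finish:
  fixes M :: "'c::alphabet tm"
  assumes sr: "sim_rel M (1, tp, h) \<mu> n" and out: "\<mu> 7 = []" "\<mu> 8 = []"
  shows "\<exists>m \<le> 2 * n + 3. (macro_step M k ^^ m) \<mu> 0 = replicate 5 sym1 \<and>
     (macro_step M k ^^ m) \<mu> 8 = tm_output (q, tp, h)"
proof -
  obtain ls :: "'c tsym list" and rs where rs: "\<mu> 3 = enc_tape rs" "tape_split tp h ls rs"
    "length ls + length rs \<le> n"
    using sr unfolding sim_rel_def prod.case by blast
  let ?tw = "takeWhile is_Sym rs"
  define \<mu>D where "\<mu>D = \<mu>(0 := replicate 3 sym1)"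
  have D: "(macro_step M k ^^ 1) \<mu> = \<mu>D" using sim_rel_halt[OF sr] by (simp add: \<mu>D_def)
  define \<mu>E where "\<mu>E = \<mu>D(0 := replicate 4 sym1, 3 := enc_tape (dropWhile is_Sym rs),
      7 := rev (map the_Sym ?tw))"
  have E: "(macro_step M k ^^ (length ?tw + 1)) \<mu>D = \<mu>E"
    using extract_run[of \<mu>D rs M k] rs(1) out by (simp add: \<mu>D_def \<mu>E_def)
  define \<mu>F where "\<mu>F = \<mu>E(0 := replicate 5 sym1, 7 := [], 8 := map the_Sym ?tw)"
  have F: "(macro_step M k ^^ (length ?tw + 1)) \<mu>E = \<mu>F"
    using reverse_out_run[of \<mu>E M k] out by (simp add: \<mu>E_def \<mu>F_def \<mu>D_def)
  have "(macro_step M k ^^ ((length ?tw + 1) + ((length ?tw + 1) + 1))) \<mu> = \<mu>F"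
    by (rule funpow_add_chain[OF funpow_add_chain[OF D E] F])
  moreover have "length ?tw \<le> n" using length_takeWhile_le[of is_Sym rs] rs(3) by linarith
  moreover have "\<mu>F 8 = tm_output (q, tp, h)"
    using tm_output_tape_split[OF rs(2)] by (simp add: \<mu>F_def)
  ultimately show ?thesis by (intro exI[of _ "(length ?tw + 1) + ((length ?tw + 1) + 1)"]) (auto simp: \<mu>F_def)
qed

lemma tm_run_first_halt:
  assumes "fst (tm_run M ws t) = 1"
  obtains t0 where "t0 \<le> t" "tm_run M ws t0 = tm_run M ws t" "\<forall>i<t0. fst (tm_run M ws i) \<noteq> 1"
proof
  define t0 where "t0 = (LEAST i. fst (tm_run M ws i) = 1)"
  show "t0 \<le> t" unfolding t0_def by (rule Least_le) (rule assms)
  show "\<forall>i<t0. fst (tm_run M ws i) \<noteq> 1" unfolding t0_def using not_less_Least by blast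
  have "fst (tm_run M ws t0) = 1" unfolding t0_def by (rule LeastI) (rule assms)
  then obtain tp h where c0: "tm_run M ws t0 = (1, tp, h)" by (cases "tm_run M ws t0") auto
  have "tm_run M ws t = (tm_step M ^^ (t - t0)) (tm_run M ws t0)"
    using \<open>t0 \<le> t\<close> by (metis funpow_add le_add_diff_inverse2 o_apply)
  then show "tm_run M ws t0 = tm_run M ws t" using c0 by simp
qed

lemma macro_step_run:
  fixes M :: "'c::alphabet tm"
  assumes wf: "tm_wf M" and k: "length ws = k"
    and init: "\<And>x. x < 10 \<Longrightarrow> \<mu>0 x = []" and inputs: "\<And>j. j < k \<Longrightarrow> \<mu>0 (input_var j) = ws ! j"
    and t: "fst (tm_run M ws t) = 1"
  shows "\<exists>m \<le> 4 * sum_list (map length ws) + 5 * k + 5 * t + 5.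
     (macro_step M k ^^ m) \<mu>0 0 = replicate 5 sym1 \<and>
     (macro_step M k ^^ m) \<mu>0 8 = tm_output (tm_run M ws t)"
proof -
  let ?n = "sum_list (map length ws)"
  obtain t0 where t0: "t0 \<le> t" "tm_run M ws t0 = tm_run M ws t" "\<forall>i<t0. fst (tm_run M ws i) \<noteq> 1"
    using tm_run_first_halt[OF t] .
  obtain tp h where halt: "tm_run M ws t0 = (1, tp, h)"
    using t t0(2) by (metis prod.collapse)
  obtain \<mu>B where B: "(macro_step M k ^^ (2 * ?n + 3 * k + 2)) \<mu>0 = \<mu>B"
    "sim_rel M (tm_init ws) \<mu>B (?n + k)" "\<mu>B 7 = []" "\<mu>B 8 = []"
    using macro_step_prepare[OF wf k init inputs] by blast
  define \<mu>C where "\<mu>C = (macro_step M k ^^ t0) \<mu>B"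
  have C: "sim_rel M (1, tp, h) \<mu>C (?n + k + 2 * t0)" "\<mu>C 7 = []" "\<mu>C 8 = []"
    using sim_rel_run[OF wf, of ws \<mu>B "?n + k" t0 t0 k] B(2-4) t0(3) halt by (simp_all add: \<mu>C_def)
  obtain m where m: "m \<le> 2 * (?n + k + 2 * t0) + 3" "(macro_step M k ^^ m) \<mu>C 0 = replicate 5 sym1"
    "(macro_step M k ^^ m) \<mu>C 8 = tm_output (tm_run M ws t)"
    using macro_step_finish[OF C, of k] halt t0(2) by auto
  have "(macro_step M k ^^ (m + (t0 + (2 * ?n + 3 * k + 2)))) \<mu>0 = (macro_step M k ^^ m) \<mu>C"
    by (simp only: \<mu>C_def B(1)[symmetric] funpow_add o_apply)
  then show ?thesis using m t0(1) by (intro exI[of _ "m + (t0 + (2 * ?n + 3 * k + 2))"]) auto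
qed

lemma macro_step_halted:
  assumes "\<mu> 0 = replicate 5 sym1" shows "(macro_step M k ^^ N) \<mu> = \<mu>"
proof (induction N)
  case (Suc N)
  then show ?case using macro_step_phase[of \<mu> 5 M k] assms by simp
qed simp

section \<open>The simulating program\<close>

lemma foldl_upd_zip_notin:
  "y \<notin> set xs \<Longrightarrow> foldl (\<lambda>\<mu> (x, w). \<mu>(x := w)) \<mu> (zip xs ws) y = \<mu> y"
proof (induction xs arbitrary: ws \<mu>)
  case (Cons x xs) then show ?case by (cases ws) auto
qed simp

lemma foldl_upd_zip_nth:
  "distinct xs \<Longrightarrow> length xs = length ws \<Longrightarrow> j < length xs \<Longrightarrow>
   foldl (\<lambda>\<mu> (x, w). \<mu>(x := w)) \<mu> (zip xs ws) (xs ! j) = ws ! j"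
proof (induction xs arbitrary: ws \<mu> j)
  case (Cons x xs)
  then obtain w ws' where ws: "ws = w # ws'" by (cases ws) auto
  show ?case
  proof (cases j)
    case 0
    have "foldl (\<lambda>\<mu> (x, w). \<mu>(x := w)) \<mu> (zip (x # xs) ws) ((x # xs) ! j) =
          foldl (\<lambda>\<mu> (x, w). \<mu>(x := w)) (\<mu>(x := w)) (zip xs ws') x"
      by (simp only: ws zip_Cons_Cons foldl_Cons prod.case 0 nth_Cons_0)
    also have "\<dots> = w" using Cons.prems by (subst foldl_upd_zip_notin) simp_all
    finally show ?thesis by (simp only: ws 0 nth_Cons_0)
  next
    case (Suc j') then show ?thesis using Cons ws by simp
  qed
qed simp

lemma init_store_input_vars:
  assumes "length ws = k"
  shows "x < 10 \<Longrightarrow> init_store (map input_var [0..<k]) ws x = ([] :: 'c::alphabet word)"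
    "j < k \<Longrightarrow> init_store (map input_var [0..<k]) ws (input_var j) = ws ! j"
proof -
  show "x < 10 \<Longrightarrow> init_store (map input_var [0..<k]) ws x = ([] :: 'c word)"
    unfolding init_store_def store_empty_def
    by (subst foldl_upd_zip_notin) (auto simp: input_var_def)
  assume j: "j < k"
  have "distinct (map input_var [0..<k])" by (simp add: distinct_map inj_on_def input_var_def)
  then have "init_store (map input_var [0..<k]) ws (map input_var [0..<k] ! j) = ws ! j"
    unfolding init_store_def using j assms by (intro foldl_upd_zip_nth) auto
  then show "init_store (map input_var [0..<k]) ws (input_var j) = ws ! j" using j by simp
qed

lemma poly_le_poly_1_mult_power: "poly p (x::nat) \<le> poly p 1 * (x + 1) ^ degree p"
proof -
  have "poly p x = (\<Sum>i\<le>degree p. coeff p i * x ^ i)" by (rule poly_altdef)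
  also have "\<dots> \<le> (\<Sum>i\<le>degree p. coeff p i * (x + 1) ^ degree p)"
  proof (rule sum_mono)
    fix i assume "i \<in> {..degree p}"
    then have "x ^ i \<le> (x + 1) ^ degree p"
      by (meson atMost_iff le_add1 order_trans power_increasing power_mono zero_le le_add2)
    then show "coeff p i * x ^ i \<le> coeff p i * (x + 1) ^ degree p" by simp
  qed
  also have "\<dots> = poly p 1 * (x + 1) ^ degree p" by (simp add: sum_distrib_right poly_altdef)
  finally show ?thesis .
qed

lemma Suc_sum_list_le_prod_list: "Suc (sum_list (map length ws)) \<le> (\<Prod>w\<leftarrow>ws. Suc (length w))"
proof (induction ws)
  case (Cons w ws)
  let ?P = "\<Prod>w\<leftarrow>ws. Suc (length w)"
  have "length w \<le> length w * ?P" using Cons by simp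
  then have "Suc (length w + sum_list (map length ws)) \<le> ?P + length w * ?P"
    using Cons by linarith
  then show ?case by simp
qed simp

lemma macro_steps_le_iterations:
  fixes m t :: nat
  assumes t: "t \<le> poly p (sum_list (map length ws))"
    and m: "m \<le> 4 * sum_list (map length ws) + 5 * length ws + 5 * t + 5"
  shows "m \<le> 5 * (length ws + poly p 1 + 2) * (\<Prod>w\<leftarrow>ws. Suc (length w)) ^ Suc (degree p)"
proof -
  let ?n = "sum_list (map length ws)" and ?k = "length ws" and ?S = "poly p 1"
  define X where "X = (?n + 1) ^ degree p"
  have X: "1 \<le> X" by (simp add: X_def)
  have tX: "t \<le> ?S * X" using t poly_le_poly_1_mult_power[of p ?n] unfolding X_def by linarith
  have "?k \<le> ?k * ((?n + 1) * X)" "?S * X \<le> ?S * ((?n + 1) * X)" "?n + 1 \<le> (?n + 1) * X"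
    using X mult_le_mono2[OF X, of "?n + 1"] by simp_all
  then have "m \<le> 5 * (?k + ?S + 2) * ((?n + 1) * X)"
    using m tX by (simp add: algebra_simps)
  also have "\<dots> = 5 * (?k + ?S + 2) * (?n + 1) ^ Suc (degree p)" by (simp add: X_def)
  also have "\<dots> \<le> 5 * (?k + ?S + 2) * (\<Prod>w\<leftarrow>ws. Suc (length w)) ^ Suc (degree p)"
    using Suc_sum_list_le_prod_list[of ws] by (intro mult_le_mono2 power_mono) auto
  finally show ?thesis .
qed

lemma loop_count_inputs:
  assumes "length ws = k" "\<And>j. j < k \<Longrightarrow> \<mu> (input_var j) = ws ! j"
  shows "loop_count input_var (concat (replicate D [0..<k])) \<mu> = (\<Prod>w\<leftarrow>ws. Suc (length w)) ^ D"
proof -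
  have "map (\<lambda>j. Suc (length (\<mu> (input_var j)))) [0..<k] = map (\<lambda>w. Suc (length w)) ws"
    using assms by (auto intro!: nth_equalityI)
  then show ?thesis
    by (induction D) (simp_all add: loop_count_def)
qed

definition count_var :: "nat \<Rightarrow> nat \<Rightarrow> var" where "count_var k l = 10 + k + 2 * l"
definition flag_var :: "nat \<Rightarrow> nat \<Rightarrow> var" where "flag_var k l = 11 + k + 2 * l"

lemma count_var_flag_var: "inj (count_var k)" "inj (flag_var k)" "count_var k l \<noteq> flag_var k l'"
  by (auto simp: count_var_def flag_var_def inj_on_def) presburger

text \<open>Each input is counted down Suc (degree p) times, so the macro step is
  repeated at least R (n + 1) ^ Suc (degree p) times for inputs of total length n,
  where R is the number of repetitions in the innermost loop; this is enough by
  macro_steps_le_iterations.\<close>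

definition sim_prog :: "'c::alphabet tm \<Rightarrow> nat \<Rightarrow> nat poly \<Rightarrow> 'c prog" where
  "sim_prog M k p = \<lparr>params = map input_var [0..<k],
     body = COUNT_LOOPS (count_var k) (flag_var k) input_var
              (concat (replicate (Suc (degree p)) [0..<k]))
              (REPEAT (5 * (k + poly p 1 + 2)) (MACRO_STEP M k)),
     ret = 8\<rparr>"

lemma params_sim_prog: "length (params (sim_prog M k p)) = k" "distinct (params (sim_prog M k p))"
  by (auto simp: sim_prog_def distinct_map inj_on_def input_var_def)

lemma safe_sim_prog:
  assumes "required_ops \<subseteq> Ops"
  shows "safe_prog Ops (sim_prog M k p)"
proof -
  let ?js = "concat (replicate (Suc (degree p)) [0..<k])"
  let ?\<Gamma> = "level_env (10 + k + 2 * length ?js)"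
  have "finite (dom ?\<Gamma>)"
    by (rule finite_subset[of _ "{..<10 + k + 2 * length ?js}"]) (auto simp: level_env_def split: if_splits)
  moreover have "stype ?\<Gamma> env_used 0 0 (body (sim_prog M k p)) 1"
    unfolding sim_prog_def prog.simps
  proof (rule stype_COUNT_LOOPS)
    fix t :: nat assume "t \<le> 1"
    show "stype ?\<Gamma> env_used t t (REPEAT (5 * (k + poly p 1 + 2)) (MACRO_STEP M k)) 1"
      using register_stmt_MACRO_STEP[of k "10 + k + 2 * length ?js" M]
      by (intro stype_REPEAT plain_stmt_stype) (simp add: register_stmt_def)
  qed (auto simp: level_env_def count_var_def flag_var_def input_var_def split: if_splits)
  ultimately show ?thesis
    unfolding safe_prog_def using safe_env_used[OF assms] by blast
qed

lemma aperiodic_sim_prog: "aperiodic (sim_prog M k p)"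
proof (rule only_count_loops_aperiodic)
  have "assigned (REPEAT R (MACRO_STEP M k)) \<inter> (range (count_var k) \<union> range (flag_var k)) = {}" for R
    using assigned_REPEAT_MACRO_STEP[of R M k] by (fastforce simp: count_var_def flag_var_def)
  then show "only_count_loops (body (sim_prog M k p))"
    unfolding sim_prog_def prog.simps
    by (intro only_count_loops_COUNT_LOOPS loop_free_REPEAT loop_free_MACRO_STEP count_var_flag_var)
qed

lemma eval_s_sim_prog:
  "\<exists>\<mu>'. eval_s \<mu> (body (sim_prog M k p)) True \<mu>' \<and> agree_off {x. 10 + k \<le> x} \<mu>'
     (((macro_step M k ^^ (5 * (k + poly p 1 + 2))) ^^
        loop_count input_var (concat (replicate (Suc (degree p)) [0..<k])) \<mu>) \<mu>)"
  (is "\<exists>\<mu>'. _ \<and> agree_off ?C \<mu>' _")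
  unfolding sim_prog_def prog.simps
proof (rule eval_s_COUNT_LOOPS)
  let ?R = "5 * (k + poly p 1 + 2)"
  show "range (count_var k) \<subseteq> ?C" "range (flag_var k) \<subseteq> ?C"
    by (auto simp: count_var_def flag_var_def)
  show "\<And>j. j \<in> set (concat (replicate (Suc (degree p)) [0..<k])) \<Longrightarrow> input_var j \<notin> ?C"
    by (auto simp: input_var_def split: if_splits)
  show "assigned (REPEAT ?R (MACRO_STEP M k)) \<inter> ?C = {}"
    using assigned_REPEAT_MACRO_STEP[of ?R M k] by fastforce
  show "\<exists>\<mu>'. eval_s \<mu> (REPEAT ?R (MACRO_STEP M k)) True \<mu>' \<and> agree_off ?C \<mu>' ((macro_step M k ^^ ?R) \<mu>)"
    for \<mu>
    using eval_s_REPEAT_MACRO_STEP agree_off_refl by blast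
  show "agree_off ?C ((macro_step M k ^^ ?R) a) ((macro_step M k ^^ ?R) b)"
    if "agree_off ?C a b" for a b
    using macro_step_agree_off that by (rule agree_off_funpow)
  show "(macro_step M k ^^ ?R) \<mu> (input_var j) = \<mu> (input_var j)" for \<mu> j
    by (rule funpow_macro_step_input_var)
qed (rule count_var_flag_var)+

lemma sim_prog_computes:
  fixes M :: "'c::alphabet tm"
  assumes wf: "tm_wf M" and k: "length ws = k"
    and t: "t \<le> poly p (sum_list (map length ws))" "fst (tm_run M ws t) = 1"
  shows "prog_computes (sim_prog M k p) ws (tm_output (tm_run M ws t))"
proof -
  let ?R = "5 * (k + poly p 1 + 2)"
  define \<mu>0 where "\<mu>0 = init_store (params (sim_prog M k p)) ws"
  have init: "\<And>x. x < 10 \<Longrightarrow> \<mu>0 x = []" and inputs: "\<And>j. j < k \<Longrightarrow> \<mu>0 (input_var j) = ws ! j"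
    using init_store_input_vars[OF k] by (auto simp: \<mu>0_def sim_prog_def)
  define N where "N = loop_count input_var (concat (replicate (Suc (degree p)) [0..<k])) \<mu>0"
  obtain \<mu>' where ev: "eval_s \<mu>0 (body (sim_prog M k p)) True \<mu>'"
    and off: "agree_off {x. 10 + k \<le> x} \<mu>' ((macro_step M k ^^ (?R * N)) \<mu>0)"
    using eval_s_sim_prog[of \<mu>0 M k p] by (auto simp: N_def funpow_mult)
  obtain m where m: "m \<le> 4 * sum_list (map length ws) + 5 * k + 5 * t + 5"
    "(macro_step M k ^^ m) \<mu>0 0 = replicate 5 sym1"
    "(macro_step M k ^^ m) \<mu>0 8 = tm_output (tm_run M ws t)"
    using macro_step_run[OF wf k init inputs t(2)] by blast
  have "N = (\<Prod>w\<leftarrow>ws. Suc (length w)) ^ Suc (degree p)"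
    unfolding N_def by (rule loop_count_inputs[OF k inputs])
  then have "m \<le> ?R * N"
    using macro_steps_le_iterations[OF t(1)] m(1) k by simp
  then have "(macro_step M k ^^ (?R * N)) \<mu>0 = (macro_step M k ^^ (?R * N - m)) ((macro_step M k ^^ m) \<mu>0)"
    by (simp add: funpow_add[symmetric, THEN fun_cong, simplified])
  also have "\<dots> = (macro_step M k ^^ m) \<mu>0"
    by (rule macro_step_halted[where \<mu>="(macro_step M k ^^ m) \<mu>0", OF m(2)])
  finally have "\<mu>' 8 = tm_output (tm_run M ws t)"
    using off m(3) by (simp add: agree_off_def)
  then show ?thesis using ev by (auto simp: prog_computes_def \<mu>0_def sim_prog_def)
qed

theorem mainTheorem1:
  fixes Ops :: "'c::alphabet operator set"
  assumes "required_ops \<subseteq> Ops"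
  shows "\<forall>k f. (k, f) \<in> FP \<longrightarrow>
           (\<exists>P :: 'c prog. length (params P) = k \<and> distinct (params P) \<and>
              safe_prog Ops P \<and> aperiodic P \<and>
              (\<forall>ws. length ws = k \<longrightarrow> prog_computes P ws (f ws)))"
proof (intro allI impI)
  fix k and f :: "'c word list \<Rightarrow> 'c word"
  assume "(k, f) \<in> FP"
  then obtain M :: "'c tm" and p :: "nat poly" where wf: "tm_wf M" and
    run: "\<And>ws. length ws = k \<Longrightarrow> \<exists>t. t \<le> poly p (sum_list (map length ws)) \<and>
           fst (tm_run M ws t) = 1 \<and> tm_output (tm_run M ws t) = f ws"
    unfolding FP_def poly_time_computable_def by auto
  have "prog_computes (sim_prog M k p) ws (f ws)" if "length ws = k" for ws
    using run[OF that] sim_prog_computes[OF wf that] by metis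
  then show "\<exists>P :: 'c prog. length (params P) = k \<and> distinct (params P) \<and>
      safe_prog Ops P \<and> aperiodic P \<and> (\<forall>ws. length ws = k \<longrightarrow> prog_computes P ws (f ws))"
    using params_sim_prog safe_sim_prog[OF assms] aperiodic_sim_prog by blast
qed

end
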